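(* Let $F$ be a vector subspace of $\mathcal B(S)$ satisfying conditions (i)–(vi) below, and assume (H1) below holds with constant $\alpha\in(0,1)$. Let $f\in\mathcal B(S^3)$ such that $Pf$ and $Pf^2$ exist and belong to $F$, and $(\mu,Pf)=0$. Then for all $\delta>0$, $r\in\mathbb N$, $n\ge1$: $$\mathbb P(|\overline M_{\mathbb G_r}(f)|>\delta)\le\begin{cases}\frac{c}{\delta^2}(1/2)^r & \alpha^2<1/2,\\ \frac{c}{\delta^2}r(1/2)^r & \alpha^2=1/2,\\ \frac{c}{\delta^2}\alpha^{2r} & \alpha^2>1/2,\end{cases}\qquad \mathbb P(|\overline M^\pi_n(f)|>\delta)\le\begin{cases}\frac{c}{\delta^2}(1/2)^{r_n+1} & \alpha^2<1/2,\\ \frac{c}{\delta^2}r_n(1/2)^{r_n+1} & \alpha^2=1/2,\\ \frac{c}{\delta^2}\alpha^{2(r_n+1)} & \alpha^2>1/2,\end{cases}$$ $$\mathbb P(|\overline M_{\mathbb T_r}(f)|>\delta)\le\begin{cases}\frac{c}{\delta^2}(1/2)^{r+1} & \alpha^2<1/2,\\ \frac{c}{\delta^2}r(1/2)^{r+1} & \alpha^2=1/2,\\ \frac{c}{\delta^2}\alpha^{2(r+1)} & \alpha^2>1/2,\end{cases}$$ where the positive constant $c$ depends on $f$ and $\alpha$ (and may differ between bounds).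
   Context: Binary tree: $\mathbb T=\mathbb N^*$, vertex $n$ having daughters $2n,2n+1$; $\mathbb G_r=\{2^r,\dots,2^{r+1}-1\}$, $\mathbb T_r=\bigcup_{q=0}^r\mathbb G_q$, $r_n=\lfloor\log_2n\rfloor$. $(S,\mathcal S)$ is a metric space with Borel $\sigma$-field; $\mathcal B(S^p)$ is the set of measurable real functions on $S^p$. A $\mathbb T$-transition probability $P$ is a Markov kernel from $S$ to $S^2$; $P_0(x,B)=P(x,B\times S)$, $P_1(x,B)=P(x,S\times B)$, $Q=(P_0+P_1)/2$; $Pf(x)=\int f(x,y,z)P(x,dy\,dz)$; for $g,h\in\mathcal B(S)$, $(g\otimes h)(y,z)=g(y)h(z)$, $P(g\otimes h)(x)=\int g(y)h(z)P(x,dy\,dz)$. $(X_n)_{n\in\mathbb T}$ is a bifurcating Markov chain with initial law $\nu$ and $\mathbb T$-transition probability $P$: with $\mathcal F_r=\sigma(X_i,i\in\mathbb T_r)$, $\mathcal L(X_1)=\nu$ and for every $r$ and every family $(f_n)_{n\in\mathbb G_r}$ of bounded measurable functions on $S^3$, $\mathbb E[\prod_{n\in\mathbb G_r}f_n(X_n,X_{2n},X_{2n+1})\mid\mathcal F_r]=\prod_{n\in\mathbb G_r}Pf_n(X_n)$. $(Y_r)$ is a Markov chain on $S$ with transition $Q$. $\Delta_i=(X_i,X_{2i},X_{2i+1})$. $\pi$ is a random permutation of $\mathbb N^*$ leaving each $\mathbb G_r$ invariant, drawn uniformly among such permutations, independently of $X$. For $f\in\mathcal B(S^3)$: $\overline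 M_{\mathbb G_r}(f)=|\mathbb G_r|^{-1}\sum_{i\in\mathbb G_r}f(\Delta_i)$, $\overline M_{\mathbb T_r}(f)=|\mathbb T_r|^{-1}\sum_{i\in\mathbb T_r}f(\Delta_i)$, $\overline M^\pi_n(f)=n^{-1}\sum_{i=1}^nf(\Delta_{\pi(i)})$. $(\mu,g)=\int gd\mu$. Conditions on $F$: (i) $F$ contains constants; (ii) $g^2\in F$ for $g\in F$; (iii) for all $x$ and $g,h\in F$, $g\otimes h\in L^1(P(x,\cdot))$ and $P(g\otimes h)\in F$; (iv) there is a probability $\mu$ on $S$ with $F\subset L^1(\mu)$ and $\lim_r\mathbb E_x[g(Y_r)]=(\mu,g)$ for all $x$, $g\in F$ (with $Y_0=x$); (v) for every $g\in F$ there is $h\in F$ with $|Q^rg|\le h$ for all $r$; (vi) $F\subset L^1(\nu)$. (H1): there is $\alpha\in(0,1)$ such that for every $g\in F$ with $(\mu,g)=0$ there is $h\in F$ with $|Q^rg(x)|\le\alpha^rh(x)$ for all $r,x$. *)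

theory Defs
  imports "HOL-Probability.Probability"
begin

definition Gen :: "nat \<Rightarrow> nat set" where
  "Gen r = {2^r ..< 2^(Suc r)}"

definition Tr :: "nat \<Rightarrow> nat set" where
  "Tr r = (\<Union>q\<le>r. Gen q)"

definition rgen :: "nat \<Rightarrow> nat" where
  "rgen n = nat \<lfloor>log 2 (real n)\<rfloor>"

text \<open>A T-transition probability P is a Markov kernel S -> S x S, modelled as
 P :: 'a => ('a x 'a) measure. Pop k x = integral of k over P(x, dy dz).\<close>

definition Pop :: "('a \<Rightarrow> ('a \<times> 'a) measure) \<Rightarrow> ('a \<times> 'a \<Rightarrow> real) \<Rightarrow> 'a \<Rightarrow> real" where
  "Pop P k x = (\<integral>p. k p \<partial>P x)"

definition P3 :: "('a \<Rightarrow> ('a \<times> 'a) measure) \<Rightarrow> ('a \<times> 'a \<times> 'a \<Rightarrow> real) \<Rightarrow> 'a \<Rightarrow> real" where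
  "P3 P f x = (\<integral>p. f (x, fst p, snd p) \<partial>P x)"

definition Qop :: "('a \<Rightarrow> ('a \<times> 'a) measure) \<Rightarrow> ('a \<Rightarrow> real) \<Rightarrow> 'a \<Rightarrow> real" where
  "Qop P g x = ((\<integral>p. g (fst p) \<partial>P x) + (\<integral>p. g (snd p) \<partial>P x)) / 2"

definition tensor :: "('a \<Rightarrow> real) \<Rightarrow> ('a \<Rightarrow> real) \<Rightarrow> 'a \<times> 'a \<Rightarrow> real" where
  "tensor g h = (\<lambda>(y, z). g y * h z)"

definition vector_subspace_B :: "('a::topological_space \<Rightarrow> real) set \<Rightarrow> bool" where
  "vector_subspace_B F \<longleftrightarrow> F \<subseteq> borel_measurable borel \<and> (\<lambda>_. 0) \<in> F \<and>
     (\<forall>g\<in>F. \<forall>h\<in>F. (\<lambda>x. g x + h x) \<in> F) \<and> (\<forall>c. \<forall>g\<in>F. (\<lambda>x. c * g x) \<in> F)"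

definition F_conditions ::
  "('a::topological_space \<Rightarrow> ('a \<times> 'a) measure) \<Rightarrow> 'a measure \<Rightarrow> 'a measure \<Rightarrow> ('a \<Rightarrow> real) set \<Rightarrow> bool" where
  "F_conditions P \<mu> \<nu> F \<longleftrightarrow>
     \<comment> \<open>(i)\<close>   (\<forall>c. (\<lambda>_. c) \<in> F) \<and>
     \<comment> \<open>(ii)\<close>  (\<forall>g\<in>F. (\<lambda>x. (g x)\<^sup>2) \<in> F) \<and>
     \<comment> \<open>(iii)\<close> (\<forall>g\<in>F. \<forall>h\<in>F. (\<forall>x. integrable (P x) (tensor g h)) \<and> Pop P (tensor g h) \<in> F) \<and>
     \<comment> \<open>(iv)\<close>  (prob_space \<mu> \<and> sets \<mu> = sets borel \<and> (\<forall>g\<in>F. integrable \<mu> g) \<and>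
               (\<forall>g\<in>F. \<forall>x. (\<lambda>r. (Qop P ^^ r) g x) \<longlonglongrightarrow> (\<integral>y. g y \<partial>\<mu>))) \<and>
     \<comment> \<open>(v)\<close>   (\<forall>g\<in>F. \<exists>h\<in>F. \<forall>r x. \<bar>(Qop P ^^ r) g x\<bar> \<le> h x) \<and>
     \<comment> \<open>(vi)\<close>  (\<forall>g\<in>F. integrable \<nu> g)"

definition H1 :: "('a \<Rightarrow> ('a \<times> 'a) measure) \<Rightarrow> 'a measure \<Rightarrow> ('a \<Rightarrow> real) set \<Rightarrow> real \<Rightarrow> bool" where
  "H1 P \<mu> F \<alpha> \<longleftrightarrow> 0 < \<alpha> \<and> \<alpha> < 1 \<and>
     (\<forall>g\<in>F. (\<integral>y. g y \<partial>\<mu>) = 0 \<longrightarrow> (\<exists>h\<in>F. \<forall>r x. \<bar>(Qop P ^^ r) g x\<bar> \<le> \<alpha> ^ r * h x))"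

definition filt :: "'b measure \<Rightarrow> (nat \<Rightarrow> 'b \<Rightarrow> 'a::topological_space) \<Rightarrow> nat \<Rightarrow> 'b measure" where
  "filt M X r = sigma (space M) (\<Union>i\<in>Tr r. {X i -` A \<inter> space M | A. A \<in> sets borel})"

definition Delta :: "(nat \<Rightarrow> 'b \<Rightarrow> 'a) \<Rightarrow> nat \<Rightarrow> 'b \<Rightarrow> 'a \<times> 'a \<times> 'a" where
  "Delta X i \<omega> = (X i \<omega>, X (2*i) \<omega>, X (2*i+1) \<omega>)"

definition bifurcating_MC ::
  "'b measure \<Rightarrow> (nat \<Rightarrow> 'b \<Rightarrow> 'a::topological_space) \<Rightarrow> 'a measure \<Rightarrow> ('a \<Rightarrow> ('a \<times> 'a) measure) \<Rightarrow> bool" where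
  "bifurcating_MC M X \<nu> P \<longleftrightarrow> prob_space M \<and>
     (\<forall>i. X i \<in> borel_measurable M) \<and>
     P \<in> borel \<rightarrow>\<^sub>M prob_algebra (borel \<Otimes>\<^sub>M borel) \<and>
     distr M borel (X 1) = \<nu> \<and>
     (\<forall>r (fs :: nat \<Rightarrow> 'a \<times> 'a \<times> 'a \<Rightarrow> real).
        (\<forall>n\<in>Gen r. fs n \<in> borel_measurable (borel \<Otimes>\<^sub>M borel \<Otimes>\<^sub>M borel) \<and> (\<exists>B. \<forall>t. \<bar>fs n t\<bar> \<le> B)) \<longrightarrow>
        (AE \<omega> in M. real_cond_exp M (filt M X r) (\<lambda>\<omega>. \<Prod>n\<in>Gen r. fs n (Delta X n \<omega>)) \<omega>
                      = (\<Prod>n\<in>Gen r. P3 P (fs n) (X n \<omega>))))"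

text \<open>pi: random permutation of N* leaving each G_r invariant, uniformly drawn
  (uniform on the finite group of such permutations of each T_R), independent of X.\<close>
definition layer_perms :: "nat \<Rightarrow> (nat \<Rightarrow> nat) set" where
  "layer_perms R = {\<sigma>. \<sigma> permutes Tr R \<and> (\<forall>q\<le>R. \<sigma> ` Gen q = Gen q)}"

definition random_layer_perm ::
  "'b measure \<Rightarrow> (nat \<Rightarrow> 'b \<Rightarrow> 'a::topological_space) \<Rightarrow> ('b \<Rightarrow> nat \<Rightarrow> nat) \<Rightarrow> bool" where
  "random_layer_perm M X \<pi> \<longleftrightarrow>
     (\<forall>\<omega>\<in>space M. \<forall>q. \<pi> \<omega> ` Gen q = Gen q) \<and>
     (\<forall>R. \<forall>\<sigma>\<in>layer_perms R.
        measure M {\<omega>\<in>space M. \<forall>i\<in>Tr R. \<pi> \<omega> i = \<sigma> i} = 1 / real (card (layer_perms R))) \<and>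
     \<pi> \<in> M \<rightarrow>\<^sub>M Pi\<^sub>M UNIV (\<lambda>_. count_space UNIV) \<and>
     (\<lambda>\<omega> i. X i \<omega>) \<in> M \<rightarrow>\<^sub>M Pi\<^sub>M UNIV (\<lambda>_. borel) \<and>
     prob_space.indep_set M
       (sigma_sets (space M) {\<pi> -` A \<inter> space M | A. A \<in> sets (Pi\<^sub>M UNIV (\<lambda>_. count_space UNIV))})
       (sigma_sets (space M) {(\<lambda>\<omega> i. X i \<omega>) -` A \<inter> space M | A. A \<in> sets (Pi\<^sub>M UNIV (\<lambda>_. borel))})"

definition MG :: "(nat \<Rightarrow> 'b \<Rightarrow> 'a) \<Rightarrow> nat \<Rightarrow> ('a \<times> 'a \<times> 'a \<Rightarrow> real) \<Rightarrow> 'b \<Rightarrow> real" where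
  "MG X r f \<omega> = (\<Sum>i\<in>Gen r. f (Delta X i \<omega>)) / real (card (Gen r))"

definition MT :: "(nat \<Rightarrow> 'b \<Rightarrow> 'a) \<Rightarrow> nat \<Rightarrow> ('a \<times> 'a \<times> 'a \<Rightarrow> real) \<Rightarrow> 'b \<Rightarrow> real" where
  "MT X r f \<omega> = (\<Sum>i\<in>Tr r. f (Delta X i \<omega>)) / real (card (Tr r))"

definition Mpi :: "(nat \<Rightarrow> 'b \<Rightarrow> 'a) \<Rightarrow> ('b \<Rightarrow> nat \<Rightarrow> nat) \<Rightarrow> nat \<Rightarrow> ('a \<times> 'a \<times> 'a \<Rightarrow> real) \<Rightarrow> 'b \<Rightarrow> real" where
  "Mpi X \<pi> n f \<omega> = (\<Sum>i\<in>{1..n}. f (Delta X (\<pi> \<omega> i) \<omega>)) / real n"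

end

theory Submission
  imports Defs
begin

(* Write S_r for the sum of f(Delta_i) over the generation G_r.  Conditionally on the vertices up to
   generation r the triples Delta_i, i in G_r, are independent with means Pf(X_i), so
     E S_r^2 = E (sum_{i in G_r} Pf(X_i))^2 + sum_{i in G_r} E [P(f^2)(X_i) - Pf(X_i)^2].
   For g in F the generation sums A_r g = sum_{i in G_r} g(X_i) satisfy E A_r g = 2^r nu(Q^r g) and
     E (A_{r+1} g)^2 = 4 E (A_r (Q g))^2 + E A_r (2 Q(g^2) + 2 P(g (x) g) - 4 (Q g)^2).
   As Pf is centred, (H1) gives |Q^k Pf| <= alpha^k h, and iterating the recursion gives
   E S_r^2 <= K 4^r rho_r with rho_r = 2^-r sum_{k<=r} (2 alpha^2)^k, whose three regimes are those of
   the theorem.  Chebyshev's inequality yields the bound for the generation mean, Cauchy-Schwarz with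
   weights sqrt 2 ^ q over the generations the bound for the tree mean.  For the permuted mean the
   generations below r_n are complete, and the remaining vertices of generation r_n are picked by a
   uniform generation-preserving permutation independent of X, which averages the second moment of
   their sum to at most E sum_{i in G_r} f(Delta_i)^2 + E S_r^2. *)

section \<open>Generations of the binary tree\<close>

lemma Gen_0: "Gen 0 = {1}"
  by (auto simp: Gen_def)

lemma finite_Gen [simp]: "finite (Gen r)"
  by (simp add: Gen_def)

lemma card_Gen: "card (Gen r) = 2 ^ r"
  by (simp add: Gen_def)

lemma Gen_Suc: "Gen (Suc r) = (\<lambda>n. 2 * n) ` Gen r \<union> (\<lambda>n. 2 * n + 1) ` Gen r"
proof (rule set_eqI)
  fix i
  show "i \<in> Gen (Suc r) \<longleftrightarrow> i \<in> (\<lambda>n. 2 * n) ` Gen r \<union> (\<lambda>n. 2 * n + 1) ` Gen r"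
  proof
    assume i: "i \<in> Gen (Suc r)"
    have "i div 2 \<in> Gen r"
      using i by (auto simp: Gen_def less_mult_imp_div_less div_le_mono2
          intro: div_greater_zero_iff[THEN iffD2])
    moreover have "i = 2 * (i div 2) \<or> i = 2 * (i div 2) + 1" by presburger
    ultimately show "i \<in> (\<lambda>n. 2 * n) ` Gen r \<union> (\<lambda>n. 2 * n + 1) ` Gen r"
      by (metis UnI1 UnI2 image_eqI)
  qed (auto simp: Gen_def)
qed

lemma sum_Gen_Suc: "(\<Sum>i\<in>Gen (Suc r). a i) = (\<Sum>n\<in>Gen r. a (2 * n) + a (2 * n + 1))"
proof -
  have disj: "(\<lambda>n. 2 * n) ` Gen r \<inter> (\<lambda>n. 2 * n + 1) ` Gen r = {}"
    by auto presburger
  have "(\<Sum>i\<in>Gen (Suc r). a i)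
      = (\<Sum>i\<in>(\<lambda>n. 2 * n) ` Gen r. a i) + (\<Sum>i\<in>(\<lambda>n. 2 * n + 1) ` Gen r. a i)"
    unfolding Gen_Suc by (rule sum.union_disjoint) (use disj in auto)
  also have "\<dots> = (\<Sum>n\<in>Gen r. a (2 * n)) + (\<Sum>n\<in>Gen r. a (2 * n + 1))"
    by (simp add: sum.reindex inj_on_def)
  finally show ?thesis
    by (simp add: sum.distrib)
qed

lemma Gen_disjoint: "p \<noteq> q \<Longrightarrow> Gen p \<inter> Gen q = {}"
proof (rule ccontr)
  assume "p \<noteq> q" and "Gen p \<inter> Gen q \<noteq> {}"
  then obtain i where "i \<in> Gen p" "i \<in> Gen q" by blast
  then have i: "2 ^ p \<le> i" "i < 2 ^ Suc p" "2 ^ q \<le> i" "i < 2 ^ Suc q"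
    by (auto simp: Gen_def)
  from \<open>p \<noteq> q\<close> consider "Suc p \<le> q" | "Suc q \<le> p" by linarith
  then show False
  proof cases
    case 1
    then have "(2::nat) ^ Suc p \<le> 2 ^ q" by (rule power_increasing) simp
    then show False using i by linarith
  next
    case 2
    then have "(2::nat) ^ Suc q \<le> 2 ^ p" by (rule power_increasing) simp
    then show False using i by linarith
  qed
qed

lemma Gen_subset_Tr: "q \<le> R \<Longrightarrow> Gen q \<subseteq> Tr R"
  unfolding Tr_def by auto

lemma finite_Tr [simp]: "finite (Tr R)"
  unfolding Tr_def by auto

lemma mem_Tr_iff: "i \<in> Tr R \<longleftrightarrow> (\<exists>q\<le>R. i \<in> Gen q)"
  unfolding Tr_def by auto

lemma UN_Gen_lessThan: "(\<Union>q<r. Gen q) = {1..<2 ^ r}"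
proof (induction r)
  case (Suc r)
  have "(\<Union>q<Suc r. Gen q) = (\<Union>q<r. Gen q) \<union> Gen r"
    by (simp add: lessThan_Suc Un_commute)
  also have "\<dots> = {1..<2 ^ r} \<union> {2 ^ r..<2 ^ Suc r}"
    using Suc.IH by (simp add: Gen_def)
  also have "\<dots> = {1..<2 ^ Suc r}"
    by (rule ivl_disj_un) auto
  finally show ?case .
qed (simp add: Gen_def)

lemma sum_UN_Gen: "finite A \<Longrightarrow> (\<Sum>i\<in>(\<Union>q\<in>A. Gen q). a i) = (\<Sum>q\<in>A. \<Sum>i\<in>Gen q. (a i :: real))"
  by (rule sum.UNION_disjoint) (auto dest: Gen_disjoint[THEN disjoint_iff_not_equal[THEN iffD1], rotated])

lemma sum_Tr: "(\<Sum>i\<in>Tr r. a i) = (\<Sum>q\<le>r. \<Sum>i\<in>Gen q. (a i :: real))"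
  unfolding Tr_def by (rule sum_UN_Gen) simp

lemma card_Tr: "card (Tr r) = 2 ^ (r + 1) - 1"
proof -
  have "Tr r = (\<Union>q<Suc r. Gen q)"
    unfolding Tr_def by (simp add: lessThan_Suc_atMost)
  then show ?thesis
    unfolding UN_Gen_lessThan by simp
qed

lemma rgen_bounds:
  assumes "1 \<le> n"
  shows "2 ^ rgen n \<le> n" "n < 2 ^ (rgen n + 1)"
proof -
  have "\<lfloor>log 2 (real n)\<rfloor> = int (rgen n)"
    using assms unfolding rgen_def by simp
  then have "(2::nat) ^ rgen n \<le> n \<and> n < 2 ^ (rgen n + 1)"
    using floor_log_nat_eq_powr_iff[of 2 n "rgen n"] assms by simp
  then show "2 ^ rgen n \<le> n" "n < 2 ^ (rgen n + 1)"
    by auto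
qed

section \<open>Permutations preserving the generations\<close>

lemma id_in_layer_perms: "id \<in> layer_perms R"
  unfolding layer_perms_def by (simp add: permutes_id)

lemma layer_perms_comp:
  assumes "\<sigma> \<in> layer_perms R" "\<rho> \<in> layer_perms R"
  shows "\<sigma> \<circ> \<rho> \<in> layer_perms R"
proof -
  have "(\<sigma> \<circ> \<rho>) ` Gen q = \<sigma> ` (\<rho> ` Gen q)" for q
    by (simp add: image_comp)
  then have "(\<sigma> \<circ> \<rho>) ` Gen q = Gen q" if "q \<le> R" for q
    using assms that unfolding layer_perms_def by simp
  moreover have "\<sigma> \<circ> \<rho> permutes Tr R"
    using assms unfolding layer_perms_def by (intro permutes_compose) auto
  ultimately show ?thesis
    unfolding layer_perms_def by simp
qed

lemma layer_perms_inv: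
  assumes "\<sigma> \<in> layer_perms R"
  shows "inv \<sigma> \<in> layer_perms R"
proof -
  have p: "\<sigma> permutes Tr R" and img: "\<And>q. q \<le> R \<Longrightarrow> \<sigma> ` Gen q = Gen q"
    using assms unfolding layer_perms_def by auto
  have "inv \<sigma> ` Gen q = Gen q" if "q \<le> R" for q
    using img[OF that] permutes_inj[OF p] by (metis image_inv_f_f)
  then show ?thesis
    using permutes_inv[OF p] unfolding layer_perms_def by auto
qed

lemma transpose_in_layer_perms:
  assumes j: "j \<in> Gen R" and k: "k \<in> Gen R"
  shows "Transposition.transpose j k \<in> layer_perms R"
proof -
  have "Transposition.transpose j k ` Gen q = Gen q" if "q \<le> R" for q
  proof (cases "q = R")
    case True
    then show ?thesis using permutes_image[OF permutes_swap_id[OF j k]] by simp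
  next
    case False
    then have "j \<notin> Gen q" "k \<notin> Gen q" using j k Gen_disjoint[of q R] by auto
    then show ?thesis by (auto simp: Transposition.transpose_def image_iff)
  qed
  moreover have "j \<in> Tr R" "k \<in> Tr R"
    using j k Gen_subset_Tr[of R R] by auto
  ultimately show ?thesis
    using permutes_swap_id[of j "Tr R" k] unfolding layer_perms_def by auto
qed

lemma finite_layer_perms: "finite (layer_perms R)"
  using finite_permutations[of "Tr R"] unfolding layer_perms_def by (auto intro: finite_subset)

lemma layer_perms_bij_Gen: "\<sigma> \<in> layer_perms R \<Longrightarrow> q \<le> R \<Longrightarrow> bij_betw \<sigma> (Gen q) (Gen q)"
  unfolding layer_perms_def bij_betw_def using permutes_inj_on by blast

lemma layer_perms_Gen_mem: "\<sigma> \<in> layer_perms r \<Longrightarrow> i \<in> Gen r \<Longrightarrow> \<sigma> i \<in> Gen r"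
  using layer_perms_bij_Gen[of \<sigma> r r] by (auto simp: bij_betw_def)

lemma sum_layer_perms_comp_right:
  assumes \<rho>: "\<rho> \<in> layer_perms R"
  shows "(\<Sum>\<sigma>\<in>layer_perms R. g (\<sigma> \<circ> \<rho>)) = (\<Sum>\<sigma>\<in>layer_perms R. (g \<sigma> :: real))"
proof (rule sum.reindex_bij_betw)
  have p: "\<rho> permutes Tr R" using \<rho> unfolding layer_perms_def by auto
  show "bij_betw (\<lambda>\<sigma>. \<sigma> \<circ> \<rho>) (layer_perms R) (layer_perms R)"
  proof (rule bij_betwI[where g="\<lambda>\<sigma>. \<sigma> \<circ> inv \<rho>"])
    show "(\<lambda>\<sigma>. \<sigma> \<circ> \<rho>) \<in> layer_perms R \<rightarrow> layer_perms R"
      using layer_perms_comp[OF _ \<rho>] by auto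
    show "(\<lambda>\<sigma>. \<sigma> \<circ> inv \<rho>) \<in> layer_perms R \<rightarrow> layer_perms R"
      using layer_perms_comp[OF _ layer_perms_inv[OF \<rho>]] by auto
  qed (simp_all add: comp_assoc permutes_inv_o[OF p])
qed

lemma layer_perms_map_pair:
  assumes "i \<in> Gen R" "i' \<in> Gen R" "k \<in> Gen R" "k' \<in> Gen R" "i \<noteq> i'" "k \<noteq> k'"
  shows "\<exists>\<rho>\<in>layer_perms R. \<rho> k = i \<and> \<rho> k' = i'"
proof -
  define t1 where "t1 = Transposition.transpose i k"
  define t2 where "t2 = Transposition.transpose (t1 k') i'"
  have t1: "t1 \<in> layer_perms R"
    unfolding t1_def by (rule transpose_in_layer_perms) (use assms in auto)
  have "t1 k' \<noteq> i"
    using assms unfolding t1_def by (auto simp: Transposition.transpose_eq_iff)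
  moreover have "t1 k' \<in> Gen R"
    using layer_perms_Gen_mem[OF t1 assms(4)] .
  then have t2: "t2 \<in> layer_perms R"
    unfolding t2_def by (rule transpose_in_layer_perms) (use assms in auto)
  ultimately have "(t2 \<circ> t1) k = i" "(t2 \<circ> t1) k' = i'"
    using assms(5) unfolding t1_def t2_def by (auto simp: Transposition.transpose_eq_iff)
  then show ?thesis
    using layer_perms_comp[OF t2 t1] by blast
qed

lemma sum_layer_perms_point:
  assumes i: "i \<in> Gen R"
  shows "real (card (Gen R)) * (\<Sum>\<sigma>\<in>layer_perms R. g (\<sigma> i))
       = real (card (layer_perms R)) * (\<Sum>j\<in>Gen R. (g j :: real))"
proof -
  have inv: "(\<Sum>\<sigma>\<in>layer_perms R. g (\<sigma> k)) = (\<Sum>\<sigma>\<in>layer_perms R. g (\<sigma> i))" if k: "k \<in> Gen R" for k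
  proof -
    have \<rho>: "Transposition.transpose i k \<in> layer_perms R"
      by (rule transpose_in_layer_perms[OF i k])
    show ?thesis
      using sum_layer_perms_comp_right[OF \<rho>, of "\<lambda>\<sigma>. g (\<sigma> k)"] by simp
  qed
  have "real (card (Gen R)) * (\<Sum>\<sigma>\<in>layer_perms R. g (\<sigma> i))
      = (\<Sum>k\<in>Gen R. \<Sum>\<sigma>\<in>layer_perms R. g (\<sigma> k))"
    using inv by simp
  also have "\<dots> = (\<Sum>\<sigma>\<in>layer_perms R. \<Sum>k\<in>Gen R. g (\<sigma> k))"
    by (rule sum.swap)
  also have "\<dots> = (\<Sum>\<sigma>\<in>layer_perms R. \<Sum>j\<in>Gen R. g j)"
    by (intro sum.cong refl sum.reindex_bij_betw layer_perms_bij_Gen) auto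
  finally show ?thesis by simp
qed

lemma sum_offdiag_reindex:
  assumes "bij_betw \<sigma> G G"
  shows "(\<Sum>k\<in>G. \<Sum>k'\<in>G - {k}. g (\<sigma> k) (\<sigma> k')) = (\<Sum>j\<in>G. \<Sum>j'\<in>G - {j}. g j j')"
proof -
  have inj: "inj_on \<sigma> G" and img: "\<sigma> ` G = G"
    using assms by (auto simp: bij_betw_def)
  have bij: "bij_betw \<sigma> (G - {k}) (G - {\<sigma> k})" if "k \<in> G" for k
  proof -
    have "\<sigma> ` (G - {k}) = G - {\<sigma> k}"
      using inj_on_image_set_diff[OF inj, of G "{k}"] that img by simp
    moreover have "inj_on \<sigma> (G - {k})"
      using inj by (rule inj_on_subset) blast
    ultimately show ?thesis
      unfolding bij_betw_def by simp
  qed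
  have "(\<Sum>k'\<in>G - {k}. g (\<sigma> k) (\<sigma> k')) = (\<Sum>j'\<in>G - {\<sigma> k}. g (\<sigma> k) j')" if "k \<in> G" for k
    by (rule sum.reindex_bij_betw[OF bij[OF that], of "g (\<sigma> k)"])
  then have "(\<Sum>k\<in>G. \<Sum>k'\<in>G - {k}. g (\<sigma> k) (\<sigma> k')) = (\<Sum>k\<in>G. \<Sum>j'\<in>G - {\<sigma> k}. g (\<sigma> k) j')"
    by simp
  also have "\<dots> = (\<Sum>j\<in>G. \<Sum>j'\<in>G - {j}. g j j')"
    using sum.reindex_bij_betw[OF assms, of "\<lambda>j. \<Sum>j'\<in>G - {j}. g j j'"] by simp
  finally show ?thesis .
qed

lemma sum_layer_perms_pair:
  assumes i: "i \<in> Gen R" "i' \<in> Gen R" "i \<noteq> i'"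
  shows "real (card (Gen R) * (card (Gen R) - 1)) * (\<Sum>\<sigma>\<in>layer_perms R. g (\<sigma> i) (\<sigma> i'))
       = real (card (layer_perms R)) * (\<Sum>j\<in>Gen R. \<Sum>j'\<in>Gen R - {j}. (g j j' :: real))"
proof -
  have inv: "(\<Sum>\<sigma>\<in>layer_perms R. g (\<sigma> k) (\<sigma> k')) = (\<Sum>\<sigma>\<in>layer_perms R. g (\<sigma> i) (\<sigma> i'))"
    if k: "k \<in> Gen R" "k' \<in> Gen R" "k \<noteq> k'" for k k'
  proof -
    obtain \<rho> where \<rho>: "\<rho> \<in> layer_perms R" "\<rho> k = i" "\<rho> k' = i'"
      using layer_perms_map_pair[OF i(1,2) k(1,2) i(3) k(3)] by blast
    show ?thesis
      using sum_layer_perms_comp_right[OF \<rho>(1), of "\<lambda>\<sigma>. g (\<sigma> k) (\<sigma> k')"] \<rho>(2,3) by simp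
  qed
  have "real (card (Gen R) * (card (Gen R) - 1)) * (\<Sum>\<sigma>\<in>layer_perms R. g (\<sigma> i) (\<sigma> i'))
      = (\<Sum>k\<in>Gen R. \<Sum>k'\<in>Gen R - {k}. \<Sum>\<sigma>\<in>layer_perms R. g (\<sigma> k) (\<sigma> k'))"
    using inv by (simp add: card_Diff_singleton)
  also have "\<dots> = (\<Sum>\<sigma>\<in>layer_perms R. \<Sum>k\<in>Gen R. \<Sum>k'\<in>Gen R - {k}. g (\<sigma> k) (\<sigma> k'))"
    by (simp add: sum.swap[of _ "layer_perms R"])
  also have "\<dots> = (\<Sum>\<sigma>\<in>layer_perms R. \<Sum>j\<in>Gen R. \<Sum>j'\<in>Gen R - {j}. g j j')"
    by (intro sum.cong refl sum_offdiag_reindex layer_perms_bij_Gen) auto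
  finally show ?thesis by simp
qed


lemma card_layer_perms_pos: "0 < card (layer_perms R)"
  using id_in_layer_perms finite_layer_perms by (auto simp: card_gt_0_iff)

lemma average_layer_perms_point:
  assumes "i \<in> Gen R"
  shows "(\<Sum>\<sigma>\<in>layer_perms R. g (\<sigma> i)) / real (card (layer_perms R))
       = (\<Sum>j\<in>Gen R. (g j :: real)) / real (card (Gen R))"
  using sum_layer_perms_point[OF assms, of g] card_layer_perms_pos[of R]
  by (simp add: card_Gen field_simps)

lemma average_layer_perms_pair:
  assumes "i \<in> Gen R" "i' \<in> Gen R" "i \<noteq> i'"
  defines "N \<equiv> real (card (Gen R))"
  shows "(\<Sum>\<sigma>\<in>layer_perms R. g (\<sigma> i) (\<sigma> i')) / real (card (layer_perms R))
       = (\<Sum>j\<in>Gen R. \<Sum>j'\<in>Gen R - {j}. (g j j' :: real)) / (N * (N - 1))"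
proof -
  have "card {i, i'} \<le> card (Gen R)"
    using assms(1,2) by (intro card_mono) auto
  then have "2 \<le> N"
    using assms(3) unfolding N_def by simp
  moreover have "real (card (Gen R) * (card (Gen R) - 1)) = N * (N - 1)"
    using \<open>2 \<le> N\<close> unfolding N_def by (simp add: of_nat_diff)
  then have "N * (N - 1) * (\<Sum>\<sigma>\<in>layer_perms R. g (\<sigma> i) (\<sigma> i'))
      = real (card (layer_perms R)) * (\<Sum>j\<in>Gen R. \<Sum>j'\<in>Gen R - {j}. g j j')"
    using sum_layer_perms_pair[OF assms(1-3), of g] by simp
  ultimately show ?thesis
    using card_layer_perms_pos[of R] by (simp add: field_simps)
qed

lemma layer_perms_average_eq:
  fixes c :: "nat \<Rightarrow> nat \<Rightarrow> real"
  assumes I: "I \<subseteq> Gen r"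
  defines "N \<equiv> real (card (Gen r))"
  shows "(\<Sum>\<sigma>\<in>layer_perms r. \<Sum>i\<in>I. \<Sum>i'\<in>I. c (\<sigma> i) (\<sigma> i')) / real (card (layer_perms r))
       = card I * ((\<Sum>j\<in>Gen r. c j j) / N)
         + card I * (real (card I) - 1) * ((\<Sum>j\<in>Gen r. \<Sum>j'\<in>Gen r - {j}. c j j') / (N * (N - 1)))"
    (is "_ = _ * (?D / N) + _ * (?O / (N * (N - 1)))")
proof -
  define L where "L = real (card (layer_perms r))"
  have finI: "finite I"
    using I by (rule finite_subset) simp
  have row: "(\<Sum>i'\<in>I. (\<Sum>\<sigma>\<in>layer_perms r. c (\<sigma> i) (\<sigma> i')) / L)
      = ?D / N + (real (card I) - 1) * (?O / (N * (N - 1)))" if i: "i \<in> I" for i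
  proof -
    have "(\<Sum>i'\<in>I. (\<Sum>\<sigma>\<in>layer_perms r. c (\<sigma> i) (\<sigma> i')) / L)
        = (\<Sum>\<sigma>\<in>layer_perms r. c (\<sigma> i) (\<sigma> i)) / L
          + (\<Sum>i'\<in>I - {i}. (\<Sum>\<sigma>\<in>layer_perms r. c (\<sigma> i) (\<sigma> i')) / L)"
      using i finI by (simp add: sum.remove)
    also have "\<dots> = ?D / N + (\<Sum>i'\<in>I - {i}. ?O / (N * (N - 1)))"
    proof -
      have "(\<Sum>\<sigma>\<in>layer_perms r. c (\<sigma> i) (\<sigma> i)) / L = ?D / N"
        using i I average_layer_perms_point[of i r "\<lambda>j. c j j"] unfolding L_def N_def by auto
      moreover have "(\<Sum>\<sigma>\<in>layer_perms r. c (\<sigma> i) (\<sigma> i')) / L = ?O / (N * (N - 1))" if "i' \<in> I - {i}" for i'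
        using i I that average_layer_perms_pair[of i r i' c] unfolding L_def N_def by auto
      ultimately show ?thesis
        by simp
    qed
    also have "\<dots> = ?D / N + (real (card I) - 1) * (?O / (N * (N - 1)))"
    proof -
      have "1 \<le> card I"
        using i finI by (auto simp: Suc_le_eq card_gt_0_iff)
      then show ?thesis
        using i finI by (simp add: of_nat_diff)
    qed
    finally show ?thesis .
  qed
  have "(\<Sum>\<sigma>\<in>layer_perms r. \<Sum>i\<in>I. \<Sum>i'\<in>I. c (\<sigma> i) (\<sigma> i')) / L
      = (\<Sum>i\<in>I. \<Sum>i'\<in>I. (\<Sum>\<sigma>\<in>layer_perms r. c (\<sigma> i) (\<sigma> i')) / L)"
    unfolding sum_divide_distrib
    by (subst sum.swap, rule sum.cong[OF refl], rule sum.swap)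
  also have "\<dots> = (\<Sum>i\<in>I. ?D / N + (real (card I) - 1) * (?O / (N * (N - 1))))"
    using row by simp
  finally show ?thesis
    unfolding L_def by (simp add: distrib_left mult.assoc)
qed

text \<open>Only the diagonal and the full double sum need to be nonnegative: the first averages to at most
  the diagonal because \<open>card I \<le> card (Gen r)\<close>, the off-diagonal part either is nonpositive or is
  dominated by its value at \<open>I = Gen r\<close>.\<close>

lemma layer_perms_average_le:
  fixes c :: "nat \<Rightarrow> nat \<Rightarrow> real"
  assumes I: "I \<subseteq> Gen r"
    and diag: "0 \<le> (\<Sum>j\<in>Gen r. c j j)"
    and total: "0 \<le> (\<Sum>j\<in>Gen r. \<Sum>j'\<in>Gen r. c j j')"
  shows "(\<Sum>\<sigma>\<in>layer_perms r. \<Sum>i\<in>I. \<Sum>i'\<in>I. c (\<sigma> i) (\<sigma> i')) / real (card (layer_perms r))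
       \<le> (\<Sum>j\<in>Gen r. c j j) + (\<Sum>j\<in>Gen r. \<Sum>j'\<in>Gen r. c j j')"
proof -
  define N where "N = real (card (Gen r))"
  define m where "m = real (card I)"
  define D where "D = (\<Sum>j\<in>Gen r. c j j)"
  define Off where "Off = (\<Sum>j\<in>Gen r. \<Sum>j'\<in>Gen r - {j}. c j j')"
  have N: "1 \<le> N" unfolding N_def card_Gen by simp
  have mN: "m \<le> N" "0 \<le> m"
    unfolding m_def N_def using I by (auto intro: card_mono)
  have total_eq: "(\<Sum>j\<in>Gen r. \<Sum>j'\<in>Gen r. c j j') = D + Off"
    unfolding D_def Off_def by (simp add: sum.remove[of "Gen r"] sum.distrib)
  have "m * (D / N) \<le> D"
    using mN N diag unfolding D_def by (simp add: field_simps mult_right_mono)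
  moreover have "m * (m - 1) * (Off / (N * (N - 1))) \<le> D + Off"
  proof (cases "0 \<le> Off")
    case True
    have "m * (m - 1) \<le> N * (N - 1)"
    proof (cases "1 \<le> m")
      case False
      then have "m * (m - 1) \<le> 0"
        using mN by (intro mult_nonneg_nonpos) auto
      also have "0 \<le> N * (N - 1)"
        using N by simp
      finally show ?thesis .
    qed (use mN in \<open>auto intro: mult_mono\<close>)
    moreover have "0 \<le> N * (N - 1)"
      using N by simp
    ultimately have "m * (m - 1) / (N * (N - 1)) \<le> 1"
      by (cases "N * (N - 1) = 0") (simp_all add: divide_le_eq_1 order.strict_iff_order)
    then have "m * (m - 1) * (Off / (N * (N - 1))) \<le> Off"
      using mult_right_mono[OF _ True] by fastforce
    then show ?thesis using diag unfolding D_def by simp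
  next
    case False
    have "0 \<le> m * (m - 1)"
      unfolding m_def by (cases "card I") auto
    moreover have "0 \<le> N * (N - 1)"
      unfolding N_def by (cases "card (Gen r)") auto
    ultimately have "m * (m - 1) * (Off / (N * (N - 1))) \<le> 0"
      using False by (intro mult_nonneg_nonpos divide_nonpos_nonneg) auto
    then show ?thesis using total total_eq by linarith
  qed
  ultimately show ?thesis
    unfolding layer_perms_average_eq[OF I] total_eq
    by (simp add: N_def m_def D_def Off_def)
qed

section \<open>The variance rates\<close>

fun rho :: "real \<Rightarrow> nat \<Rightarrow> real" where
  "rho a 0 = 1"
| "rho a (Suc r) = (1/2) ^ Suc r + a\<^sup>2 * rho a r"

lemma rho_closed_form: "rho a r = (1/2) ^ r * (\<Sum>k\<le>r. (2 * a\<^sup>2) ^ k)"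
proof (induction r)
  case (Suc r)
  have geom: "(\<Sum>k\<le>Suc r. b ^ k) = 1 + b * (\<Sum>k\<le>r. b ^ k)" for b :: real
    unfolding sum.atMost_Suc_shift power_Suc sum_distrib_left by simp
  show ?case
    unfolding rho.simps Suc geom by (simp add: algebra_simps)
qed simp

lemma four_pow_rho: "4 ^ r * rho a r = 2 ^ r * (\<Sum>k\<le>r. (2 * a\<^sup>2) ^ k)"
proof -
  have "(4::real) ^ r * (1/2) ^ r = 2 ^ r"
    by (simp flip: power_mult_distrib)
  then show ?thesis
    unfolding rho_closed_form by (simp add: mult.assoc[symmetric])
qed

lemma half_pow_le_rho: "(1/2) ^ r \<le> rho a r"
proof (induction r)
  case (Suc r)
  then have "0 \<le> rho a r"
    by (rule order.trans[rotated]) simp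
  then show ?case by simp
qed simp

lemma rho_nonneg: "0 \<le> rho a r"
  using half_pow_le_rho[of r a] by (rule order.trans[rotated]) simp

lemma two_pow_le_four_pow_rho: "(2::real) ^ r \<le> 4 ^ r * rho a r"
proof -
  have "(2::real) ^ r = 4 ^ r * (1/2) ^ r"
    by (simp flip: power_mult_distrib)
  also have "\<dots> \<le> 4 ^ r * rho a r"
    by (intro mult_left_mono half_pow_le_rho) simp
  finally show ?thesis .
qed

definition rate_gen :: "real \<Rightarrow> nat \<Rightarrow> real" where
  "rate_gen a r =
     (if a\<^sup>2 < 1/2 then (1/2) ^ r else if a\<^sup>2 = 1/2 then real r * (1/2) ^ r else a ^ (2*r))"

definition rate_tree :: "real \<Rightarrow> nat \<Rightarrow> real" where
  "rate_tree a r =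
     (if a\<^sup>2 < 1/2 then (1/2) ^ (r + 1) else if a\<^sup>2 = 1/2 then real r * (1/2) ^ (r + 1)
      else a ^ (2*(r + 1)))"

lemma rate_gen_nonneg: "0 \<le> a \<Longrightarrow> 0 \<le> rate_gen a r"
  unfolding rate_gen_def by auto

lemma rate_tree_nonneg: "0 \<le> a \<Longrightarrow> 0 \<le> rate_tree a r"
  unfolding rate_tree_def by auto

lemma rho_le_rate_gen:
  assumes a: "0 < a"
  obtains C where "C > 0" "\<And>r. (a\<^sup>2 = 1/2 \<longrightarrow> r \<ge> 1) \<Longrightarrow> rho a r \<le> C * rate_gen a r"
proof -
  define b where "b = 2 * a\<^sup>2"
  have b0: "0 < b" unfolding b_def using a by simp
  consider "a\<^sup>2 < 1/2" | "a\<^sup>2 = 1/2" | "a\<^sup>2 > 1/2" by linarith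
  then show ?thesis
  proof cases
    case 1
    then have b1: "b < 1" unfolding b_def by simp
    show ?thesis
    proof (rule that[of "1 / (1 - b)"])
      fix r
      have "(\<Sum>k\<le>r. b ^ k) \<le> 1 / (1 - b)"
        using geometric_sum_less[OF b0 b1, of "{..r}"] by simp
      then have "rho a r \<le> (1/2) ^ r * (1 / (1 - b))"
        unfolding rho_closed_form b_def[symmetric] by (rule mult_left_mono) simp
      then show "rho a r \<le> 1 / (1 - b) * rate_gen a r"
        unfolding rate_gen_def using 1 by simp
    qed (use b1 in simp)
  next
    case 2
    show ?thesis
    proof (rule that[of 2])
      fix r :: nat
      assume "a\<^sup>2 = 1/2 \<longrightarrow> r \<ge> 1"
      with 2 have r: "r \<ge> 1" by simp
      have "2 * a\<^sup>2 = 1" using 2 by simp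
      then have "rho a r = (real r + 1) * (1/2) ^ r"
        unfolding rho_closed_form by simp
      also have "\<dots> \<le> (2 * real r) * (1/2) ^ r"
        using r by (intro mult_right_mono) auto
      finally show "rho a r \<le> 2 * rate_gen a r"
        unfolding rate_gen_def using 2 by simp
    qed simp
  next
    case 3
    then have b1: "b > 1" unfolding b_def by simp
    show ?thesis
    proof (rule that[of "b / (b - 1)"])
      fix r
      have "(\<Sum>k\<le>r. b ^ k) = (b ^ Suc r - 1) / (b - 1)"
        using geometric_sum[of b "Suc r"] b1 by (simp add: lessThan_Suc_atMost)
      also have "\<dots> \<le> b ^ Suc r / (b - 1)"
        using b1 by (intro divide_right_mono) auto
      finally have "rho a r \<le> (1/2) ^ r * (b ^ Suc r / (b - 1))"
        unfolding rho_closed_form b_def[symmetric] by (rule mult_left_mono) simp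
      also have "\<dots> = b / (b - 1) * ((1/2) ^ r * b ^ r)"
        by (simp add: field_simps)
      also have "(1/2) ^ r * b ^ r = a ^ (2 * r)"
        unfolding b_def power_mult_distrib[symmetric] by (simp add: power_mult)
      finally show "rho a r \<le> b / (b - 1) * rate_gen a r"
        unfolding rate_gen_def using 3 by simp
    qed (use b1 in simp)
  qed
qed

lemma rate_gen_le_rate_tree:
  assumes a: "0 < a"
  shows "rate_gen a r \<le> max 2 (1 / a\<^sup>2) * rate_tree a r"
proof -
  have "rate_gen a r = (if a\<^sup>2 \<le> 1/2 then 2 else 1 / a\<^sup>2) * rate_tree a r"
    unfolding rate_gen_def rate_tree_def using a
    by (auto simp: power_add power_mult field_simps power2_eq_square)
  also have "\<dots> \<le> max 2 (1 / a\<^sup>2) * rate_tree a r"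
    by (intro mult_right_mono rate_tree_nonneg) (use a in auto)
  finally show ?thesis .
qed

lemma rho_le_rate_tree:
  assumes a: "0 < a"
  obtains C where "C > 0" "\<And>r. (a\<^sup>2 = 1/2 \<longrightarrow> r \<ge> 1) \<Longrightarrow> rho a r \<le> C * rate_tree a r"
proof -
  obtain C where C: "C > 0" "\<And>r. (a\<^sup>2 = 1/2 \<longrightarrow> r \<ge> 1) \<Longrightarrow> rho a r \<le> C * rate_gen a r"
    using rho_le_rate_gen[OF a] by blast
  have "rho a r \<le> (C * max 2 (1 / a\<^sup>2)) * rate_tree a r" if "a\<^sup>2 = 1/2 \<longrightarrow> r \<ge> 1" for r
    using order_trans[OF C(2)[OF that] mult_left_mono[OF rate_gen_le_rate_tree[OF a] less_imp_le[OF C(1)]]]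
    by (simp add: mult.assoc)
  moreover have "C * max 2 (1 / a\<^sup>2) > 0"
    using C(1) by (auto simp: less_max_iff_disj)
  ultimately show ?thesis using that by blast
qed

lemma divide_rate_bound:
  fixes p B v \<delta> C t :: real
  assumes "p \<le> B * v / \<delta>\<^sup>2" "v \<le> C * t" "0 \<le> B" "0 \<le> t"
  shows "p \<le> (B * C + 1) / \<delta>\<^sup>2 * t"
proof -
  have "B * v \<le> (B * C + 1) * t"
    using mult_left_mono[OF assms(2,3)] assms(4) by (simp add: algebra_simps)
  then show ?thesis
    using assms(1) by (simp add: divide_right_mono order_trans)
qed

lemma Cauchy_Schwarz_geometric_weights:
  fixes S :: "nat \<Rightarrow> real" and u :: real
  assumes u: "0 < u"
  shows "(\<Sum>q\<le>r. S q)\<^sup>2 \<le> (\<Sum>q\<le>r. u ^ q) * (\<Sum>q\<le>r. (S q)\<^sup>2 / u ^ q)"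
proof -
  have "(\<Sum>q\<le>r. S q)\<^sup>2 = (\<Sum>q\<le>r. sqrt (u ^ q) * (S q / sqrt (u ^ q)))\<^sup>2"
    using u by (intro arg_cong[where f="\<lambda>x. x\<^sup>2"] sum.cong) auto
  also have "\<dots> \<le> (\<Sum>q\<le>r. (sqrt (u ^ q))\<^sup>2) * (\<Sum>q\<le>r. (S q / sqrt (u ^ q))\<^sup>2)"
    by (rule Cauchy_Schwarz_ineq_sum)
  also have "\<dots> = (\<Sum>q\<le>r. u ^ q) * (\<Sum>q\<le>r. (S q)\<^sup>2 / u ^ q)"
    using u by (simp add: power_divide)
  finally show ?thesis .
qed

lemma geometric_weights_rho_bound:
  assumes x: "\<And>q. q \<le> r \<Longrightarrow> x q \<le> K * 4 ^ q * rho a q" and K: "0 \<le> K"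
  shows "(\<Sum>q\<le>r. sqrt 2 ^ q) * (\<Sum>q\<le>r. x q / sqrt 2 ^ q)
       \<le> 2 / (sqrt 2 - 1)\<^sup>2 * K * 4 ^ r * rho a r"
proof -
  define u :: real where "u = sqrt 2"
  have u: "0 < u" "1 < u" "u\<^sup>2 = 2"
    unfolding u_def by auto
  define W where "W = (\<Sum>q\<le>r. u ^ q)"
  define G where "G = (\<Sum>k\<le>r. (2 * a\<^sup>2) ^ k)"
  have W0: "0 \<le> W"
    unfolding W_def using u by (auto intro: sum_nonneg)
  have G0: "0 \<le> G"
    unfolding G_def by (intro sum_nonneg) simp
  have "x q / u ^ q \<le> K * G * u ^ q" if q: "q \<le> r" for q
  proof -
    have "4 ^ q * rho a q \<le> 2 ^ q * G"
      unfolding four_pow_rho G_def using q by (intro mult_left_mono sum_mono2) auto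
    then have "x q \<le> K * (2 ^ q * G)"
      using x[OF q] K by (metis mult.assoc mult_left_mono order_trans)
    moreover have "(2::real) ^ q = u ^ q * u ^ q"
      using u(3) by (simp add: power_mult_distrib[symmetric] power2_eq_square)
    ultimately show ?thesis
      using u by (simp add: field_simps)
  qed
  then have "W * (\<Sum>q\<le>r. x q / u ^ q) \<le> W * (\<Sum>q\<le>r. K * G * u ^ q)"
    by (intro mult_left_mono[OF _ W0] sum_mono) auto
  also have "\<dots> = K * G * W\<^sup>2"
    unfolding W_def by (simp add: sum_distrib_left power2_eq_square algebra_simps)
  also have "\<dots> \<le> K * G * (2 ^ Suc r / (u - 1)\<^sup>2)"
  proof (intro mult_left_mono)
    have "W = (u ^ Suc r - 1) / (u - 1)"
      unfolding W_def using geometric_sum[of u "Suc r"] u by (simp add: lessThan_Suc_atMost)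
    also have "\<dots> \<le> u ^ Suc r / (u - 1)"
      using u by (intro divide_right_mono) auto
    finally have "W\<^sup>2 \<le> (u ^ Suc r / (u - 1))\<^sup>2"
      using W0 by (intro power_mono) auto
    also have "(u ^ Suc r)\<^sup>2 = (u\<^sup>2) ^ Suc r"
      by (simp only: power_mult[symmetric] mult.commute)
    then have "(u ^ Suc r / (u - 1))\<^sup>2 = 2 ^ Suc r / (u - 1)\<^sup>2"
      by (simp add: power_divide u(3))
    finally show "W\<^sup>2 \<le> 2 ^ Suc r / (u - 1)\<^sup>2" .
  qed (use K G0 in auto)
  also have "\<dots> = 2 / (sqrt 2 - 1)\<^sup>2 * K * (4 ^ r * rho a r)"
    unfolding four_pow_rho G_def u_def by (simp add: field_simps)
  finally show ?thesis
    unfolding W_def u_def by (simp add: mult.assoc)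
qed

context prob_space
begin

lemma prob_abs_div_gt_le:
  assumes [measurable]: "Z \<in> borel_measurable M" and Z2: "integrable M (\<lambda>\<omega>. (Z \<omega>)\<^sup>2)"
    and V: "(\<integral>\<omega>. (Z \<omega>)\<^sup>2 \<partial>M) \<le> B * 4 ^ r * v" and "0 \<le> B" "0 \<le> v"
    and N: "2 ^ r \<le> N" and \<delta>: "0 < \<delta>"
  shows "prob {\<omega>\<in>space M. \<bar>Z \<omega> / N\<bar> > \<delta>} \<le> B * v / \<delta>\<^sup>2"
proof -
  have N0: "0 < N"
    using N by (rule order.strict_trans2[rotated]) simp
  have "prob {\<omega>\<in>space M. \<bar>Z \<omega> / N\<bar> > \<delta>} \<le> prob {\<omega>\<in>space M. \<bar>Z \<omega>\<bar> \<ge> \<delta> * N}"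
    using N0 by (intro finite_measure_mono) (auto simp: abs_divide field_simps)
  also have "\<dots> \<le> (\<integral>\<omega>. (Z \<omega>)\<^sup>2 \<partial>M) / (\<delta> * N)\<^sup>2"
    using second_moment_method[OF _ Z2, of "\<delta> * N"] \<delta> N0 by simp
  also have "\<dots> \<le> B * 4 ^ r * v / (\<delta> * 2 ^ r)\<^sup>2"
    using V \<delta> N assms(4,5) by (intro frac_le power_mono mult_left_mono mult_nonneg_nonneg) auto
  also have "\<dots> = B * v / \<delta>\<^sup>2"
  proof -
    have "(4::real) ^ r = 2 ^ r * 2 ^ r"
      by (simp flip: power_mult_distrib)
    then show ?thesis
      using \<delta> by (simp add: power_mult_distrib power2_eq_square field_simps)
  qed
  finally show ?thesis .
qed

lemma second_moment_sum_generations: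
  fixes S :: "nat \<Rightarrow> 'a \<Rightarrow> real"
  assumes [measurable]: "\<And>q. S q \<in> borel_measurable M"
    and S2: "\<And>q. integrable M (\<lambda>\<omega>. (S q \<omega>)\<^sup>2)"
    and V: "\<And>q. (\<integral>\<omega>. (S q \<omega>)\<^sup>2 \<partial>M) \<le> K * 4 ^ q * rho a q" and K: "0 \<le> K"
  shows "integrable M (\<lambda>\<omega>. (\<Sum>q\<le>r. S q \<omega>)\<^sup>2)"
    and "(\<integral>\<omega>. (\<Sum>q\<le>r. S q \<omega>)\<^sup>2 \<partial>M) \<le> 2 / (sqrt 2 - 1)\<^sup>2 * K * 4 ^ r * rho a r"
proof -
  define W where "W = (\<Sum>q\<le>r. sqrt 2 ^ q)"
  define T where "T = (\<lambda>\<omega>. W * (\<Sum>q\<le>r. (S q \<omega>)\<^sup>2 / sqrt 2 ^ q))"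
  have pt: "(\<Sum>q\<le>r. S q \<omega>)\<^sup>2 \<le> T \<omega>" for \<omega>
    unfolding T_def W_def by (rule Cauchy_Schwarz_geometric_weights) simp
  have T: "integrable M T"
    unfolding T_def using S2 by auto
  show int: "integrable M (\<lambda>\<omega>. (\<Sum>q\<le>r. S q \<omega>)\<^sup>2)"
    by (rule Bochner_Integration.integrable_bound[OF T]) (use pt in \<open>auto intro!: AE_I2 order.trans[OF _ abs_ge_self]\<close>)
  have "(\<integral>\<omega>. (\<Sum>q\<le>r. S q \<omega>)\<^sup>2 \<partial>M) \<le> integral\<^sup>L M T"
    by (rule integral_mono[OF int T pt])
  also have "\<dots> = W * (\<Sum>q\<le>r. (\<integral>\<omega>. (S q \<omega>)\<^sup>2 \<partial>M) / sqrt 2 ^ q)"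
    unfolding T_def using S2 by (simp add: Bochner_Integration.integral_sum)
  also have "\<dots> \<le> 2 / (sqrt 2 - 1)\<^sup>2 * K * 4 ^ r * rho a r"
    unfolding W_def by (rule geometric_weights_rho_bound[OF V K])
  finally show "(\<integral>\<omega>. (\<Sum>q\<le>r. S q \<omega>)\<^sup>2 \<partial>M) \<le> 2 / (sqrt 2 - 1)\<^sup>2 * K * 4 ^ r * rho a r" .
qed

end

section \<open>Conditioning on a generation\<close>

lemma P3_measurable:
  assumes f[measurable]: "f \<in> borel_measurable (borel \<Otimes>\<^sub>M borel \<Otimes>\<^sub>M borel)"
    and P: "P \<in> borel \<rightarrow>\<^sub>M prob_algebra (borel \<Otimes>\<^sub>M borel)"
  shows "P3 P f \<in> borel_measurable borel"
proof -
  have [measurable]: "P \<in> borel \<rightarrow>\<^sub>M subprob_algebra (borel \<Otimes>\<^sub>M borel)"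
    using measurable_prob_algebraD[OF P] .
  have sets_P: "sets (P x) = sets (borel \<Otimes>\<^sub>M borel)" for x
    using measurable_space[OF P, of x] by (auto simp: space_prob_algebra)
  have nn: "(\<lambda>x. \<integral>\<^sup>+p. ennreal (g (x, fst p, snd p)) \<partial>P x) \<in> borel_measurable borel"
    if [measurable]: "g \<in> borel_measurable (borel \<Otimes>\<^sub>M borel \<Otimes>\<^sub>M borel)" for g :: "_ \<Rightarrow> real"
    by (rule nn_integral_measurable_subprob_algebra2[where N="borel \<Otimes>\<^sub>M borel"]) measurable
  have eq: "P3 P f x = (if (\<integral>\<^sup>+p. ennreal (norm (f (x, fst p, snd p))) \<partial>P x) < \<infinity>
      then enn2real (\<integral>\<^sup>+p. ennreal (f (x, fst p, snd p)) \<partial>P x)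
         - enn2real (\<integral>\<^sup>+p. ennreal (- f (x, fst p, snd p)) \<partial>P x) else 0)" for x
  proof -
    have "(\<lambda>p. f (x, fst p, snd p)) \<in> borel_measurable (P x)"
      using measurable_cong_sets[OF sets_P refl] by measurable
    then show ?thesis
      unfolding P3_def
      by (auto simp: integrable_iff_bounded real_lebesgue_integral_def not_integrable_integral_eq)
  qed
  have [measurable]: "(\<lambda>x. \<integral>\<^sup>+p. ennreal (norm (f (x, fst p, snd p))) \<partial>P x) \<in> borel_measurable borel"
    "(\<lambda>x. \<integral>\<^sup>+p. ennreal (f (x, fst p, snd p)) \<partial>P x) \<in> borel_measurable borel"
    "(\<lambda>x. \<integral>\<^sup>+p. ennreal (- f (x, fst p, snd p)) \<partial>P x) \<in> borel_measurable borel"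
    using nn[of "\<lambda>t. norm (f t)"] nn[of f] nn[of "\<lambda>t. - f t"] by simp_all
  show ?thesis
    unfolding eq[abs_def] by measurable
qed

definition Pnn :: "('a \<Rightarrow> ('a \<times> 'a) measure) \<Rightarrow> ('a \<times> 'a \<times> 'a \<Rightarrow> real) \<Rightarrow> 'a \<Rightarrow> ennreal" where
  "Pnn P f x = (\<integral>\<^sup>+p. ennreal (f (x, fst p, snd p)) \<partial>P x)"

lemma SUP_ennreal_min_of_nat: "(SUP k::nat. ennreal (min (a::real) (real k))) = ennreal a"
proof (rule antisym)
  show "(SUP k::nat. ennreal (min a (real k))) \<le> ennreal a"
    by (rule SUP_least) (simp add: ennreal_leI)
  obtain k :: nat where "a \<le> real k"
    using real_arch_simple by blast
  then have "ennreal a = ennreal (min a (real k))" by simp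
  also have "\<dots> \<le> (SUP k::nat. ennreal (min a (real k)))"
    by (rule SUP_upper) simp
  finally show "ennreal a \<le> (SUP k::nat. ennreal (min a (real k)))" .
qed

lemma prod_two_points:
  assumes "finite G" "n \<in> G" "m \<in> G"
  shows "(\<Prod>k\<in>G. if k = n then a else if k = m then b else (1::real)) = a * (if m = n then 1 else b)"
proof -
  have "(\<Prod>k\<in>G - {n}. if k = n then a else if k = m then b else (1::real))
      = (\<Prod>k\<in>G - {n}. if k = m then b else 1)"
    by (rule prod.cong) auto
  then show ?thesis
    using assms by (simp add: prod.remove[of _ n] prod.delta)
qed

lemma integrable_and_integral_eq_of_nn_integral_eq:
  fixes u v :: "'a \<Rightarrow> real"
  assumes [measurable]: "u \<in> borel_measurable M"
    and u: "\<And>\<omega>. 0 \<le> u \<omega>" and v: "\<And>\<omega>. 0 \<le> v \<omega>" and iv: "integrable M v"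
    and eq: "(\<integral>\<^sup>+\<omega>. ennreal (u \<omega>) \<partial>M) = (\<integral>\<^sup>+\<omega>. ennreal (v \<omega>) \<partial>M)"
  shows "integrable M u" "integral\<^sup>L M u = integral\<^sup>L M v"
proof -
  have e: "(\<integral>\<^sup>+\<omega>. ennreal (u \<omega>) \<partial>M) = ennreal (integral\<^sup>L M v)"
    using eq nn_integral_eq_integral[OF iv] v by simp
  show iu: "integrable M u"
    by (rule integrableI_nonneg) (use u e in auto)
  show "integral\<^sup>L M u = integral\<^sup>L M v"
    using nn_integral_eq_integral[OF iu] e u v
    by (simp add: Bochner_Integration.integral_nonneg)
qed

locale bifurcating_chain =
  fixes M :: "'b measure" and X :: "nat \<Rightarrow> 'b \<Rightarrow> 'a::metric_space"
    and \<nu> :: "'a measure" and P :: "'a \<Rightarrow> ('a \<times> 'a) measure"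
  assumes BMC: "bifurcating_MC M X \<nu> P"
begin

sublocale prob_space M
  using BMC unfolding bifurcating_MC_def by auto

lemma X_measurable [measurable]: "X i \<in> borel_measurable M"
  using BMC unfolding bifurcating_MC_def by auto

lemma P_measurable: "P \<in> borel \<rightarrow>\<^sub>M prob_algebra (borel \<Otimes>\<^sub>M borel)"
  using BMC unfolding bifurcating_MC_def by auto

lemma nu_eq_distr: "\<nu> = distr M borel (X 1)"
  using BMC unfolding bifurcating_MC_def by auto

lemma Delta_measurable [measurable]: "Delta X i \<in> M \<rightarrow>\<^sub>M borel \<Otimes>\<^sub>M borel \<Otimes>\<^sub>M borel"
  unfolding Delta_def[abs_def] by measurable

lemma sets_P: "sets (P x) = sets (borel \<Otimes>\<^sub>M borel)"
  using measurable_space[OF P_measurable, of x] by (auto simp: space_prob_algebra)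

lemma prob_space_P: "prob_space (P x)"
  using measurable_space[OF P_measurable, of x] by (auto simp: space_prob_algebra)

lemma measurable_P: "g \<in> borel_measurable (borel \<Otimes>\<^sub>M borel) \<Longrightarrow> g \<in> borel_measurable (P x)"
  using measurable_cong_sets[OF sets_P refl] by auto

lemma P3_borel_measurable [measurable]:
  "f \<in> borel_measurable (borel \<Otimes>\<^sub>M borel \<Otimes>\<^sub>M borel) \<Longrightarrow> P3 P f \<in> borel_measurable borel"
  using P3_measurable P_measurable by blast

lemma Pnn_borel_measurable [measurable]:
  assumes [measurable]: "f \<in> borel_measurable (borel \<Otimes>\<^sub>M borel \<Otimes>\<^sub>M borel)"
  shows "Pnn P f \<in> borel_measurable borel"
proof -
  have [measurable]: "P \<in> borel \<rightarrow>\<^sub>M subprob_algebra (borel \<Otimes>\<^sub>M borel)"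
    using measurable_prob_algebraD[OF P_measurable] .
  show ?thesis
    unfolding Pnn_def[abs_def]
    by (rule nn_integral_measurable_subprob_algebra2[where N="borel \<Otimes>\<^sub>M borel"]) measurable
qed

lemma P3_const [simp]: "P3 P (\<lambda>_. c) x = c"
proof -
  interpret Px: prob_space "P x" by (rule prob_space_P)
  show ?thesis unfolding P3_def by (simp add: Px.prob_space)
qed

lemma sigma_finite_subalgebra_filt: "sigma_finite_subalgebra M (filt M X r)"
proof -
  have "(\<Union>i\<in>Tr r. {X i -` A \<inter> space M | A. A \<in> sets borel}) \<subseteq> sets M"
    by auto
  then have "subalgebra M (filt M X r)"
    unfolding subalgebra_def filt_def
    by (auto simp: space_measure_of_conv sets_measure_of_conv intro!: sets.sigma_sets_subset)
  then interpret finite_measure_subalgebra M "filt M X r"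
    by unfold_locales
  show ?thesis
    by (rule finite_measure_subalgebra_is_sigma_finite) unfold_locales
qed

lemma integral_prod_Delta:
  assumes fs: "\<forall>n\<in>Gen r. fs n \<in> borel_measurable (borel \<Otimes>\<^sub>M borel \<Otimes>\<^sub>M borel) \<and> (\<exists>B. \<forall>t. \<bar>fs n t\<bar> \<le> B)"
  shows "(\<integral>\<omega>. (\<Prod>n\<in>Gen r. fs n (Delta X n \<omega>)) \<partial>M) = (\<integral>\<omega>. (\<Prod>n\<in>Gen r. P3 P (fs n) (X n \<omega>)) \<partial>M)"
proof -
  interpret S: sigma_finite_subalgebra M "filt M X r"
    by (rule sigma_finite_subalgebra_filt)
  have AE: "AE \<omega> in M. real_cond_exp M (filt M X r) (\<lambda>\<omega>. \<Prod>n\<in>Gen r. fs n (Delta X n \<omega>)) \<omega>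
                      = (\<Prod>n\<in>Gen r. P3 P (fs n) (X n \<omega>))"
    using BMC fs unfolding bifurcating_MC_def by blast
  obtain B where B: "\<And>n t. n \<in> Gen r \<Longrightarrow> \<bar>fs n t\<bar> \<le> B n"
    using fs by metis
  have [measurable]: "\<And>n. n \<in> Gen r \<Longrightarrow> fs n \<in> borel_measurable (borel \<Otimes>\<^sub>M borel \<Otimes>\<^sub>M borel)"
    using fs by auto
  have [measurable]: "(\<lambda>\<omega>. \<Prod>n\<in>Gen r. fs n (Delta X n \<omega>)) \<in> borel_measurable M"
    "(\<lambda>\<omega>. \<Prod>n\<in>Gen r. P3 P (fs n) (X n \<omega>)) \<in> borel_measurable M"
    by (rule borel_measurable_prod, measurable)+
  have int: "integrable M (\<lambda>\<omega>. \<Prod>n\<in>Gen r. fs n (Delta X n \<omega>))"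
    by (rule integrable_const_bound[where B="\<Prod>n\<in>Gen r. B n"])
      (auto simp: abs_prod intro!: AE_I2 prod_mono B)
  have "(\<integral>\<omega>. (\<Prod>n\<in>Gen r. fs n (Delta X n \<omega>)) \<partial>M)
      = (\<integral>\<omega>. real_cond_exp M (filt M X r) (\<lambda>\<omega>. \<Prod>n\<in>Gen r. fs n (Delta X n \<omega>)) \<omega> \<partial>M)"
    using S.real_cond_exp_int(2)[OF int] by simp
  also have "\<dots> = (\<integral>\<omega>. (\<Prod>n\<in>Gen r. P3 P (fs n) (X n \<omega>)) \<partial>M)"
    by (rule integral_cong_AE[OF measurable_from_subalg[OF S.subalg] _ AE]) simp_all
  finally show ?thesis .
qed

lemma P3_bounded:
  assumes [measurable]: "f \<in> borel_measurable (borel \<Otimes>\<^sub>M borel \<Otimes>\<^sub>M borel)"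
    and f: "\<And>t. 0 \<le> f t \<and> f t \<le> B"
  shows "integrable (P x) (\<lambda>p. f (x, fst p, snd p))" "0 \<le> P3 P f x \<and> P3 P f x \<le> B"
proof -
  interpret Px: prob_space "P x" by (rule prob_space_P)
  have "(\<lambda>p. f (x, fst p, snd p)) \<in> borel_measurable (P x)"
    by (rule measurable_P) measurable
  then show int: "integrable (P x) (\<lambda>p. f (x, fst p, snd p))"
    by (intro Px.integrable_const_bound[where B=B]) (use f in auto)
  have "P3 P f x \<le> (\<integral>p. B \<partial>P x)"
    unfolding P3_def by (rule integral_mono[OF int]) (use f in auto)
  then show "0 \<le> P3 P f x \<and> P3 P f x \<le> B"
    using f unfolding P3_def by (auto intro: integral_nonneg simp: Px.prob_space)
qed

text \<open>Products over two vertices \<open>n, m\<close> of one generation are handled together with the single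
  vertex case by the factor \<open>if m = n then 1 else \<dots>\<close>.\<close>

lemma nn_integral_Delta_pair_bounded:
  assumes n: "n \<in> Gen r" and m: "m \<in> Gen r"
    and fg[measurable]: "f \<in> borel_measurable (borel \<Otimes>\<^sub>M borel \<Otimes>\<^sub>M borel)"
      "g \<in> borel_measurable (borel \<Otimes>\<^sub>M borel \<Otimes>\<^sub>M borel)"
    and f: "\<And>t. 0 \<le> f t \<and> f t \<le> B" and g: "\<And>t. 0 \<le> g t \<and> g t \<le> B"
  shows "(\<integral>\<^sup>+\<omega>. ennreal (f (Delta X n \<omega>)) * (if m = n then 1 else ennreal (g (Delta X m \<omega>))) \<partial>M)
       = (\<integral>\<^sup>+\<omega>. Pnn P f (X n \<omega>) * (if m = n then 1 else Pnn P g (X m \<omega>)) \<partial>M)"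
proof -
  define u where "u = (\<lambda>\<omega>. f (Delta X n \<omega>) * (if m = n then 1 else g (Delta X m \<omega>)))"
  define v where "v = (\<lambda>\<omega>. P3 P f (X n \<omega>) * (if m = n then 1 else P3 P g (X m \<omega>)))"
  define fs where "fs = (\<lambda>k. if k = n then f else if k = m then g else (\<lambda>_. 1::real))"
  have bounds: "\<bar>f t\<bar> \<le> max B 1" "\<bar>g t\<bar> \<le> max B 1" for t
    using f[of t] g[of t] by auto
  have fs: "\<forall>k\<in>Gen r. fs k \<in> borel_measurable (borel \<Otimes>\<^sub>M borel \<Otimes>\<^sub>M borel) \<and> (\<exists>B. \<forall>t. \<bar>fs k t\<bar> \<le> B)"
    unfolding fs_def using bounds by (auto intro!: exI[of _ "max B 1"])
  have "(\<Prod>k\<in>Gen r. fs k (Delta X k \<omega>))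
      = (\<Prod>k\<in>Gen r. if k = n then f (Delta X n \<omega>) else if k = m then g (Delta X m \<omega>) else 1)"
    "(\<Prod>k\<in>Gen r. P3 P (fs k) (X k \<omega>))
      = (\<Prod>k\<in>Gen r. if k = n then P3 P f (X n \<omega>) else if k = m then P3 P g (X m \<omega>) else 1)" for \<omega>
    by (auto simp: fs_def intro!: prod.cong)
  then have "(\<Prod>k\<in>Gen r. fs k (Delta X k \<omega>)) = u \<omega>" "(\<Prod>k\<in>Gen r. P3 P (fs k) (X k \<omega>)) = v \<omega>" for \<omega>
    unfolding u_def v_def prod_two_points[OF finite_Gen n m] by simp_all
  then have eq: "integral\<^sup>L M u = integral\<^sup>L M v"
    using integral_prod_Delta[OF fs] by simp
  have Pf: "0 \<le> P3 P f x \<and> P3 P f x \<le> B" "Pnn P f x = ennreal (P3 P f x)" for x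
    using P3_bounded[OF fg(1) f] unfolding Pnn_def P3_def by (auto intro!: nn_integral_eq_integral AE_I2 simp: f)
  have Pg: "0 \<le> P3 P g x \<and> P3 P g x \<le> B" "Pnn P g x = ennreal (P3 P g x)" for x
    using P3_bounded[OF fg(2) g] unfolding Pnn_def P3_def by (auto intro!: nn_integral_eq_integral AE_I2 simp: g)
  have prod_bound: "norm (a * (if c then 1 else b)) \<le> B * max 1 B"
    if "0 \<le> a" "a \<le> B" "0 \<le> b" "b \<le> B" for a b :: real and c
  proof -
    have "B \<le> B * max 1 B" "a * b \<le> B * max 1 B"
      using that by (auto simp: mult_le_cancel_left1 intro!: mult_mono)
    then show ?thesis using that by (auto simp: abs_mult)
  qed
  have fD: "0 \<le> f (Delta X n \<omega>) \<and> f (Delta X n \<omega>) \<le> B" "0 \<le> g (Delta X m \<omega>) \<and> g (Delta X m \<omega>) \<le> B" for \<omega>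
    by (rule f g)+
  have "integrable M u" "integrable M v"
    unfolding u_def v_def using fD Pf Pg
    by (auto intro!: integrable_const_bound[where B="B * max 1 B"] AE_I2 prod_bound)
  moreover have "0 \<le> u \<omega>" "0 \<le> v \<omega>" for \<omega>
    unfolding u_def v_def using fD Pf Pg by auto
  ultimately have "(\<integral>\<^sup>+\<omega>. ennreal (u \<omega>) \<partial>M) = (\<integral>\<^sup>+\<omega>. ennreal (v \<omega>) \<partial>M)"
    using eq by (simp add: nn_integral_eq_integral)
  then show ?thesis
    unfolding u_def v_def using fD Pf Pg by (cases "m = n") (simp_all add: ennreal_mult)
qed


lemma Pnn_mono: "(\<And>t. f t \<le> g t) \<Longrightarrow> Pnn P f x \<le> Pnn P g x"
  unfolding Pnn_def by (rule nn_integral_mono) (simp add: ennreal_leI)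

lemma SUP_Pnn_min:
  assumes [measurable]: "f \<in> borel_measurable (borel \<Otimes>\<^sub>M borel \<Otimes>\<^sub>M borel)"
  shows "(SUP k::nat. Pnn P (\<lambda>t. min (f t) (real k)) x) = Pnn P f x"
proof -
  have meas: "(\<lambda>p. ennreal (min (f (x, fst p, snd p)) (real k))) \<in> borel_measurable (P x)" for k
    by (rule measurable_P) measurable
  have inc: "incseq (\<lambda>k p. ennreal (min (f (x, fst p, snd p)) (real k)))"
    by (auto simp: incseq_def le_fun_def intro!: ennreal_leI)
  have "(SUP k. Pnn P (\<lambda>t. min (f t) (real k)) x)
      = (\<integral>\<^sup>+p. (SUP k::nat. ennreal (min (f (x, fst p, snd p)) (real k))) \<partial>P x)"
    unfolding Pnn_def by (rule nn_integral_monotone_convergence_SUP[OF inc meas, symmetric])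
  then show ?thesis
    unfolding Pnn_def SUP_ennreal_min_of_nat .
qed

text \<open>The Markov property only involves bounded test functions; monotone convergence, first in
  \<open>f\<close> and then in \<open>g\<close>, removes the bounds.\<close>

lemma nn_integral_Delta_pair_left:
  assumes n: "n \<in> Gen r" and m: "m \<in> Gen r"
    and fg[measurable]: "f \<in> borel_measurable (borel \<Otimes>\<^sub>M borel \<Otimes>\<^sub>M borel)"
      "g \<in> borel_measurable (borel \<Otimes>\<^sub>M borel \<Otimes>\<^sub>M borel)"
    and f: "\<And>t. 0 \<le> f t" and g: "\<And>t. 0 \<le> g t \<and> g t \<le> B"
  shows "(\<integral>\<^sup>+\<omega>. ennreal (f (Delta X n \<omega>)) * (if m = n then 1 else ennreal (g (Delta X m \<omega>))) \<partial>M)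
       = (\<integral>\<^sup>+\<omega>. Pnn P f (X n \<omega>) * (if m = n then 1 else Pnn P g (X m \<omega>)) \<partial>M)"
proof -
  define fk where "fk = (\<lambda>k::nat. \<lambda>t. min (f t) (real k))"
  have [measurable]: "fk k \<in> borel_measurable (borel \<Otimes>\<^sub>M borel \<Otimes>\<^sub>M borel)" for k
    unfolding fk_def by measurable
  have inc: "incseq (\<lambda>k \<omega>. ennreal (fk k (Delta X n \<omega>)) * (if m = n then 1 else ennreal (g (Delta X m \<omega>))))"
    "incseq (\<lambda>k \<omega>. Pnn P (fk k) (X n \<omega>) * (if m = n then 1 else Pnn P g (X m \<omega>)))"
    by (auto simp: incseq_def le_fun_def fk_def intro!: mult_right_mono ennreal_leI Pnn_mono)
  have "(\<integral>\<^sup>+\<omega>. ennreal (f (Delta X n \<omega>)) * (if m = n then 1 else ennreal (g (Delta X m \<omega>))) \<partial>M)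
      = (\<integral>\<^sup>+\<omega>. (SUP k. ennreal (fk k (Delta X n \<omega>)) * (if m = n then 1 else ennreal (g (Delta X m \<omega>)))) \<partial>M)"
    unfolding fk_def SUP_mult_right_ennreal[symmetric] SUP_ennreal_min_of_nat ..
  also have "\<dots> = (SUP k. (\<integral>\<^sup>+\<omega>. ennreal (fk k (Delta X n \<omega>)) * (if m = n then 1 else ennreal (g (Delta X m \<omega>))) \<partial>M))"
    by (rule nn_integral_monotone_convergence_SUP[OF inc(1)]) measurable
  also have "\<dots> = (SUP k. (\<integral>\<^sup>+\<omega>. Pnn P (fk k) (X n \<omega>) * (if m = n then 1 else Pnn P g (X m \<omega>)) \<partial>M))"
  proof (rule SUP_cong[OF refl])
    fix k
    have "0 \<le> fk k t \<and> fk k t \<le> max (real k) B" "0 \<le> g t \<and> g t \<le> max (real k) B" for t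
      using f[of t] g[of t] unfolding fk_def by auto
    then show "(\<integral>\<^sup>+\<omega>. ennreal (fk k (Delta X n \<omega>)) * (if m = n then 1 else ennreal (g (Delta X m \<omega>))) \<partial>M)
        = (\<integral>\<^sup>+\<omega>. Pnn P (fk k) (X n \<omega>) * (if m = n then 1 else Pnn P g (X m \<omega>)) \<partial>M)"
      by (intro nn_integral_Delta_pair_bounded[OF n m]) measurable
  qed
  also have "\<dots> = (\<integral>\<^sup>+\<omega>. (SUP k. Pnn P (fk k) (X n \<omega>) * (if m = n then 1 else Pnn P g (X m \<omega>))) \<partial>M)"
    by (rule nn_integral_monotone_convergence_SUP[OF inc(2), symmetric]) measurable
  also have "\<dots> = (\<integral>\<^sup>+\<omega>. Pnn P f (X n \<omega>) * (if m = n then 1 else Pnn P g (X m \<omega>)) \<partial>M)"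
    unfolding SUP_mult_right_ennreal[symmetric] fk_def SUP_Pnn_min[OF fg(1)] ..
  finally show ?thesis .
qed

lemma nn_integral_Delta:
  assumes "n \<in> Gen r" and [measurable]: "f \<in> borel_measurable (borel \<Otimes>\<^sub>M borel \<Otimes>\<^sub>M borel)"
    and "\<And>t. 0 \<le> f t"
  shows "(\<integral>\<^sup>+\<omega>. ennreal (f (Delta X n \<omega>)) \<partial>M) = (\<integral>\<^sup>+\<omega>. Pnn P f (X n \<omega>) \<partial>M)"
  using nn_integral_Delta_pair_left[OF assms(1,1,2) _ assms(3), of "\<lambda>_. 0" 0] by simp

lemma nn_integral_Delta_pair:
  assumes n: "n \<in> Gen r" and m: "m \<in> Gen r" and "n \<noteq> m"
    and fg[measurable]: "f \<in> borel_measurable (borel \<Otimes>\<^sub>M borel \<Otimes>\<^sub>M borel)"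
      "g \<in> borel_measurable (borel \<Otimes>\<^sub>M borel \<Otimes>\<^sub>M borel)"
    and f: "\<And>t. 0 \<le> f t" and g: "\<And>t. 0 \<le> g t"
  shows "(\<integral>\<^sup>+\<omega>. ennreal (f (Delta X n \<omega>)) * ennreal (g (Delta X m \<omega>)) \<partial>M)
       = (\<integral>\<^sup>+\<omega>. Pnn P f (X n \<omega>) * Pnn P g (X m \<omega>) \<partial>M)"
proof -
  define gk where "gk = (\<lambda>k::nat. \<lambda>t. min (g t) (real k))"
  have gk[measurable]: "gk k \<in> borel_measurable (borel \<Otimes>\<^sub>M borel \<Otimes>\<^sub>M borel)" for k
    unfolding gk_def by measurable
  have inc: "incseq (\<lambda>k \<omega>. ennreal (f (Delta X n \<omega>)) * ennreal (gk k (Delta X m \<omega>)))"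
    "incseq (\<lambda>k \<omega>. Pnn P f (X n \<omega>) * Pnn P (gk k) (X m \<omega>))"
    by (auto simp: incseq_def le_fun_def gk_def intro!: mult_left_mono ennreal_leI Pnn_mono)
  have "(\<integral>\<^sup>+\<omega>. ennreal (f (Delta X n \<omega>)) * ennreal (g (Delta X m \<omega>)) \<partial>M)
      = (\<integral>\<^sup>+\<omega>. (SUP k. ennreal (f (Delta X n \<omega>)) * ennreal (gk k (Delta X m \<omega>))) \<partial>M)"
    unfolding gk_def SUP_mult_left_ennreal[symmetric] SUP_ennreal_min_of_nat ..
  also have "\<dots> = (SUP k. (\<integral>\<^sup>+\<omega>. ennreal (f (Delta X n \<omega>)) * ennreal (gk k (Delta X m \<omega>)) \<partial>M))"
    by (rule nn_integral_monotone_convergence_SUP[OF inc(1)]) measurable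
  also have "\<dots> = (SUP k. (\<integral>\<^sup>+\<omega>. Pnn P f (X n \<omega>) * Pnn P (gk k) (X m \<omega>) \<partial>M))"
  proof (rule SUP_cong[OF refl])
    fix k
    have "0 \<le> gk k t \<and> gk k t \<le> real k" for t
      using g[of t] unfolding gk_def by auto
    from nn_integral_Delta_pair_left[OF n m fg(1) gk f this] \<open>n \<noteq> m\<close>
    show "(\<integral>\<^sup>+\<omega>. ennreal (f (Delta X n \<omega>)) * ennreal (gk k (Delta X m \<omega>)) \<partial>M)
        = (\<integral>\<^sup>+\<omega>. Pnn P f (X n \<omega>) * Pnn P (gk k) (X m \<omega>) \<partial>M)"
      by simp
  qed
  also have "\<dots> = (\<integral>\<^sup>+\<omega>. (SUP k. Pnn P f (X n \<omega>) * Pnn P (gk k) (X m \<omega>)) \<partial>M)"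
    by (rule nn_integral_monotone_convergence_SUP[OF inc(2), symmetric]) measurable
  also have "\<dots> = (\<integral>\<^sup>+\<omega>. Pnn P f (X n \<omega>) * Pnn P g (X m \<omega>) \<partial>M)"
    unfolding SUP_mult_left_ennreal[symmetric] gk_def SUP_Pnn_min[OF fg(2)] ..
  finally show ?thesis .
qed

definition Pint :: "('a \<times> 'a \<times> 'a \<Rightarrow> real) \<Rightarrow> bool" where
  "Pint f \<longleftrightarrow> f \<in> borel_measurable (borel \<Otimes>\<^sub>M borel \<Otimes>\<^sub>M borel) \<and>
     (\<forall>x. integrable (P x) (\<lambda>p. f (x, fst p, snd p)))"

lemma Pint_measurable [measurable_dest]:
  "Pint f \<Longrightarrow> f \<in> borel_measurable (borel \<Otimes>\<^sub>M borel \<Otimes>\<^sub>M borel)"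
  by (simp add: Pint_def)

lemma Pint_abs: "Pint f \<Longrightarrow> Pint (\<lambda>t. \<bar>f t\<bar>)"
  and Pint_pos_part: "Pint f \<Longrightarrow> Pint (\<lambda>t. max (f t) 0)"
  and Pint_neg_part: "Pint f \<Longrightarrow> Pint (\<lambda>t. max (- f t) 0)"
  unfolding Pint_def by auto

lemma P3_diff: "Pint f \<Longrightarrow> Pint g \<Longrightarrow> P3 P (\<lambda>t. f t - g t) x = P3 P f x - P3 P g x"
  unfolding P3_def Pint_def by (simp add: Bochner_Integration.integral_diff)

lemma P3_mono: "Pint f \<Longrightarrow> Pint g \<Longrightarrow> (\<And>t. f t \<le> g t) \<Longrightarrow> P3 P f x \<le> P3 P g x"
  unfolding P3_def Pint_def by (auto intro!: integral_mono)

lemma P3_nonneg: "(\<And>t. 0 \<le> f t) \<Longrightarrow> 0 \<le> P3 P f x"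
  unfolding P3_def by (auto intro!: integral_nonneg)

lemma abs_P3_le: "Pint f \<Longrightarrow> \<bar>P3 P f x\<bar> \<le> P3 P (\<lambda>t. \<bar>f t\<bar>) x"
  unfolding P3_def Pint_def using integral_abs_bound by (metis real_norm_def)

lemma Pnn_eq_P3: "Pint f \<Longrightarrow> (\<And>t. 0 \<le> f t) \<Longrightarrow> Pnn P f x = ennreal (P3 P f x)"
  unfolding Pnn_def P3_def Pint_def by (auto intro!: nn_integral_eq_integral)

lemma P3_square_le:
  assumes "Pint f" "Pint (\<lambda>t. (f t)\<^sup>2)"
  shows "(P3 P f x)\<^sup>2 \<le> P3 P (\<lambda>t. (f t)\<^sup>2) x"
proof -
  interpret Px: prob_space "P x" by (rule prob_space_P)
  have "Px.variance (\<lambda>p. f (x, fst p, snd p))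
      = P3 P (\<lambda>t. (f t)\<^sup>2) x - (P3 P f x)\<^sup>2"
    using Px.variance_eq[of "\<lambda>p. f (x, fst p, snd p)"] assms unfolding P3_def Pint_def by simp
  then show ?thesis
    using Px.variance_positive[of "\<lambda>p. f (x, fst p, snd p)"] by linarith
qed

lemma P3_abs_square_le:
  "Pint f \<Longrightarrow> Pint (\<lambda>t. (f t)\<^sup>2) \<Longrightarrow> (P3 P (\<lambda>t. \<bar>f t\<bar>) x)\<^sup>2 \<le> P3 P (\<lambda>t. (f t)\<^sup>2) x"
  using P3_square_le[of "\<lambda>t. \<bar>f t\<bar>"] Pint_abs[of f] by simp

lemma P3_pos_neg_parts:
  assumes "Pint f"
  shows "P3 P f x = P3 P (\<lambda>t. max (f t) 0) x - P3 P (\<lambda>t. max (- f t) 0) x"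
    and "P3 P (\<lambda>t. max (f t) 0) x \<le> P3 P (\<lambda>t. \<bar>f t\<bar>) x"
    and "P3 P (\<lambda>t. max (- f t) 0) x \<le> P3 P (\<lambda>t. \<bar>f t\<bar>) x"
proof -
  have "f = (\<lambda>t. max (f t) 0 - max (- f t) 0)" by auto
  then show "P3 P f x = P3 P (\<lambda>t. max (f t) 0) x - P3 P (\<lambda>t. max (- f t) 0) x"
    using P3_diff[OF Pint_pos_part Pint_neg_part, OF assms assms] by metis
qed (use assms in \<open>auto intro!: P3_mono Pint_pos_part Pint_neg_part Pint_abs\<close>)

lemma integral_Delta_nonneg:
  assumes n: "n \<in> Gen r" and f: "Pint f" "\<And>t. 0 \<le> f t"
    and i: "integrable M (\<lambda>\<omega>. P3 P f (X n \<omega>))"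
  shows "integrable M (\<lambda>\<omega>. f (Delta X n \<omega>))"
    and "(\<integral>\<omega>. f (Delta X n \<omega>) \<partial>M) = (\<integral>\<omega>. P3 P f (X n \<omega>) \<partial>M)"
proof -
  have [measurable]: "f \<in> borel_measurable (borel \<Otimes>\<^sub>M borel \<Otimes>\<^sub>M borel)"
    using f(1) by (rule Pint_measurable)
  have "(\<integral>\<^sup>+\<omega>. ennreal (f (Delta X n \<omega>)) \<partial>M) = (\<integral>\<^sup>+\<omega>. Pnn P f (X n \<omega>) \<partial>M)"
    by (rule nn_integral_Delta[OF n _ f(2)]) measurable
  also have "\<dots> = (\<integral>\<^sup>+\<omega>. ennreal (P3 P f (X n \<omega>)) \<partial>M)"
    using Pnn_eq_P3[OF f] by simp
  finally have eq: "(\<integral>\<^sup>+\<omega>. ennreal (f (Delta X n \<omega>)) \<partial>M) = (\<integral>\<^sup>+\<omega>. ennreal (P3 P f (X n \<omega>)) \<partial>M)" .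
  have "(\<lambda>\<omega>. f (Delta X n \<omega>)) \<in> borel_measurable M"
    by measurable
  from integrable_and_integral_eq_of_nn_integral_eq[OF this f(2) P3_nonneg[OF f(2)] i eq]
  show "integrable M (\<lambda>\<omega>. f (Delta X n \<omega>))"
    and "(\<integral>\<omega>. f (Delta X n \<omega>) \<partial>M) = (\<integral>\<omega>. P3 P f (X n \<omega>) \<partial>M)" .
qed

lemma integral_Delta:
  assumes n: "n \<in> Gen r" and f: "Pint f"
    and i: "integrable M (\<lambda>\<omega>. P3 P (\<lambda>t. \<bar>f t\<bar>) (X n \<omega>))"
  shows "integrable M (\<lambda>\<omega>. f (Delta X n \<omega>))"
    and "(\<integral>\<omega>. f (Delta X n \<omega>) \<partial>M) = (\<integral>\<omega>. P3 P f (X n \<omega>) \<partial>M)"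
proof -
  define fp where "fp = (\<lambda>t. max (f t) 0)"
  define fm where "fm = (\<lambda>t. max (- f t) 0)"
  have fpm: "Pint fp" "Pint fm" "\<And>t. 0 \<le> fp t" "\<And>t. 0 \<le> fm t"
    unfolding fp_def fm_def using f by (auto intro: Pint_pos_part Pint_neg_part)
  have ih: "integrable M (\<lambda>\<omega>. P3 P h (X n \<omega>))" if "h = fp \<or> h = fm" for h
  proof (rule Bochner_Integration.integrable_bound[OF i])
    show "(\<lambda>\<omega>. P3 P h (X n \<omega>)) \<in> borel_measurable M"
      using that fpm by auto
    show "AE \<omega> in M. norm (P3 P h (X n \<omega>)) \<le> norm (P3 P (\<lambda>t. \<bar>f t\<bar>) (X n \<omega>))"
      using that P3_pos_neg_parts[OF f] P3_nonneg[OF fpm(3)] P3_nonneg[OF fpm(4)]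
      unfolding fp_def fm_def by (intro AE_I2) (auto intro: order.trans[OF _ abs_ge_self])
  qed
  then have ihpm: "integrable M (\<lambda>\<omega>. P3 P fp (X n \<omega>))" "integrable M (\<lambda>\<omega>. P3 P fm (X n \<omega>))"
    by blast+
  note parts = integral_Delta_nonneg[OF n fpm(1,3) ihpm(1)] integral_Delta_nonneg[OF n fpm(2,4) ihpm(2)]
  have "f (Delta X n \<omega>) = fp (Delta X n \<omega>) - fm (Delta X n \<omega>)" for \<omega>
    unfolding fp_def fm_def by auto
  moreover have "P3 P f (X n \<omega>) = P3 P fp (X n \<omega>) - P3 P fm (X n \<omega>)" for \<omega>
    unfolding fp_def fm_def by (rule P3_pos_neg_parts[OF f])
  ultimately show "integrable M (\<lambda>\<omega>. f (Delta X n \<omega>))"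
    and "(\<integral>\<omega>. f (Delta X n \<omega>) \<partial>M) = (\<integral>\<omega>. P3 P f (X n \<omega>) \<partial>M)"
    using parts ihpm by simp_all
qed


lemma integral_Delta_pair_nonneg:
  assumes n: "n \<in> Gen r" and m: "m \<in> Gen r" and "n \<noteq> m"
    and f: "Pint f" "\<And>t. 0 \<le> f t" and g: "Pint g" "\<And>t. 0 \<le> g t"
    and i: "integrable M (\<lambda>\<omega>. P3 P f (X n \<omega>) * P3 P g (X m \<omega>))"
  shows "integrable M (\<lambda>\<omega>. f (Delta X n \<omega>) * g (Delta X m \<omega>))"
    and "(\<integral>\<omega>. f (Delta X n \<omega>) * g (Delta X m \<omega>) \<partial>M) = (\<integral>\<omega>. P3 P f (X n \<omega>) * P3 P g (X m \<omega>) \<partial>M)"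
proof -
  have [measurable]: "f \<in> borel_measurable (borel \<Otimes>\<^sub>M borel \<Otimes>\<^sub>M borel)"
    "g \<in> borel_measurable (borel \<Otimes>\<^sub>M borel \<Otimes>\<^sub>M borel)"
    using Pint_measurable[OF f(1)] Pint_measurable[OF g(1)] by auto
  have "(\<integral>\<^sup>+\<omega>. ennreal (f (Delta X n \<omega>) * g (Delta X m \<omega>)) \<partial>M)
      = (\<integral>\<^sup>+\<omega>. ennreal (f (Delta X n \<omega>)) * ennreal (g (Delta X m \<omega>)) \<partial>M)"
    by (rule nn_integral_cong) (simp add: ennreal_mult f(2) g(2))
  also have "\<dots> = (\<integral>\<^sup>+\<omega>. Pnn P f (X n \<omega>) * Pnn P g (X m \<omega>) \<partial>M)"
    by (rule nn_integral_Delta_pair[OF n m \<open>n \<noteq> m\<close> _ _ f(2) g(2)]) measurable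
  also have "\<dots> = (\<integral>\<^sup>+\<omega>. ennreal (P3 P f (X n \<omega>) * P3 P g (X m \<omega>)) \<partial>M)"
    by (rule nn_integral_cong) (simp add: ennreal_mult P3_nonneg f(2) g(2) Pnn_eq_P3[OF f] Pnn_eq_P3[OF g])
  finally have eq: "(\<integral>\<^sup>+\<omega>. ennreal (f (Delta X n \<omega>) * g (Delta X m \<omega>)) \<partial>M)
      = (\<integral>\<^sup>+\<omega>. ennreal (P3 P f (X n \<omega>) * P3 P g (X m \<omega>)) \<partial>M)" .
  have "(\<lambda>\<omega>. f (Delta X n \<omega>) * g (Delta X m \<omega>)) \<in> borel_measurable M"
    by measurable
  from integrable_and_integral_eq_of_nn_integral_eq[OF this _ _ i eq]
  show "integrable M (\<lambda>\<omega>. f (Delta X n \<omega>) * g (Delta X m \<omega>))"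
    and "(\<integral>\<omega>. f (Delta X n \<omega>) * g (Delta X m \<omega>) \<partial>M) = (\<integral>\<omega>. P3 P f (X n \<omega>) * P3 P g (X m \<omega>) \<partial>M)"
    using f(2) g(2) P3_nonneg[OF f(2)] P3_nonneg[OF g(2)] by auto
qed

lemma integral_Delta_pair:
  assumes n: "n \<in> Gen r" and m: "m \<in> Gen r" and nm: "n \<noteq> m" and f: "Pint f" and g: "Pint g"
    and i: "integrable M (\<lambda>\<omega>. P3 P (\<lambda>t. \<bar>f t\<bar>) (X n \<omega>) * P3 P (\<lambda>t. \<bar>g t\<bar>) (X m \<omega>))"
  shows "integrable M (\<lambda>\<omega>. f (Delta X n \<omega>) * g (Delta X m \<omega>))"
    and "(\<integral>\<omega>. f (Delta X n \<omega>) * g (Delta X m \<omega>) \<partial>M) = (\<integral>\<omega>. P3 P f (X n \<omega>) * P3 P g (X m \<omega>) \<partial>M)"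
proof -
  define pos :: "('a \<times> 'a \<times> 'a \<Rightarrow> real) \<Rightarrow> _" where "pos = (\<lambda>h t. max (h t) 0)"
  define neg :: "('a \<times> 'a \<times> 'a \<Rightarrow> real) \<Rightarrow> _" where "neg = (\<lambda>h t. max (- h t) 0)"
  let ?parts = "\<lambda>h. {pos h, neg h}"
  have parts: "Pint h'" "\<And>t. 0 \<le> h' t" "P3 P h' x \<le> P3 P (\<lambda>t. \<bar>h t\<bar>) x"
    if "h' \<in> ?parts h" "Pint h" for h h' x
    using that P3_pos_neg_parts[OF that(2)] unfolding pos_def neg_def
    by (auto intro: Pint_pos_part Pint_neg_part)
  have prod: "integrable M (\<lambda>\<omega>. f' (Delta X n \<omega>) * g' (Delta X m \<omega>)) \<and>
      (\<integral>\<omega>. f' (Delta X n \<omega>) * g' (Delta X m \<omega>) \<partial>M) = (\<integral>\<omega>. P3 P f' (X n \<omega>) * P3 P g' (X m \<omega>) \<partial>M) \<and>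
      integrable M (\<lambda>\<omega>. P3 P f' (X n \<omega>) * P3 P g' (X m \<omega>))"
    if f': "f' \<in> ?parts f" and g': "g' \<in> ?parts g" for f' g'
  proof -
    note pf = parts[OF f' f] and pg = parts[OF g' g]
    have "integrable M (\<lambda>\<omega>. P3 P f' (X n \<omega>) * P3 P g' (X m \<omega>))"
    proof (rule Bochner_Integration.integrable_bound[OF i])
      show "(\<lambda>\<omega>. P3 P f' (X n \<omega>) * P3 P g' (X m \<omega>)) \<in> borel_measurable M"
        using pf(1) pg(1) by measurable
      show "AE \<omega> in M. norm (P3 P f' (X n \<omega>) * P3 P g' (X m \<omega>))
          \<le> norm (P3 P (\<lambda>t. \<bar>f t\<bar>) (X n \<omega>) * P3 P (\<lambda>t. \<bar>g t\<bar>) (X m \<omega>))"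
        using pf(3) pg(3) P3_nonneg[of f', OF pf(2)] P3_nonneg[of g', OF pg(2)]
        by (intro AE_I2) (auto simp: abs_mult intro!: mult_mono intro: order.trans[OF _ abs_ge_self])
    qed
    then show ?thesis
      using integral_Delta_pair_nonneg[OF n m nm pf(1,2) pg(1,2)] by simp
  qed
  have f_eq: "f = (\<lambda>t. pos f t - neg f t)" and g_eq: "g = (\<lambda>t. pos g t - neg g t)"
    unfolding pos_def neg_def by auto
  have P3_eq: "P3 P f x = P3 P (pos f) x - P3 P (neg f) x" "P3 P g x = P3 P (pos g) x - P3 P (neg g) x" for x
    unfolding pos_def neg_def by (rule P3_pos_neg_parts[OF f] P3_pos_neg_parts[OF g])+
  have expand: "a' * b' = a1 * b1 - a1 * b2 - a2 * b1 + a2 * b2"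
    if "a' = a1 - a2" "b' = b1 - b2" for a' b' a1 a2 b1 b2 :: real
    unfolding that by (simp add: algebra_simps)
  note expand_Delta = expand[OF fun_cong[OF f_eq] fun_cong[OF g_eq]]
  note expand_P3 = expand[OF P3_eq]
  note p = prod[of "pos f" "pos g"] prod[of "pos f" "neg g"] prod[of "neg f" "pos g"] prod[of "neg f" "neg g"]
  show "integrable M (\<lambda>\<omega>. f (Delta X n \<omega>) * g (Delta X m \<omega>))"
    unfolding expand_Delta using p by simp
  show "(\<integral>\<omega>. f (Delta X n \<omega>) * g (Delta X m \<omega>) \<partial>M) = (\<integral>\<omega>. P3 P f (X n \<omega>) * P3 P g (X m \<omega>) \<partial>M)"
    unfolding expand_Delta expand_P3 using p by simp
qed

end

lemma integrable_mult_of_square_bounds: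
  fixes u v A B :: "'a \<Rightarrow> real"
  assumes [measurable]: "u \<in> borel_measurable M" "v \<in> borel_measurable M"
    and "integrable M A" "integrable M B"
    and "\<And>\<omega>. (u \<omega>)\<^sup>2 \<le> A \<omega>" "\<And>\<omega>. (v \<omega>)\<^sup>2 \<le> B \<omega>"
  shows "integrable M (\<lambda>\<omega>. u \<omega> * v \<omega>)"
proof (rule Bochner_Integration.integrable_bound)
  show "integrable M (\<lambda>\<omega>. (A \<omega> + B \<omega>) / 2)"
    using assms(3,4) by auto
  have "\<bar>u \<omega> * v \<omega>\<bar> \<le> (A \<omega> + B \<omega>) / 2" for \<omega>
  proof -
    have "\<bar>u \<omega> * v \<omega>\<bar> \<le> ((u \<omega>)\<^sup>2 + (v \<omega>)\<^sup>2) / 2"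
      using sum_squares_bound[of "\<bar>u \<omega>\<bar>" "\<bar>v \<omega>\<bar>"] by (simp add: abs_mult power2_eq_square)
    then show ?thesis
      using assms(5,6)[of \<omega>] by argo
  qed
  then show "AE \<omega> in M. norm (u \<omega> * v \<omega>) \<le> norm ((A \<omega> + B \<omega>) / 2)"
    by (intro AE_I2) (auto intro: order.trans[OF _ abs_ge_self])
qed measurable

lemma integral_square_add_le:
  fixes T W :: "'a \<Rightarrow> real"
  assumes [measurable]: "T \<in> borel_measurable M" "W \<in> borel_measurable M"
    and T: "integrable M (\<lambda>\<omega>. (T \<omega>)\<^sup>2)" and W: "integrable M (\<lambda>\<omega>. (W \<omega>)\<^sup>2)"
  shows "integrable M (\<lambda>\<omega>. (T \<omega> + W \<omega>)\<^sup>2)"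
    and "(\<integral>\<omega>. (T \<omega> + W \<omega>)\<^sup>2 \<partial>M) \<le> 2 * (\<integral>\<omega>. (T \<omega>)\<^sup>2 \<partial>M) + 2 * (\<integral>\<omega>. (W \<omega>)\<^sup>2 \<partial>M)"
proof -
  have pt: "(T \<omega> + W \<omega>)\<^sup>2 \<le> 2 * (T \<omega>)\<^sup>2 + 2 * (W \<omega>)\<^sup>2" for \<omega>
    using zero_le_power2[of "T \<omega> - W \<omega>"] unfolding power2_diff power2_sum by linarith
  have TW: "integrable M (\<lambda>\<omega>. 2 * (T \<omega>)\<^sup>2 + 2 * (W \<omega>)\<^sup>2)"
    using T W by auto
  show int: "integrable M (\<lambda>\<omega>. (T \<omega> + W \<omega>)\<^sup>2)"
    by (rule Bochner_Integration.integrable_bound[OF TW]) (use pt in \<open>auto intro!: AE_I2\<close>)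
  show "(\<integral>\<omega>. (T \<omega> + W \<omega>)\<^sup>2 \<partial>M) \<le> 2 * (\<integral>\<omega>. (T \<omega>)\<^sup>2 \<partial>M) + 2 * (\<integral>\<omega>. (W \<omega>)\<^sup>2 \<partial>M)"
    using integral_mono[OF int TW pt] T W by simp
qed

context bifurcating_chain
begin

lemma integrable_P3_products:
  assumes f: "Pint f" and f2: "Pint (\<lambda>t. (f t)\<^sup>2)"
    and i2: "\<forall>n\<in>Gen r. integrable M (\<lambda>\<omega>. P3 P (\<lambda>t. (f t)\<^sup>2) (X n \<omega>))"
    and n: "n \<in> Gen r" and m: "m \<in> Gen r"
  shows "integrable M (\<lambda>\<omega>. P3 P (\<lambda>t. \<bar>f t\<bar>) (X n \<omega>) * P3 P (\<lambda>t. \<bar>f t\<bar>) (X m \<omega>))"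
    and "integrable M (\<lambda>\<omega>. P3 P f (X n \<omega>) * P3 P f (X m \<omega>))"
    and "integrable M (\<lambda>\<omega>. P3 P (\<lambda>t. \<bar>f t\<bar>) (X n \<omega>))"
proof -
  have [measurable]: "f \<in> borel_measurable (borel \<Otimes>\<^sub>M borel \<Otimes>\<^sub>M borel)"
    using f by (rule Pint_measurable)
  have m_abs: "(\<lambda>\<omega>. P3 P (\<lambda>t. \<bar>f t\<bar>) (X k \<omega>)) \<in> borel_measurable M"
    and m_f: "(\<lambda>\<omega>. P3 P f (X k \<omega>)) \<in> borel_measurable M" for k
    by measurable
  note i = i2[rule_format, OF n] i2[rule_format, OF m]
  note abs_sq = P3_abs_square_le[OF f f2] and sq = P3_square_le[OF f f2]
  show "integrable M (\<lambda>\<omega>. P3 P (\<lambda>t. \<bar>f t\<bar>) (X n \<omega>) * P3 P (\<lambda>t. \<bar>f t\<bar>) (X m \<omega>))"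
    by (rule integrable_mult_of_square_bounds[OF m_abs m_abs i abs_sq abs_sq])
  show "integrable M (\<lambda>\<omega>. P3 P f (X n \<omega>) * P3 P f (X m \<omega>))"
    by (rule integrable_mult_of_square_bounds[OF m_f m_f i sq sq])
  have "integrable M (\<lambda>\<omega>. P3 P (\<lambda>t. \<bar>f t\<bar>) (X n \<omega>) * 1)"
    by (rule integrable_mult_of_square_bounds[OF m_abs _ i(1) _ abs_sq]) auto
  then show "integrable M (\<lambda>\<omega>. P3 P (\<lambda>t. \<bar>f t\<bar>) (X n \<omega>))"
    by simp
qed

lemma integral_sum_Gen:
  assumes f: "Pint f" and i: "\<forall>n\<in>Gen r. integrable M (\<lambda>\<omega>. P3 P (\<lambda>t. \<bar>f t\<bar>) (X n \<omega>))"
  shows "integrable M (\<lambda>\<omega>. \<Sum>n\<in>Gen r. f (Delta X n \<omega>))"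
    and "(\<integral>\<omega>. (\<Sum>n\<in>Gen r. f (Delta X n \<omega>)) \<partial>M) = (\<integral>\<omega>. (\<Sum>n\<in>Gen r. P3 P f (X n \<omega>)) \<partial>M)"
proof -
  note Delta = integral_Delta[OF _ f]
  have "integrable M (\<lambda>\<omega>. P3 P f (X n \<omega>))" if "n \<in> Gen r" for n
  proof (rule Bochner_Integration.integrable_bound[OF i[rule_format, OF that]])
    show "(\<lambda>\<omega>. P3 P f (X n \<omega>)) \<in> borel_measurable M"
      using f by measurable
    show "AE \<omega> in M. norm (P3 P f (X n \<omega>)) \<le> norm (P3 P (\<lambda>t. \<bar>f t\<bar>) (X n \<omega>))"
      using abs_P3_le[OF f] by (intro AE_I2) (auto intro: order.trans[OF _ abs_ge_self])
  qed
  then show "integrable M (\<lambda>\<omega>. \<Sum>n\<in>Gen r. f (Delta X n \<omega>))"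
    and "(\<integral>\<omega>. (\<Sum>n\<in>Gen r. f (Delta X n \<omega>)) \<partial>M) = (\<integral>\<omega>. (\<Sum>n\<in>Gen r. P3 P f (X n \<omega>)) \<partial>M)"
    using Delta i by (simp_all add: Bochner_Integration.integral_sum)
qed

text \<open>Conditionally on the parents, the terms of a generation sum are independent, which gives
  the decomposition of its second moment into the square of the conditional mean plus the sum of
  the conditional variances.\<close>

lemma integral_sum_Gen_square:
  assumes f: "Pint f" and f2: "Pint (\<lambda>t. (f t)\<^sup>2)"
    and i2: "\<forall>n\<in>Gen r. integrable M (\<lambda>\<omega>. P3 P (\<lambda>t. (f t)\<^sup>2) (X n \<omega>))"
  shows "integrable M (\<lambda>\<omega>. (\<Sum>n\<in>Gen r. f (Delta X n \<omega>))\<^sup>2)"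
    and "(\<integral>\<omega>. (\<Sum>n\<in>Gen r. f (Delta X n \<omega>))\<^sup>2 \<partial>M) =
       (\<integral>\<omega>. (\<Sum>n\<in>Gen r. P3 P f (X n \<omega>))\<^sup>2 \<partial>M)
       + (\<Sum>n\<in>Gen r. (\<integral>\<omega>. P3 P (\<lambda>t. (f t)\<^sup>2) (X n \<omega>) - (P3 P f (X n \<omega>))\<^sup>2 \<partial>M))"
proof -
  note prods = integrable_P3_products[OF f f2 i2]
  have sq: "(\<Sum>n\<in>G. a n)\<^sup>2 = (\<Sum>n\<in>G. \<Sum>m\<in>G. a n * a m)" for G and a :: "nat \<Rightarrow> real"
    by (simp add: power2_eq_square sum_product)
  have cross: "integrable M (\<lambda>\<omega>. f (Delta X n \<omega>) * f (Delta X m \<omega>)) \<and>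
     (\<integral>\<omega>. f (Delta X n \<omega>) * f (Delta X m \<omega>) \<partial>M) =
       (\<integral>\<omega>. P3 P f (X n \<omega>) * P3 P f (X m \<omega>) \<partial>M) +
       (if n = m then (\<integral>\<omega>. P3 P (\<lambda>t. (f t)\<^sup>2) (X n \<omega>) - (P3 P f (X n \<omega>))\<^sup>2 \<partial>M) else 0)"
    if n: "n \<in> Gen r" and m: "m \<in> Gen r" for n m
  proof (cases "n = m")
    case True
    have "integrable M (\<lambda>\<omega>. (f (Delta X n \<omega>))\<^sup>2)"
      "(\<integral>\<omega>. (f (Delta X n \<omega>))\<^sup>2 \<partial>M) = (\<integral>\<omega>. P3 P (\<lambda>t. (f t)\<^sup>2) (X n \<omega>) \<partial>M)"
      using integral_Delta_nonneg[OF n f2 _ i2[rule_format, OF n]] by auto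
    then show ?thesis
      using True prods(2)[OF n n] i2 n by (simp add: power2_eq_square Bochner_Integration.integral_diff)
  next
    case False
    then show ?thesis
      using integral_Delta_pair[OF n m False f f prods(1)[OF n m]] by simp
  qed
  show "integrable M (\<lambda>\<omega>. (\<Sum>n\<in>Gen r. f (Delta X n \<omega>))\<^sup>2)"
    unfolding sq using cross by auto
  have "(\<integral>\<omega>. (\<Sum>n\<in>Gen r. f (Delta X n \<omega>))\<^sup>2 \<partial>M)
      = (\<Sum>n\<in>Gen r. \<Sum>m\<in>Gen r. (\<integral>\<omega>. f (Delta X n \<omega>) * f (Delta X m \<omega>) \<partial>M))"
    unfolding sq using cross by (simp add: Bochner_Integration.integral_sum)
  also have "\<dots> = (\<Sum>n\<in>Gen r. \<Sum>m\<in>Gen r. (\<integral>\<omega>. P3 P f (X n \<omega>) * P3 P f (X m \<omega>) \<partial>M))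
       + (\<Sum>n\<in>Gen r. (\<integral>\<omega>. P3 P (\<lambda>t. (f t)\<^sup>2) (X n \<omega>) - (P3 P f (X n \<omega>))\<^sup>2 \<partial>M))"
    using cross by (simp add: sum.distrib)
  also have "(\<Sum>n\<in>Gen r. \<Sum>m\<in>Gen r. (\<integral>\<omega>. P3 P f (X n \<omega>) * P3 P f (X m \<omega>) \<partial>M))
      = (\<integral>\<omega>. (\<Sum>n\<in>Gen r. P3 P f (X n \<omega>))\<^sup>2 \<partial>M)"
    unfolding sq using prods(2) by (simp add: Bochner_Integration.integral_sum)
  finally show "(\<integral>\<omega>. (\<Sum>n\<in>Gen r. f (Delta X n \<omega>))\<^sup>2 \<partial>M) =
       (\<integral>\<omega>. (\<Sum>n\<in>Gen r. P3 P f (X n \<omega>))\<^sup>2 \<partial>M)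
       + (\<Sum>n\<in>Gen r. (\<integral>\<omega>. P3 P (\<lambda>t. (f t)\<^sup>2) (X n \<omega>) - (P3 P f (X n \<omega>))\<^sup>2 \<partial>M))" .
qed

end

section \<open>Generation sums of functions in \<open>F\<close>\<close>

definition children_sum :: "('a \<Rightarrow> real) \<Rightarrow> 'a \<times> 'a \<times> 'a \<Rightarrow> real" where
  "children_sum g t = g (fst (snd t)) + g (snd (snd t))"

definition gen_sum :: "(nat \<Rightarrow> 'b \<Rightarrow> 'a) \<Rightarrow> nat \<Rightarrow> ('a \<Rightarrow> real) \<Rightarrow> 'b \<Rightarrow> real" where
  "gen_sum X r g \<omega> = (\<Sum>i\<in>Gen r. g (X i \<omega>))"

lemma children_sum_Delta: "children_sum g (Delta X n \<omega>) = g (X (2 * n) \<omega>) + g (X (2 * n + 1) \<omega>)"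
  by (simp add: children_sum_def Delta_def)

lemma gen_sum_Suc: "gen_sum X (Suc r) g \<omega> = (\<Sum>n\<in>Gen r. children_sum g (Delta X n \<omega>))"
  unfolding gen_sum_def sum_Gen_Suc children_sum_Delta ..

locale bifurcating_chain_F = bifurcating_chain M X \<nu> P
  for M :: "'b measure" and X :: "nat \<Rightarrow> 'b \<Rightarrow> 'a::metric_space"
    and \<nu> :: "'a measure" and P :: "'a \<Rightarrow> ('a \<times> 'a) measure" +
  fixes \<mu> :: "'a measure" and F :: "('a \<Rightarrow> real) set"
  assumes subsp: "vector_subspace_B F" and condF: "F_conditions P \<mu> \<nu> F"
begin

abbreviation Q where "Q \<equiv> Qop P"

lemma F_measurable: "g \<in> F \<Longrightarrow> g \<in> borel_measurable borel"
  and F_add: "g \<in> F \<Longrightarrow> h \<in> F \<Longrightarrow> (\<lambda>x. g x + h x) \<in> F"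
  and F_cmult: "g \<in> F \<Longrightarrow> (\<lambda>x. c * g x) \<in> F"
  using subsp unfolding vector_subspace_B_def by auto

lemma F_diff: "g \<in> F \<Longrightarrow> h \<in> F \<Longrightarrow> (\<lambda>x. g x - h x) \<in> F"
  using F_add[of g "\<lambda>x. (-1) * h x"] F_cmult[of h "-1"] by simp

lemma F_const: "(\<lambda>_. c) \<in> F"
  and F_square: "g \<in> F \<Longrightarrow> (\<lambda>x. (g x)\<^sup>2) \<in> F"
  and integrable_tensor: "g \<in> F \<Longrightarrow> h \<in> F \<Longrightarrow> integrable (P x) (tensor g h)"
  and Pop_tensor_F: "g \<in> F \<Longrightarrow> h \<in> F \<Longrightarrow> Pop P (tensor g h) \<in> F"
  and integrable_nu: "g \<in> F \<Longrightarrow> integrable \<nu> g"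
  and Qpow_dominated: "g \<in> F \<Longrightarrow> \<exists>h\<in>F. \<forall>r x. \<bar>(Q ^^ r) g x\<bar> \<le> h x"
  using condF unfolding F_conditions_def by auto

lemma integrable_P_fst: "g \<in> F \<Longrightarrow> integrable (P x) (\<lambda>p. g (fst p))"
  and integrable_P_snd: "g \<in> F \<Longrightarrow> integrable (P x) (\<lambda>p. g (snd p))"
  and integrable_P_fst_snd: "g \<in> F \<Longrightarrow> h \<in> F \<Longrightarrow> integrable (P x) (\<lambda>p. g (fst p) * h (snd p))"
  using integrable_tensor[of g "\<lambda>_. 1" x] integrable_tensor[of "\<lambda>_. 1" g x] integrable_tensor[of g h x]
    F_const[of 1] by (simp_all add: tensor_def split_beta')

lemma Q_eq_Pop: "Q g = (\<lambda>x. (Pop P (tensor g (\<lambda>_. 1)) x + Pop P (tensor (\<lambda>_. 1) g) x) / 2)"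
  by (rule ext) (simp add: Qop_def Pop_def tensor_def case_prod_beta)

lemma Q_in_F: "g \<in> F \<Longrightarrow> Q g \<in> F"
  unfolding Q_eq_Pop
  using F_cmult[OF F_add[OF Pop_tensor_F[OF _ F_const] Pop_tensor_F[OF F_const]], of g g "1/2"]
  by (simp add: field_simps)

lemma Qpow_in_F: "g \<in> F \<Longrightarrow> (Q ^^ r) g \<in> F"
  by (induction r) (auto intro: Q_in_F)

lemma Qpow_linear:
  "g \<in> F \<Longrightarrow> h \<in> F \<Longrightarrow> (Q ^^ r) (\<lambda>x. a * g x + b * h x) = (\<lambda>x. a * (Q ^^ r) g x + b * (Q ^^ r) h x)"
proof (induction r)
  case (Suc r)
  have "Q (\<lambda>x. a * g' x + b * h' x) = (\<lambda>x. a * Q g' x + b * Q h' x)" if "g' \<in> F" "h' \<in> F" for g' h'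
    unfolding Qop_def using that integrable_P_fst integrable_P_snd
    by (auto simp: Bochner_Integration.integral_add field_simps intro!: ext)
  then show ?case
    using Suc by (simp add: Qpow_in_F)
qed simp

lemma Qpow_scale: "g \<in> F \<Longrightarrow> (Q ^^ r) (\<lambda>x. a * g x) = (\<lambda>x. a * (Q ^^ r) g x)"
  using Qpow_linear[of g g r a 0] by simp

lemma Qpow_nonneg: "(\<And>x. 0 \<le> g x) \<Longrightarrow> 0 \<le> (Q ^^ r) g x"
proof (induction r arbitrary: x)
  case (Suc r)
  then show ?case
    unfolding funpow.simps o_def Qop_def by (auto intro!: Bochner_Integration.integral_nonneg add_nonneg_nonneg)
qed simp

lemma Qpow_mono: "g \<in> F \<Longrightarrow> h \<in> F \<Longrightarrow> (\<And>x. g x \<le> h x) \<Longrightarrow> (Q ^^ r) g x \<le> (Q ^^ r) h x"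
  using Qpow_linear[of h g r 1 "-1"] Qpow_nonneg[of "\<lambda>x. 1 * h x + (-1) * g x" r x]
  by (auto dest: fun_cong[where x=x])

lemma abs_Qpow_le: "g \<in> F \<Longrightarrow> h \<in> F \<Longrightarrow> (\<And>x. \<bar>g x\<bar> \<le> h x) \<Longrightarrow> \<bar>(Q ^^ r) g x\<bar> \<le> (Q ^^ r) h x"
proof -
  assume g: "g \<in> F" and h: "h \<in> F" and gh: "\<And>x. \<bar>g x\<bar> \<le> h x"
  have "(\<lambda>x. - g x) \<in> F"
    using F_cmult[OF g, of "-1"] by simp
  then have "(Q ^^ r) (\<lambda>x. - g x) x \<le> (Q ^^ r) h x"
    using gh by (intro Qpow_mono[OF _ h]) (auto simp: abs_le_iff)
  moreover have "(Q ^^ r) (\<lambda>x. - g x) x = - (Q ^^ r) g x"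
    using Qpow_scale[OF g, of r "-1"] by simp
  ultimately show ?thesis
    using Qpow_mono[OF g h, of r x] gh by (auto simp: abs_le_iff)
qed

lemma Pint_children_sum: "g \<in> F \<Longrightarrow> Pint (children_sum g)"
  unfolding Pint_def children_sum_def using F_measurable integrable_P_fst integrable_P_snd by auto

lemma Pint_children_sum_square: "g \<in> F \<Longrightarrow> Pint (\<lambda>t. (children_sum g t)\<^sup>2)"
proof -
  assume g: "g \<in> F"
  have "(\<lambda>p. (g (fst p) + g (snd p))\<^sup>2) = (\<lambda>p. (g (fst p))\<^sup>2 + 2 * (g (fst p) * g (snd p)) + (g (snd p))\<^sup>2)"
    by (simp add: power2_sum fun_eq_iff)
  then show ?thesis
    unfolding Pint_def children_sum_def
    using F_measurable[OF g] integrable_P_fst[OF F_square[OF g]] integrable_P_snd[OF F_square[OF g]]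
      integrable_P_fst_snd[OF g g]
    by auto
qed

lemma P3_children_sum: "g \<in> F \<Longrightarrow> P3 P (children_sum g) = (\<lambda>x. 2 * Q g x)"
  unfolding P3_def children_sum_def Qop_def using integrable_P_fst integrable_P_snd
  by (auto intro!: ext simp: Bochner_Integration.integral_add)

lemma P3_children_sum_square:
  "g \<in> F \<Longrightarrow> P3 P (\<lambda>t. (children_sum g t)\<^sup>2) = (\<lambda>x. 2 * Q (\<lambda>y. (g y)\<^sup>2) x + 2 * Pop P (tensor g g) x)"
proof (rule ext)
  fix x assume g: "g \<in> F"
  have "(children_sum g (x, p))\<^sup>2 = (g (fst p))\<^sup>2 + 2 * (g (fst p) * g (snd p)) + (g (snd p))\<^sup>2" for p
    by (simp add: children_sum_def power2_sum)
  then show "P3 P (\<lambda>t. (children_sum g t)\<^sup>2) x = 2 * Q (\<lambda>y. (g y)\<^sup>2) x + 2 * Pop P (tensor g g) x"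
    unfolding P3_def Qop_def Pop_def
    using integrable_P_fst[OF F_square[OF g]] integrable_P_snd[OF F_square[OF g]] integrable_P_fst_snd[OF g g]
    by (simp add: Bochner_Integration.integral_add tensor_def split_beta' algebra_simps)
qed

text \<open>Every \<open>h \<in> F\<close> is integrable along the tree: by (vi) at the root, and from one generation to
  the next because \<open>\<bar>h\<bar> \<le> (1 + h\<^sup>2) / 2\<close> and \<open>P\<close> maps \<open>F\<close> into \<open>F\<close> by (iii).\<close>

lemma integrable_F_X: "h \<in> F \<Longrightarrow> n \<in> Gen r \<Longrightarrow> integrable M (\<lambda>\<omega>. h (X n \<omega>))"
proof (induction r arbitrary: h n)
  case 0
  then have n: "n = 1" by (simp add: Gen_0)
  have [measurable]: "h \<in> borel_measurable borel"
    using F_measurable[OF 0(1)] .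
  have "integrable (distr M borel (X 1)) h"
    using integrable_nu[OF 0(1)] nu_eq_distr by simp
  then show ?case
    unfolding n by (subst (asm) integrable_distr_eq) auto
next
  case (Suc r)
  note h = Suc.prems(1)
  define k where "k = (\<lambda>x. (1 + (h x)\<^sup>2) / 2)"
  have kF: "k \<in> F"
    unfolding k_def using F_cmult[OF F_add[OF F_const F_square[OF h]], of "1/2" 1] by (simp add: field_simps)
  have hk: "\<bar>h x\<bar> \<le> k x" for x
    using sum_squares_bound[of 1 "\<bar>h x\<bar>"] by (simp add: k_def power2_eq_square)
  have [measurable]: "h \<in> borel_measurable borel"
    using F_measurable[OF h] .
  obtain m where m: "m \<in> Gen r" "n = 2 * m \<or> n = 2 * m + 1"
    using Suc.prems(2) unfolding Gen_Suc by auto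
  have child: "integrable M (\<lambda>\<omega>. hc (Delta X m \<omega>))"
    if hc: "Pint hc" and K: "K \<in> F" and bound: "\<And>x. P3 P (\<lambda>t. \<bar>hc t\<bar>) x \<le> K x" for hc K
  proof (rule integral_Delta(1)[OF m(1) hc])
    show "integrable M (\<lambda>\<omega>. P3 P (\<lambda>t. \<bar>hc t\<bar>) (X m \<omega>))"
      using hc bound P3_nonneg[of "\<lambda>t. \<bar>hc t\<bar>"]
      by (intro Bochner_Integration.integrable_bound[OF Suc.IH[OF K m(1)]])
        (auto intro!: AE_I2 intro: order.trans[OF _ abs_ge_self])
  qed
  have "integrable M (\<lambda>\<omega>. h (fst (snd (Delta X m \<omega>))))"
  proof (rule child)
    show "Pint (\<lambda>t. h (fst (snd t)))"
      unfolding Pint_def using integrable_P_fst[OF h] by auto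
    show "Pop P (tensor k (\<lambda>_. 1)) \<in> F"
      by (rule Pop_tensor_F[OF kF F_const])
    show "P3 P (\<lambda>t. \<bar>h (fst (snd t))\<bar>) x \<le> Pop P (tensor k (\<lambda>_. 1)) x" for x
      unfolding P3_def Pop_def tensor_def using integrable_P_fst[OF h] integrable_P_fst[OF kF] hk
      by (auto simp: split_beta' intro!: integral_mono)
  qed
  moreover have "integrable M (\<lambda>\<omega>. h (snd (snd (Delta X m \<omega>))))"
  proof (rule child)
    show "Pint (\<lambda>t. h (snd (snd t)))"
      unfolding Pint_def using integrable_P_snd[OF h] by auto
    show "Pop P (tensor (\<lambda>_. 1) k) \<in> F"
      by (rule Pop_tensor_F[OF F_const kF])
    show "P3 P (\<lambda>t. \<bar>h (snd (snd t))\<bar>) x \<le> Pop P (tensor (\<lambda>_. 1) k) x" for x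
      unfolding P3_def Pop_def tensor_def using integrable_P_snd[OF h] integrable_P_snd[OF kF] hk
      by (auto simp: split_beta' intro!: integral_mono)
  qed
  ultimately show ?case
    using m(2) by (auto simp: Delta_def)
qed

lemma integral_gen_sum: "g \<in> F \<Longrightarrow> (\<integral>\<omega>. gen_sum X r g \<omega> \<partial>M) = 2 ^ r * (\<integral>x. (Q ^^ r) g x \<partial>\<nu>)"
proof (induction r arbitrary: g)
  case 0
  have [measurable]: "g \<in> borel_measurable borel"
    using F_measurable[OF 0] .
  show ?case
    unfolding gen_sum_def Gen_0 nu_eq_distr by (simp add: integral_distr)
next
  case (Suc r)
  note g = Suc.prems
  have "\<forall>n\<in>Gen r. integrable M (\<lambda>\<omega>. P3 P (\<lambda>t. (children_sum g t)\<^sup>2) (X n \<omega>))"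
    using integrable_F_X P3_children_sum_square[OF g] Q_in_F F_square Pop_tensor_F F_add F_cmult g by simp
  then have "\<forall>n\<in>Gen r. integrable M (\<lambda>\<omega>. P3 P (\<lambda>t. \<bar>children_sum g t\<bar>) (X n \<omega>))"
    using integrable_P3_products(3)[OF Pint_children_sum[OF g] Pint_children_sum_square[OF g]] by blast
  then have "(\<integral>\<omega>. gen_sum X (Suc r) g \<omega> \<partial>M) = (\<integral>\<omega>. (\<Sum>n\<in>Gen r. P3 P (children_sum g) (X n \<omega>)) \<partial>M)"
    unfolding gen_sum_Suc by (rule integral_sum_Gen(2)[OF Pint_children_sum[OF g]])
  also have "\<dots> = 2 * (\<integral>\<omega>. gen_sum X r (Q g) \<omega> \<partial>M)"
    unfolding P3_children_sum[OF g] gen_sum_def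
    by (simp add: sum_distrib_left[symmetric] Bochner_Integration.integral_mult_right_zero)
  also have "\<dots> = 2 ^ Suc r * (\<integral>x. (Q ^^ Suc r) g x \<partial>\<nu>)"
    using Suc.IH[OF Q_in_F[OF g]] by (simp add: funpow_Suc_right del: funpow.simps)
  finally show ?case .
qed

end

section \<open>The variance recursion\<close>

context bifurcating_chain_F
begin

definition children_var :: "('a \<Rightarrow> real) \<Rightarrow> 'a \<Rightarrow> real" where
  "children_var g x = P3 P (\<lambda>t. (children_sum g t)\<^sup>2) x - (P3 P (children_sum g) x)\<^sup>2"

lemma children_var_eq:
  "g \<in> F \<Longrightarrow> children_var g = (\<lambda>x. 2 * Q (\<lambda>y. (g y)\<^sup>2) x + 2 * Pop P (tensor g g) x - 4 * (Q g x)\<^sup>2)"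
  unfolding children_var_def[abs_def] P3_children_sum P3_children_sum_square by (simp add: power_mult_distrib)

lemma children_var_in_F: "g \<in> F \<Longrightarrow> children_var g \<in> F"
  unfolding children_var_eq by (intro F_diff F_add F_cmult Q_in_F F_square Pop_tensor_F)

lemma integrable_P3_children_sum_square:
  "g \<in> F \<Longrightarrow> \<forall>n\<in>Gen r. integrable M (\<lambda>\<omega>. P3 P (\<lambda>t. (children_sum g t)\<^sup>2) (X n \<omega>))"
  unfolding P3_children_sum_square by (auto intro!: integrable_F_X F_add F_cmult Q_in_F F_square Pop_tensor_F)

lemma integral_gen_sum_square_0: "g \<in> F \<Longrightarrow> (\<integral>\<omega>. (gen_sum X 0 g \<omega>)\<^sup>2 \<partial>M) = (\<integral>x. (g x)\<^sup>2 \<partial>\<nu>)"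
  using F_measurable[of g] unfolding gen_sum_def Gen_0 nu_eq_distr by (simp add: integral_distr)

lemma integral_gen_sum_square_Suc:
  assumes g: "g \<in> F"
  shows "(\<integral>\<omega>. (gen_sum X (Suc r) g \<omega>)\<^sup>2 \<partial>M)
       = 4 * (\<integral>\<omega>. (gen_sum X r (Q g) \<omega>)\<^sup>2 \<partial>M) + (\<integral>\<omega>. gen_sum X r (children_var g) \<omega> \<partial>M)"
proof -
  have "(\<Sum>n\<in>Gen r. P3 P (children_sum g) (X n \<omega>))\<^sup>2 = 4 * (gen_sum X r (Q g) \<omega>)\<^sup>2" for \<omega>
    unfolding P3_children_sum[OF g] gen_sum_def by (simp add: sum_distrib_left[symmetric] power_mult_distrib)
  moreover have "(\<Sum>n\<in>Gen r. (\<integral>\<omega>. children_var g (X n \<omega>) \<partial>M)) = (\<integral>\<omega>. gen_sum X r (children_var g) \<omega> \<partial>M)"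
    unfolding gen_sum_def using integrable_F_X[OF children_var_in_F[OF g]]
    by (simp add: Bochner_Integration.integral_sum)
  ultimately show ?thesis
    using integral_sum_Gen_square(2)[OF Pint_children_sum[OF g] Pint_children_sum_square[OF g]
        integrable_P3_children_sum_square[OF g]]
    unfolding gen_sum_Suc children_var_def by simp
qed

lemma abs_integral_gen_sum_le:
  assumes k: "k \<in> F" and h: "h \<in> F" and dom: "\<And>r x. \<bar>(Q ^^ r) k x\<bar> \<le> h x"
  shows "\<bar>\<integral>\<omega>. gen_sum X r k \<omega> \<partial>M\<bar> \<le> 2 ^ r * (\<integral>x. h x \<partial>\<nu>)"
proof -
  have "\<bar>\<integral>x. (Q ^^ r) k x \<partial>\<nu>\<bar> \<le> (\<integral>x. \<bar>(Q ^^ r) k x\<bar> \<partial>\<nu>)"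
    by (rule integral_abs_bound[of \<nu> "(Q ^^ r) k", unfolded real_norm_def])
  also have "\<dots> \<le> (\<integral>x. h x \<partial>\<nu>)"
    by (rule integral_mono) (use integrable_nu[OF Qpow_in_F[OF k]] integrable_nu[OF h] dom in auto)
  finally show ?thesis
    unfolding integral_gen_sum[OF k] by (simp add: abs_mult)
qed

lemma abs_integral_gen_sum_bound:
  assumes "k \<in> F"
  obtains C where "C \<ge> 0" "\<And>r. \<bar>\<integral>\<omega>. gen_sum X r k \<omega> \<partial>M\<bar> \<le> 2 ^ r * C"
proof -
  obtain h where h: "h \<in> F" "\<And>r x. \<bar>(Q ^^ r) k x\<bar> \<le> h x"
    using Qpow_dominated[OF assms] by blast
  have "0 \<le> h x" for x
    using h(2)[of 0 x] by simp
  then have "0 \<le> (\<integral>x. h x \<partial>\<nu>)"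
    by (simp add: Bochner_Integration.integral_nonneg)
  then show ?thesis
    using that abs_integral_gen_sum_le[OF assms h] by blast
qed

definition var_majorant :: "('a \<Rightarrow> real) \<Rightarrow> 'a \<Rightarrow> real" where
  "var_majorant h x = 2 * Q (\<lambda>y. (h y)\<^sup>2) x + 2 * Pop P (tensor h h) x + 4 * (h x)\<^sup>2"

lemma var_majorant_in_F: "h \<in> F \<Longrightarrow> var_majorant h \<in> F"
  unfolding var_majorant_def[abs_def] by (intro F_add F_cmult Q_in_F F_square Pop_tensor_F)

lemma abs_children_var_le:
  assumes g: "g \<in> F" and h: "h \<in> F" "\<And>x. 0 \<le> h x" and c: "0 \<le> c"
    and g_le: "\<And>x. \<bar>g x\<bar> \<le> c * h x" and Qg_le: "\<And>x. \<bar>Q g x\<bar> \<le> c * h x"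
  shows "\<bar>children_var g x\<bar> \<le> c\<^sup>2 * var_majorant h x"
proof -
  have sq_le: "a\<^sup>2 \<le> c\<^sup>2 * b\<^sup>2" if "\<bar>a\<bar> \<le> c * b" for a b :: real
    using power_mono[OF that abs_ge_zero, of 2] by (simp add: power_mult_distrib)
  have "Q (\<lambda>y. (g y)\<^sup>2) x = (Q ^^ 1) (\<lambda>y. (g y)\<^sup>2) x" by simp
  also have "\<dots> \<le> (Q ^^ 1) (\<lambda>y. c\<^sup>2 * (h y)\<^sup>2) x"
    using sq_le[OF g_le] by (intro Qpow_mono F_square F_cmult g h) auto
  finally have Q_sq: "Q (\<lambda>y. (g y)\<^sup>2) x \<le> c\<^sup>2 * Q (\<lambda>y. (h y)\<^sup>2) x"
    using Qpow_scale[OF F_square[OF h(1)], of 1 "c\<^sup>2"] by simp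
  have "0 \<le> Q (\<lambda>y. (g y)\<^sup>2) x"
    using Qpow_nonneg[of "\<lambda>y. (g y)\<^sup>2" 1 x] by simp
  moreover have "\<bar>Pop P (tensor g g) x\<bar> \<le> c\<^sup>2 * Pop P (tensor h h) x"
  proof -
    have "\<bar>Pop P (tensor g g) x\<bar> \<le> (\<integral>p. \<bar>tensor g g p\<bar> \<partial>P x)"
      unfolding Pop_def by (rule integral_abs_bound[of "P x" "tensor g g", unfolded real_norm_def])
    also have "\<dots> \<le> (\<integral>p. c\<^sup>2 * tensor h h p \<partial>P x)"
    proof (rule integral_mono)
      show "integrable (P x) (\<lambda>p. \<bar>tensor g g p\<bar>)" "integrable (P x) (\<lambda>p. c\<^sup>2 * tensor h h p)"
        using integrable_tensor[OF g g] integrable_tensor[OF h(1) h(1)] by auto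
      show "\<bar>tensor g g p\<bar> \<le> c\<^sup>2 * tensor h h p" for p
        unfolding tensor_def using mult_mono[OF g_le[of "fst p"] g_le[of "snd p"]] c h(2)
        by (auto simp: split_beta' abs_mult power2_eq_square algebra_simps)
    qed
    finally show ?thesis
      unfolding Pop_def by simp
  qed
  moreover have "(Q g x)\<^sup>2 \<le> c\<^sup>2 * (h x)\<^sup>2"
    using sq_le[OF Qg_le] .
  ultimately show ?thesis
    unfolding children_var_eq[OF g] var_majorant_def using Q_sq
    by (simp add: abs_le_iff algebra_simps; use zero_le_power2[of "Q g x"] in linarith)
qed

lemma abs_integral_gen_sum_children_var_le:
  assumes h: "h \<in> F" "\<And>x. 0 \<le> h x" and a: "0 \<le> a" "a \<le> 1"
    and h1: "h1 \<in> F" "\<And>r x. \<bar>(Q ^^ r) (var_majorant h) x\<bar> \<le> h1 x"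
    and g: "g \<in> F" and c: "0 \<le> c" and b: "\<And>k x. \<bar>(Q ^^ k) g x\<bar> \<le> c * a ^ k * h x"
  shows "\<bar>\<integral>\<omega>. gen_sum X r (children_var g) \<omega> \<partial>M\<bar> \<le> 2 ^ r * (c\<^sup>2 * (\<integral>x. h1 x \<partial>\<nu>))"
proof -
  have "\<bar>Q g x\<bar> \<le> c * h x" for x
    using b[of 1 x] mult_right_mono[OF mult_left_le[OF a(2) c] h(2)[of x]] by (simp add: mult.assoc)
  then have R: "\<bar>children_var g x\<bar> \<le> c\<^sup>2 * var_majorant h x" for x
    using abs_children_var_le[OF g h c] b[of 0] by simp
  have "\<bar>(Q ^^ k) (children_var g) x\<bar> \<le> c\<^sup>2 * h1 x" for k x
  proof -
    have "\<bar>(Q ^^ k) (children_var g) x\<bar> \<le> (Q ^^ k) (\<lambda>y. c\<^sup>2 * var_majorant h y) x"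
      by (rule abs_Qpow_le[OF children_var_in_F[OF g] F_cmult[OF var_majorant_in_F[OF h(1)]] R])
    also have "\<dots> \<le> c\<^sup>2 * h1 x"
      using h1(2)[of k x] by (simp add: Qpow_scale[OF var_majorant_in_F[OF h(1)]] mult_left_mono)
    finally show ?thesis .
  qed
  then have "\<bar>\<integral>\<omega>. gen_sum X r (children_var g) \<omega> \<partial>M\<bar> \<le> 2 ^ r * (\<integral>x. c\<^sup>2 * h1 x \<partial>\<nu>)"
    by (intro abs_integral_gen_sum_le children_var_in_F g F_cmult h1(1))
  then show ?thesis
    by simp
qed

text \<open>The induction runs over all \<open>g\<close> simultaneously, since the recursion passes from \<open>g\<close> to
  \<open>Q g\<close>, which satisfies the hypothesis with \<open>c * a\<close> in place of \<open>c\<close>.\<close>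

lemma integral_gen_sum_square_le:
  assumes h: "h \<in> F" "\<And>x. 0 \<le> h x" and a: "0 \<le> a" "a \<le> 1"
  obtains K where "K \<ge> 0"
    "\<And>r g c. g \<in> F \<Longrightarrow> 0 \<le> c \<Longrightarrow> (\<And>k x. \<bar>(Q ^^ k) g x\<bar> \<le> c * a ^ k * h x) \<Longrightarrow>
        (\<integral>\<omega>. (gen_sum X r g \<omega>)\<^sup>2 \<partial>M) \<le> c\<^sup>2 * K * 4 ^ r * rho a r"
proof -
  obtain h1 where h1: "h1 \<in> F" "\<And>r x. \<bar>(Q ^^ r) (var_majorant h) x\<bar> \<le> h1 x"
    using Qpow_dominated[OF var_majorant_in_F[OF h(1)]] by blast
  define K where "K = (\<integral>x. (h x)\<^sup>2 \<partial>\<nu>) + (\<integral>x. h1 x \<partial>\<nu>)"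
  have I0: "0 \<le> (\<integral>x. (h x)\<^sup>2 \<partial>\<nu>)" and I1: "0 \<le> (\<integral>x. h1 x \<partial>\<nu>)"
    using h1(2)[of 0] by (auto intro: Bochner_Integration.integral_nonneg order.trans[OF abs_ge_zero])
  have children_var_term: "\<bar>\<integral>\<omega>. gen_sum X r (children_var g) \<omega> \<partial>M\<bar> \<le> 2 ^ r * (c\<^sup>2 * (2 * K))"
    if "g \<in> F" "0 \<le> c" "\<And>k x. \<bar>(Q ^^ k) g x\<bar> \<le> c * a ^ k * h x" for g c r
  proof -
    have "\<bar>\<integral>\<omega>. gen_sum X r (children_var g) \<omega> \<partial>M\<bar> \<le> 2 ^ r * (c\<^sup>2 * (\<integral>x. h1 x \<partial>\<nu>))"
      by (rule abs_integral_gen_sum_children_var_le[OF h a h1 that])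
    also have "\<dots> \<le> 2 ^ r * (c\<^sup>2 * (2 * K))"
      unfolding K_def using I0 I1 by (intro mult_left_mono) auto
    finally show ?thesis .
  qed
  have "(\<integral>\<omega>. (gen_sum X r g \<omega>)\<^sup>2 \<partial>M) \<le> c\<^sup>2 * K * 4 ^ r * rho a r"
    if "g \<in> F" "0 \<le> c" "\<And>k x. \<bar>(Q ^^ k) g x\<bar> \<le> c * a ^ k * h x" for r g c
    using that
  proof (induction r arbitrary: g c)
    case 0
    have "(g y)\<^sup>2 \<le> c\<^sup>2 * (h y)\<^sup>2" for y
      using power_mono[OF "0.prems"(3)[of 0 y, simplified] abs_ge_zero, of 2] by (simp add: power_mult_distrib)
    then have "(\<integral>x. (g x)\<^sup>2 \<partial>\<nu>) \<le> (\<integral>x. c\<^sup>2 * (h x)\<^sup>2 \<partial>\<nu>)"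
      using integrable_nu[OF F_square[OF "0.prems"(1)]] integrable_nu[OF F_square[OF h(1)]]
      by (intro integral_mono) auto
    also have "\<dots> \<le> c\<^sup>2 * K"
      unfolding K_def using I1 by (simp add: mult_left_mono)
    finally show ?case
      using integral_gen_sum_square_0[OF "0.prems"(1)] by simp
  next
    case (Suc r)
    have "\<bar>(Q ^^ k) (Q g) x\<bar> \<le> (c * a) * a ^ k * h x" for k x
      using Suc.prems(3)[of "Suc k" x] by (simp add: funpow_Suc_right mult.assoc del: funpow.simps)
    then have IH: "(\<integral>\<omega>. (gen_sum X r (Q g) \<omega>)\<^sup>2 \<partial>M) \<le> (c * a)\<^sup>2 * K * 4 ^ r * rho a r"
      using Suc.IH[OF Q_in_F[OF Suc.prems(1)]] Suc.prems(2) a(1) by simp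
    have "(\<integral>\<omega>. (gen_sum X (Suc r) g \<omega>)\<^sup>2 \<partial>M)
        \<le> 4 * ((c * a)\<^sup>2 * K * 4 ^ r * rho a r) + 2 ^ r * (c\<^sup>2 * (2 * K))"
      using integral_gen_sum_square_Suc[OF Suc.prems(1), of r] IH children_var_term[OF Suc.prems, of r]
      by linarith
    also have "\<dots> = c\<^sup>2 * K * 4 ^ Suc r * rho a (Suc r)"
    proof -
      have "(4::real) ^ Suc r * (1/2) ^ Suc r = 2 * 2 ^ r"
        by (simp flip: power_mult_distrib)
      then show ?thesis
        by (simp add: algebra_simps power_mult_distrib)
    qed
    finally show ?case .
  qed
  moreover have "0 \<le> K"
    unfolding K_def using I0 I1 by simp
  ultimately show ?thesis
    using that by blast
qed

text \<open>This is where (H1) enters: \<open>P f\<close> is centred, so \<open>\<bar>Q ^^ k (P f)\<bar> \<le> \<alpha> ^ k * h\<close>.\<close>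

lemma second_moment_sum_Gen:
  assumes f: "Pint f" and f2: "Pint (\<lambda>t. (f t)\<^sup>2)"
    and Pf: "P3 P f \<in> F" and Pf2: "P3 P (\<lambda>t. (f t)\<^sup>2) \<in> F"
    and centred: "(\<integral>x. P3 P f x \<partial>\<mu>) = 0" and hyp: "H1 P \<mu> F \<alpha>"
  obtains K where "K \<ge> 0"
    "\<And>r. integrable M (\<lambda>\<omega>. (\<Sum>i\<in>Gen r. f (Delta X i \<omega>))\<^sup>2)"
    "\<And>r. (\<integral>\<omega>. (\<Sum>i\<in>Gen r. f (Delta X i \<omega>))\<^sup>2 \<partial>M) \<le> K * 4 ^ r * rho \<alpha> r"
proof -
  have \<alpha>: "0 < \<alpha>" "\<alpha> < 1"
    using hyp unfolding H1_def by auto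
  obtain h where h: "h \<in> F" "\<And>r x. \<bar>(Q ^^ r) (P3 P f) x\<bar> \<le> \<alpha> ^ r * h x"
    using hyp Pf centred unfolding H1_def by blast
  have "0 \<le> h x" for x
    using h(2)[of 0 x] by simp
  then obtain K where K: "K \<ge> 0"
    "\<And>r g c. g \<in> F \<Longrightarrow> 0 \<le> c \<Longrightarrow> (\<And>k x. \<bar>(Q ^^ k) g x\<bar> \<le> c * \<alpha> ^ k * h x) \<Longrightarrow>
        (\<integral>\<omega>. (gen_sum X r g \<omega>)\<^sup>2 \<partial>M) \<le> c\<^sup>2 * K * 4 ^ r * rho \<alpha> r"
    using integral_gen_sum_square_le[OF h(1)] \<alpha> by (metis less_eq_real_def)
  have mean_term: "(\<integral>\<omega>. (gen_sum X r (P3 P f) \<omega>)\<^sup>2 \<partial>M) \<le> K * 4 ^ r * rho \<alpha> r" for r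
    using K(2)[OF Pf, of 1 r] h(2) by simp
  define v where "v = (\<lambda>x. P3 P (\<lambda>t. (f t)\<^sup>2) x - (P3 P f x)\<^sup>2)"
  have v: "v \<in> F"
    unfolding v_def by (intro F_diff F_square Pf2 Pf)
  obtain C where C: "C \<ge> 0" "\<And>r. \<bar>\<integral>\<omega>. gen_sum X r v \<omega> \<partial>M\<bar> \<le> 2 ^ r * C"
    using abs_integral_gen_sum_bound[OF v] by blast
  have i2: "\<forall>n\<in>Gen r. integrable M (\<lambda>\<omega>. P3 P (\<lambda>t. (f t)\<^sup>2) (X n \<omega>))" for r
    using integrable_F_X[OF Pf2] by auto
  have split: "(\<integral>\<omega>. (\<Sum>i\<in>Gen r. f (Delta X i \<omega>))\<^sup>2 \<partial>M)
      = (\<integral>\<omega>. (gen_sum X r (P3 P f) \<omega>)\<^sup>2 \<partial>M) + (\<integral>\<omega>. gen_sum X r v \<omega> \<partial>M)" for r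
    unfolding integral_sum_Gen_square(2)[OF f f2 i2] gen_sum_def v_def
    using integrable_F_X[OF v[unfolded v_def]] by (simp add: Bochner_Integration.integral_sum)
  have C_le: "2 ^ r * C \<le> C * 4 ^ r * rho \<alpha> r" for r
    using mult_right_mono[OF two_pow_le_four_pow_rho C(1)] by (simp add: mult_ac)
  have "(\<integral>\<omega>. (\<Sum>i\<in>Gen r. f (Delta X i \<omega>))\<^sup>2 \<partial>M) \<le> (K + C) * 4 ^ r * rho \<alpha> r" for r
    unfolding split distrib_right
    using mean_term[of r] C(2)[of r] C_le[of r] abs_ge_self[of "\<integral>\<omega>. gen_sum X r v \<omega> \<partial>M"]
    by linarith
  then show ?thesis
    using that[of "K + C"] K(1) C(1) integral_sum_Gen_square(1)[OF f f2 i2] by simp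
qed

lemma integral_sum_Gen_squares_le:
  assumes f2: "Pint (\<lambda>t. (f t)\<^sup>2)" and Pf2: "P3 P (\<lambda>t. (f t)\<^sup>2) \<in> F"
  obtains C where "C \<ge> 0"
    "\<And>r. integrable M (\<lambda>\<omega>. \<Sum>i\<in>Gen r. (f (Delta X i \<omega>))\<^sup>2)"
    "\<And>r. (\<integral>\<omega>. (\<Sum>i\<in>Gen r. (f (Delta X i \<omega>))\<^sup>2) \<partial>M) \<le> 2 ^ r * C"
proof -
  obtain C where C: "C \<ge> 0" "\<And>r. \<bar>\<integral>\<omega>. gen_sum X r (P3 P (\<lambda>t. (f t)\<^sup>2)) \<omega> \<partial>M\<bar> \<le> 2 ^ r * C"
    using abs_integral_gen_sum_bound[OF Pf2] by blast
  have terms: "integrable M (\<lambda>\<omega>. (f (Delta X i \<omega>))\<^sup>2)"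
    "(\<integral>\<omega>. (f (Delta X i \<omega>))\<^sup>2 \<partial>M) = (\<integral>\<omega>. P3 P (\<lambda>t. (f t)\<^sup>2) (X i \<omega>) \<partial>M)" if "i \<in> Gen r" for i r
    using integral_Delta_nonneg[OF that f2 _ integrable_F_X[OF Pf2 that]] by auto
  then have eq: "(\<integral>\<omega>. (\<Sum>i\<in>Gen r. (f (Delta X i \<omega>))\<^sup>2) \<partial>M) = (\<integral>\<omega>. gen_sum X r (P3 P (\<lambda>t. (f t)\<^sup>2)) \<omega> \<partial>M)" for r
    unfolding gen_sum_def using integrable_F_X[OF Pf2] by (simp add: Bochner_Integration.integral_sum)
  show ?thesis
  proof (rule that[OF C(1)])
    show "integrable M (\<lambda>\<omega>. \<Sum>i\<in>Gen r. (f (Delta X i \<omega>))\<^sup>2)" for r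
      using terms(1) by auto
    show "(\<integral>\<omega>. (\<Sum>i\<in>Gen r. (f (Delta X i \<omega>))\<^sup>2) \<partial>M) \<le> 2 ^ r * C" for r
      using eq[of r] C(2)[of r] by linarith
  qed
qed

end

section \<open>The random permutation\<close>

definition pi_restrict :: "('b \<Rightarrow> nat \<Rightarrow> nat) \<Rightarrow> nat \<Rightarrow> 'b \<Rightarrow> nat \<Rightarrow> nat" where
  "pi_restrict \<pi> R \<omega> = (\<lambda>i. if i \<in> Tr R then \<pi> \<omega> i else i)"

definition agree_Tr :: "nat \<Rightarrow> (nat \<Rightarrow> nat) \<Rightarrow> (nat \<Rightarrow> nat) set" where
  "agree_Tr R \<sigma> = {g. \<forall>i\<in>Tr R. g i = \<sigma> i}"

lemma agree_Tr_sets: "agree_Tr R \<sigma> \<in> sets (Pi\<^sub>M UNIV (\<lambda>_. count_space UNIV))"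
proof -
  have "agree_Tr R \<sigma> = {g \<in> space (Pi\<^sub>M UNIV (\<lambda>_. count_space UNIV)). \<forall>i\<in>Tr R. g i = \<sigma> i}"
    by (simp add: agree_Tr_def space_PiM)
  also have "\<dots> \<in> sets (Pi\<^sub>M UNIV (\<lambda>_. count_space UNIV))"
    by measurable
  finally show ?thesis .
qed

locale bifurcating_chain_perm = bifurcating_chain_F M X \<nu> P \<mu> F
  for M :: "'b measure" and X :: "nat \<Rightarrow> 'b \<Rightarrow> 'a::metric_space"
    and \<nu> :: "'a measure" and P :: "'a \<Rightarrow> ('a \<times> 'a) measure" and \<mu> F +
  fixes \<pi> :: "'b \<Rightarrow> nat \<Rightarrow> nat"
  assumes perm: "random_layer_perm M X \<pi>"
begin

lemma pi_image_Gen: "\<omega> \<in> space M \<Longrightarrow> \<pi> \<omega> ` Gen q = Gen q"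
  and pi_measurable: "\<pi> \<in> M \<rightarrow>\<^sub>M Pi\<^sub>M UNIV (\<lambda>_. count_space UNIV)"
  and X_vector_measurable: "(\<lambda>\<omega> i. X i \<omega>) \<in> M \<rightarrow>\<^sub>M Pi\<^sub>M UNIV (\<lambda>_. borel)"
  and prob_pi_eq: "\<sigma> \<in> layer_perms R \<Longrightarrow>
    prob {\<omega>\<in>space M. \<forall>i\<in>Tr R. \<pi> \<omega> i = \<sigma> i} = 1 / real (card (layer_perms R))"
  and indep_pi_X: "indep_set
       (sigma_sets (space M) {\<pi> -` A \<inter> space M | A. A \<in> sets (Pi\<^sub>M UNIV (\<lambda>_. count_space UNIV))})
       (sigma_sets (space M) {(\<lambda>\<omega> i. X i \<omega>) -` A \<inter> space M | A. A \<in> sets (Pi\<^sub>M UNIV (\<lambda>_. borel))})"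
  using perm unfolding random_layer_perm_def by auto

lemma pi_bij_Gen: "\<omega> \<in> space M \<Longrightarrow> bij_betw (\<pi> \<omega>) (Gen q) (Gen q)"
  using pi_image_Gen eq_card_imp_inj_on[of "Gen q" "\<pi> \<omega>"] by (simp add: bij_betw_def)

lemma pi_restrict_in_layer_perms:
  assumes \<omega>: "\<omega> \<in> space M"
  shows "pi_restrict \<pi> R \<omega> \<in> layer_perms R"
proof -
  let ?s = "pi_restrict \<pi> R \<omega>"
  have img: "?s ` Gen q = Gen q" if "q \<le> R" for q
  proof -
    have "?s ` Gen q = \<pi> \<omega> ` Gen q"
      using Gen_subset_Tr[OF that] unfolding pi_restrict_def by (intro image_cong) auto
    then show ?thesis using pi_image_Gen[OF \<omega>] by simp
  qed
  have "inj_on ?s (Tr R)"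
  proof (rule inj_onI)
    fix i j assume i: "i \<in> Tr R" and j: "j \<in> Tr R" and e: "?s i = ?s j"
    obtain q p where q: "q \<le> R" "i \<in> Gen q" and p: "p \<le> R" "j \<in> Gen p"
      using i j by (auto simp: mem_Tr_iff)
    have e': "\<pi> \<omega> i = \<pi> \<omega> j"
      using e i j unfolding pi_restrict_def by simp
    moreover have "\<pi> \<omega> i \<in> Gen q" "\<pi> \<omega> j \<in> Gen p"
      using q p pi_image_Gen[OF \<omega>] by auto
    ultimately have "p = q"
      using Gen_disjoint[of p q] by auto
    then show "i = j"
      using pi_bij_Gen[OF \<omega>, of q] q p e' by (auto simp: bij_betw_def dest: inj_onD)
  qed
  moreover have "?s ` Tr R = Tr R"
    unfolding Tr_def image_UN using img by simp
  ultimately have "?s permutes Tr R"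
    by (intro bij_imp_permutes) (auto simp: bij_betw_def pi_restrict_def)
  then show ?thesis
    using img unfolding layer_perms_def by auto
qed

lemma pi_in_agree_Tr_iff:
  assumes "\<sigma> \<in> layer_perms R" "\<omega> \<in> space M"
  shows "\<pi> \<omega> \<in> agree_Tr R \<sigma> \<longleftrightarrow> \<sigma> = pi_restrict \<pi> R \<omega>"
proof -
  have "\<sigma> permutes Tr R"
    using assms(1) unfolding layer_perms_def by auto
  then show ?thesis
    using permutes_not_in unfolding agree_Tr_def pi_restrict_def by (auto intro!: ext)
qed

lemma sum_layer_perms_indicator:
  assumes \<omega>: "\<omega> \<in> space M"
  shows "(\<Sum>\<sigma>\<in>layer_perms R. indicator (agree_Tr R \<sigma>) (\<pi> \<omega>) * h \<sigma>) = (h (pi_restrict \<pi> R \<omega>) :: real)"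
proof -
  have "(\<Sum>\<sigma>\<in>layer_perms R. indicator (agree_Tr R \<sigma>) (\<pi> \<omega>) * h \<sigma>)
      = (\<Sum>\<sigma>\<in>layer_perms R. if \<sigma> = pi_restrict \<pi> R \<omega> then h \<sigma> else 0)"
    using pi_in_agree_Tr_iff[OF _ \<omega>] by (intro sum.cong refl) (auto simp: indicator_def)
  then show ?thesis
    using pi_restrict_in_layer_perms[OF \<omega>] finite_layer_perms[of R] by (simp add: sum.delta')
qed

lemma indicator_agree_Tr_measurable [measurable]:
  "(\<lambda>\<omega>. indicator (agree_Tr r \<sigma>) (\<pi> \<omega>) :: real) \<in> borel_measurable M"
  by (rule measurable_compose[OF pi_measurable borel_measurable_indicator[OF agree_Tr_sets]])

lemma prob_agree_Tr:
  "\<sigma> \<in> layer_perms r \<Longrightarrow> prob {\<omega>\<in>space M. \<pi> \<omega> \<in> agree_Tr r \<sigma>} = 1 / real (card (layer_perms r))"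
  using prob_pi_eq[of \<sigma> r] unfolding agree_Tr_def by simp

lemma indep_var_pi_X:
  assumes \<Phi>[measurable]: "\<Phi> \<in> borel_measurable (Pi\<^sub>M UNIV (\<lambda>_. count_space UNIV))"
    and \<Psi>[measurable]: "\<Psi> \<in> borel_measurable (Pi\<^sub>M UNIV (\<lambda>_. borel))"
  shows "indep_var borel (\<lambda>\<omega>. \<Phi> (\<pi> \<omega>) :: real) borel (\<lambda>\<omega>. \<Psi> (\<lambda>i. X i \<omega>) :: real)"
proof -
  define Y1 where "Y1 = (\<lambda>\<omega>. \<Phi> (\<pi> \<omega>) :: real)"
  define Y2 where "Y2 = (\<lambda>\<omega>. \<Psi> (\<lambda>i. X i \<omega>) :: real)"
  have [measurable]: "Y1 \<in> borel_measurable M" "Y2 \<in> borel_measurable M"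
    unfolding Y1_def Y2_def using measurable_compose[OF pi_measurable \<Phi>] measurable_compose[OF X_vector_measurable \<Psi>]
    by (simp_all add: comp_def)
  let ?A = "sigma_sets (space M) {\<pi> -` A \<inter> space M | A. A \<in> sets (Pi\<^sub>M UNIV (\<lambda>_. count_space UNIV))}"
  let ?B = "sigma_sets (space M) {(\<lambda>\<omega> i. X i \<omega>) -` A \<inter> space M | A. A \<in> sets (Pi\<^sub>M UNIV (\<lambda>_. borel))}"
  let ?S = "\<lambda>Y :: 'b \<Rightarrow> real. sigma_sets (space M) {Y -` A \<inter> space M | A. A \<in> sets borel}"
  have "?S Y1 \<subseteq> ?A"
  proof (rule sigma_sets_mono, safe)
    fix A :: "real set" assume "A \<in> sets borel"
    then have "\<Phi> -` A \<inter> space (Pi\<^sub>M UNIV (\<lambda>_. count_space UNIV)) \<in> sets (Pi\<^sub>M UNIV (\<lambda>_. count_space UNIV))"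
      by (rule measurable_sets[OF \<Phi>])
    moreover have "Y1 -` A \<inter> space M = \<pi> -` (\<Phi> -` A \<inter> space (Pi\<^sub>M UNIV (\<lambda>_. count_space UNIV))) \<inter> space M"
      unfolding Y1_def using measurable_space[OF pi_measurable] by auto
    ultimately show "Y1 -` A \<inter> space M \<in> ?A" by blast
  qed
  moreover have "?S Y2 \<subseteq> ?B"
  proof (rule sigma_sets_mono, safe)
    fix A :: "real set" assume "A \<in> sets borel"
    then have "\<Psi> -` A \<inter> space (Pi\<^sub>M UNIV (\<lambda>_. borel)) \<in> sets (Pi\<^sub>M UNIV (\<lambda>_. borel))"
      by (rule measurable_sets[OF \<Psi>])
    moreover have "Y2 -` A \<inter> space M = (\<lambda>\<omega> i. X i \<omega>) -` (\<Psi> -` A \<inter> space (Pi\<^sub>M UNIV (\<lambda>_. borel))) \<inter> space M"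
      unfolding Y2_def using measurable_space[OF X_vector_measurable] by auto
    ultimately show "Y2 -` A \<inter> space M \<in> ?B" by blast
  qed
  moreover have "?S Y1 \<subseteq> events"
    by (rule sets.sigma_sets_subset) auto
  moreover have "?S Y2 \<subseteq> events"
    by (rule sets.sigma_sets_subset) auto
  ultimately have "indep_set (?S Y1) (?S Y2)"
    using indep_pi_X unfolding indep_sets2_eq by (auto simp only: subset_iff)
  then show ?thesis
    unfolding indep_var_eq Y1_def[symmetric] Y2_def[symmetric] by simp
qed

lemma integral_indicator_agree_Tr_mult:
  assumes [measurable]: "\<Psi> \<in> borel_measurable (Pi\<^sub>M UNIV (\<lambda>_. borel))"
    and int: "integrable M (\<lambda>\<omega>. \<Psi> (\<lambda>i. X i \<omega>))"
  shows "(\<integral>\<omega>. indicator (agree_Tr R \<sigma>) (\<pi> \<omega>) * \<Psi> (\<lambda>i. X i \<omega>) \<partial>M)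
        = prob {\<omega>\<in>space M. \<pi> \<omega> \<in> agree_Tr R \<sigma>} * (\<integral>\<omega>. \<Psi> (\<lambda>i. X i \<omega>) \<partial>M)"
proof -
  have ind: "(\<lambda>g. indicator (agree_Tr R \<sigma>) g :: real) \<in> borel_measurable (Pi\<^sub>M UNIV (\<lambda>_. count_space UNIV))"
    by (rule borel_measurable_indicator[OF agree_Tr_sets])
  have "integrable M (\<lambda>\<omega>. indicator (agree_Tr R \<sigma>) (\<pi> \<omega>) :: real)"
    by (rule integrable_const_bound[where B=1, OF _ indicator_agree_Tr_measurable]) (auto simp: indicator_def)
  then have "(\<integral>\<omega>. indicator (agree_Tr R \<sigma>) (\<pi> \<omega>) * \<Psi> (\<lambda>i. X i \<omega>) \<partial>M)
      = (\<integral>\<omega>. indicator (agree_Tr R \<sigma>) (\<pi> \<omega>) \<partial>M) * (\<integral>\<omega>. \<Psi> (\<lambda>i. X i \<omega>) \<partial>M)"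
    using indep_var_pi_X[OF ind] int by (intro indep_var_lebesgue_integral) auto
  moreover have "(\<integral>\<omega>. indicator (agree_Tr R \<sigma>) (\<pi> \<omega>) \<partial>M) = prob {\<omega>\<in>space M. \<pi> \<omega> \<in> agree_Tr R \<sigma>}"
  proof -
    have "(\<integral>\<omega>. indicator (agree_Tr R \<sigma>) (\<pi> \<omega>) \<partial>M) = (\<integral>\<omega>. indicator {\<omega>\<in>space M. \<pi> \<omega> \<in> agree_Tr R \<sigma>} \<omega> \<partial>M)"
      by (intro Bochner_Integration.integral_cong) (auto simp: indicator_def)
    also have "\<dots> = prob {\<omega>\<in>space M. \<pi> \<omega> \<in> agree_Tr R \<sigma>}"
      using measurable_sets[OF pi_measurable agree_Tr_sets] by (simp add: Int_absorb2 subset_eq)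
    finally show ?thesis .
  qed
  ultimately show ?thesis by simp
qed

end

section \<open>Deviation bounds for the three empirical means\<close>

locale bifurcating_chain_test_fun = bifurcating_chain_perm M X \<nu> P \<mu> F \<pi>
  for M :: "'b measure" and X :: "nat \<Rightarrow> 'b \<Rightarrow> 'a::metric_space"
    and \<nu> :: "'a measure" and P :: "'a \<Rightarrow> ('a \<times> 'a) measure" and \<mu> F \<pi> +
  fixes f :: "'a \<times> 'a \<times> 'a \<Rightarrow> real" and \<alpha> :: real
  assumes f: "Pint f" and f2: "Pint (\<lambda>t. (f t)\<^sup>2)"
    and Pf: "P3 P f \<in> F" and Pf2: "P3 P (\<lambda>t. (f t)\<^sup>2) \<in> F"
    and centred: "(\<integral>x. P3 P f x \<partial>\<mu>) = 0" and hyp: "H1 P \<mu> F \<alpha>"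
begin

lemma alpha_pos: "0 < \<alpha>"
  using hyp unfolding H1_def by auto

lemma f_measurable [measurable]: "f \<in> borel_measurable (borel \<Otimes>\<^sub>M borel \<Otimes>\<^sub>M borel)"
  using f by (rule Pint_measurable)

definition Sgen :: "nat \<Rightarrow> 'b \<Rightarrow> real" where
  "Sgen r \<omega> = (\<Sum>i\<in>Gen r. f (Delta X i \<omega>))"

lemma Sgen_measurable [measurable]: "Sgen r \<in> borel_measurable M"
  unfolding Sgen_def[abs_def] by measurable

lemma integrable_f_Delta_square: "j \<in> Gen r \<Longrightarrow> integrable M (\<lambda>\<omega>. (f (Delta X j \<omega>))\<^sup>2)"
  using integral_Delta_nonneg(1)[OF _ f2 _ integrable_F_X[OF Pf2]] by auto

lemma integrable_f_Delta_mult: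
  assumes "j \<in> Gen r" "k \<in> Gen r'"
  shows "integrable M (\<lambda>\<omega>. f (Delta X j \<omega>) * f (Delta X k \<omega>))"
  by (rule integrable_mult_of_square_bounds[OF _ _ integrable_f_Delta_square[OF assms(1)]
        integrable_f_Delta_square[OF assms(2)]]) auto

lemma Sgen_second_moment:
  obtains K where "K \<ge> 0" "\<And>r. integrable M (\<lambda>\<omega>. (Sgen r \<omega>)\<^sup>2)"
    "\<And>r. (\<integral>\<omega>. (Sgen r \<omega>)\<^sup>2 \<partial>M) \<le> K * 4 ^ r * rho \<alpha> r"
proof -
  obtain K where K: "K \<ge> 0" "\<And>r. integrable M (\<lambda>\<omega>. (\<Sum>i\<in>Gen r. f (Delta X i \<omega>))\<^sup>2)"
    "\<And>r. (\<integral>\<omega>. (\<Sum>i\<in>Gen r. f (Delta X i \<omega>))\<^sup>2 \<partial>M) \<le> K * 4 ^ r * rho \<alpha> r"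
    by (rule second_moment_sum_Gen[OF f f2 Pf Pf2 centred hyp]) blast
  show ?thesis
    by (rule that[OF K(1)]) (use K(2,3) in \<open>simp_all add: Sgen_def\<close>)
qed

lemma prob_MG_gt_le:
  "\<exists>c>0. \<forall>\<delta>>0. \<forall>r. (\<alpha>\<^sup>2 = 1/2 \<longrightarrow> r \<ge> 1) \<longrightarrow>
     prob {\<omega>\<in>space M. \<bar>MG X r f \<omega>\<bar> > \<delta>} \<le> c / \<delta>\<^sup>2 * rate_gen \<alpha> r"
proof -
  obtain K where K: "K \<ge> 0" "\<And>r. integrable M (\<lambda>\<omega>. (Sgen r \<omega>)\<^sup>2)"
    "\<And>r. (\<integral>\<omega>. (Sgen r \<omega>)\<^sup>2 \<partial>M) \<le> K * 4 ^ r * rho \<alpha> r"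
    using Sgen_second_moment by blast
  obtain C where C: "C > 0" "\<And>r. (\<alpha>\<^sup>2 = 1/2 \<longrightarrow> r \<ge> 1) \<Longrightarrow> rho \<alpha> r \<le> C * rate_gen \<alpha> r"
    using rho_le_rate_gen[OF alpha_pos] by blast
  have "prob {\<omega>\<in>space M. \<bar>MG X r f \<omega>\<bar> > \<delta>} \<le> (K * C + 1) / \<delta>\<^sup>2 * rate_gen \<alpha> r"
    if "\<delta> > 0" and r: "\<alpha>\<^sup>2 = 1/2 \<longrightarrow> r \<ge> 1" for \<delta> r
  proof (rule divide_rate_bound[OF _ C(2)[OF r] K(1) rate_gen_nonneg])
    have "MG X r f \<omega> = Sgen r \<omega> / 2 ^ r" for \<omega>
      unfolding MG_def Sgen_def card_Gen by simp
    then show "prob {\<omega>\<in>space M. \<bar>MG X r f \<omega>\<bar> > \<delta>} \<le> K * rho \<alpha> r / \<delta>\<^sup>2"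
      using prob_abs_div_gt_le[OF Sgen_measurable K(2) K(3) K(1) rho_nonneg order.refl \<open>\<delta> > 0\<close>]
      by simp
  qed (use alpha_pos in simp)
  moreover have "K * C + 1 > 0"
    using K(1) C(1) by (simp add: add_nonneg_pos)
  ultimately show ?thesis by blast
qed

lemma prob_MT_gt_le:
  "\<exists>c>0. \<forall>\<delta>>0. \<forall>r. (\<alpha>\<^sup>2 = 1/2 \<longrightarrow> r \<ge> 1) \<longrightarrow>
     prob {\<omega>\<in>space M. \<bar>MT X r f \<omega>\<bar> > \<delta>} \<le> c / \<delta>\<^sup>2 * rate_tree \<alpha> r"
proof -
  obtain K where K: "K \<ge> 0" "\<And>r. integrable M (\<lambda>\<omega>. (Sgen r \<omega>)\<^sup>2)"
    "\<And>r. (\<integral>\<omega>. (Sgen r \<omega>)\<^sup>2 \<partial>M) \<le> K * 4 ^ r * rho \<alpha> r"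
    using Sgen_second_moment by blast
  obtain C where C: "C > 0" "\<And>r. (\<alpha>\<^sup>2 = 1/2 \<longrightarrow> r \<ge> 1) \<Longrightarrow> rho \<alpha> r \<le> C * rate_tree \<alpha> r"
    using rho_le_rate_tree[OF alpha_pos] by blast
  define B where "B = 2 / (sqrt 2 - 1)\<^sup>2 * K"
  have B: "0 \<le> B"
    unfolding B_def using K(1) by simp
  note tree = second_moment_sum_generations[OF Sgen_measurable K(2,3,1)]
  have "prob {\<omega>\<in>space M. \<bar>MT X r f \<omega>\<bar> > \<delta>} \<le> (B * C + 1) / \<delta>\<^sup>2 * rate_tree \<alpha> r"
    if "\<delta> > 0" and r: "\<alpha>\<^sup>2 = 1/2 \<longrightarrow> r \<ge> 1" for \<delta> r
  proof (rule divide_rate_bound[OF _ C(2)[OF r] B rate_tree_nonneg])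
    have "MT X r f \<omega> = (\<Sum>q\<le>r. Sgen q \<omega>) / real (card (Tr r))" for \<omega>
      unfolding MT_def Sgen_def sum_Tr ..
    moreover have N: "(2::real) ^ r \<le> real (card (Tr r))"
      unfolding card_Tr by (simp add: of_nat_diff)
    ultimately show "prob {\<omega>\<in>space M. \<bar>MT X r f \<omega>\<bar> > \<delta>} \<le> B * rho \<alpha> r / \<delta>\<^sup>2"
      using prob_abs_div_gt_le[OF _ tree(1) tree(2)[folded B_def] B rho_nonneg N \<open>\<delta> > 0\<close>]
      by simp
  qed (use alpha_pos in simp)
  moreover have "B * C + 1 > 0"
    using B C(1) by (simp add: add_nonneg_pos)
  ultimately show ?thesis by blast
qed

lemma second_moment_sum_lower_generations:
  obtains B where "B \<ge> 0" "\<And>r. integrable M (\<lambda>\<omega>. (\<Sum>q<r. Sgen q \<omega>)\<^sup>2)"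
    "\<And>r. (\<integral>\<omega>. (\<Sum>q<r. Sgen q \<omega>)\<^sup>2 \<partial>M) \<le> B * 4 ^ r * rho \<alpha> r"
proof -
  obtain K where K: "K \<ge> 0" "\<And>r. integrable M (\<lambda>\<omega>. (Sgen r \<omega>)\<^sup>2)"
    "\<And>r. (\<integral>\<omega>. (Sgen r \<omega>)\<^sup>2 \<partial>M) \<le> K * 4 ^ r * rho \<alpha> r"
    using Sgen_second_moment by blast
  define B where "B = 2 / (sqrt 2 - 1)\<^sup>2 * K / \<alpha>\<^sup>2"
  note tree = second_moment_sum_generations[OF Sgen_measurable K(2,3,1)]
  have "integrable M (\<lambda>\<omega>. (\<Sum>q<r. Sgen q \<omega>)\<^sup>2) \<and> (\<integral>\<omega>. (\<Sum>q<r. Sgen q \<omega>)\<^sup>2 \<partial>M) \<le> B * 4 ^ r * rho \<alpha> r" for r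
  proof (cases r)
    case 0
    then show ?thesis
      unfolding B_def using K(1) rho_nonneg[of \<alpha> 0] by simp
  next
    case (Suc r')
    have "\<alpha>\<^sup>2 * rho \<alpha> r' \<le> rho \<alpha> r"
      unfolding Suc by simp
    then have "4 ^ r' * rho \<alpha> r' \<le> 4 ^ r * rho \<alpha> r / \<alpha>\<^sup>2"
      using alpha_pos rho_nonneg[of \<alpha> r'] unfolding Suc
      by (simp add: field_simps mult_mono)
    then have "2 / (sqrt 2 - 1)\<^sup>2 * K * (4 ^ r' * rho \<alpha> r') \<le> 2 / (sqrt 2 - 1)\<^sup>2 * K * (4 ^ r * rho \<alpha> r / \<alpha>\<^sup>2)"
      using K(1) by (intro mult_left_mono) auto
    also have "\<dots> = B * 4 ^ r * rho \<alpha> r"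
      unfolding B_def using alpha_pos by (simp add: field_simps)
    finally have "2 / (sqrt 2 - 1)\<^sup>2 * K * 4 ^ r' * rho \<alpha> r' \<le> B * 4 ^ r * rho \<alpha> r"
      by (simp add: mult.assoc)
    then show ?thesis
      using tree[of r'] unfolding Suc lessThan_Suc_atMost by simp
  qed
  moreover have "0 \<le> B"
    unfolding B_def using K(1) by simp
  ultimately show ?thesis
    using that by blast
qed

text \<open>For \<open>2 ^ r \<le> n < 2 ^ (r + 1)\<close>, the first \<open>n\<close> permuted vertices exhaust the generations below \<open>r\<close>
  and pick the vertices \<open>\<pi> i\<close>, \<open>i \<in> {2 ^ r..n}\<close>, of generation \<open>r\<close>.  The sum over the latter
  is split according to the restriction \<open>\<sigma>\<close> of \<open>\<pi>\<close> to \<open>Tr r\<close>, so that in each term the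
  indicator of \<open>\<sigma>\<close> is independent of \<open>X\<close>.\<close>

definition partial_gen_sum :: "nat \<Rightarrow> nat set \<Rightarrow> 'b \<Rightarrow> real" where
  "partial_gen_sum r I \<omega> =
     (\<Sum>\<sigma>\<in>layer_perms r. indicator (agree_Tr r \<sigma>) (\<pi> \<omega>) * (\<Sum>i\<in>I. f (Delta X (\<sigma> i) \<omega>)))"

lemma partial_gen_sum_measurable [measurable]: "partial_gen_sum r I \<in> borel_measurable M"
  unfolding partial_gen_sum_def[abs_def] by measurable

lemma sum_pi_eq:
  assumes \<omega>: "\<omega> \<in> space M" and n: "1 \<le> n"
  defines "r \<equiv> rgen n"
  shows "(\<Sum>i\<in>{1..n}. f (Delta X (\<pi> \<omega> i) \<omega>)) = (\<Sum>q<r. Sgen q \<omega>) + partial_gen_sum r {2 ^ r..n} \<omega>"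
proof -
  have b: "2 ^ r \<le> n" "n < 2 ^ (r + 1)"
    using rgen_bounds[OF n] unfolding r_def by auto
  then have split: "{1..n} = {1..<2 ^ r} \<union> {2 ^ r..n}"
    by auto
  have "(\<Sum>i\<in>{1..n}. f (Delta X (\<pi> \<omega> i) \<omega>))
      = (\<Sum>i\<in>{1..<2 ^ r}. f (Delta X (\<pi> \<omega> i) \<omega>)) + (\<Sum>i\<in>{2^r..n}. f (Delta X (\<pi> \<omega> i) \<omega>))"
    unfolding split by (rule sum.union_disjoint) auto
  also have "(\<Sum>i\<in>{1..<2 ^ r}. f (Delta X (\<pi> \<omega> i) \<omega>)) = (\<Sum>q<r. Sgen q \<omega>)"
  proof -
    have "(\<Sum>i\<in>{1..<2 ^ r}. f (Delta X (\<pi> \<omega> i) \<omega>)) = (\<Sum>q<r. \<Sum>i\<in>Gen q. f (Delta X (\<pi> \<omega> i) \<omega>))"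
      unfolding UN_Gen_lessThan[symmetric] by (rule sum_UN_Gen) simp
    also have "\<dots> = (\<Sum>q<r. Sgen q \<omega>)"
      unfolding Sgen_def by (intro sum.cong refl sum.reindex_bij_betw pi_bij_Gen[OF \<omega>])
    finally show ?thesis .
  qed
  also have "(\<Sum>i\<in>{2^r..n}. f (Delta X (\<pi> \<omega> i) \<omega>)) = (\<Sum>i\<in>{2^r..n}. f (Delta X (pi_restrict \<pi> r \<omega> i) \<omega>))"
  proof -
    have "{2^r..n} \<subseteq> Tr r"
      using b Gen_subset_Tr[of r r] by (auto simp: Gen_def)
    then show ?thesis
      by (intro sum.cong refl) (auto simp: pi_restrict_def)
  qed
  also have "\<dots> = partial_gen_sum r {2 ^ r..n} \<omega>"
    unfolding partial_gen_sum_def by (rule sum_layer_perms_indicator[OF \<omega>, symmetric])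
  finally show ?thesis .
qed

lemma integral_indicator_agree_Tr_square:
  assumes s: "\<sigma> \<in> layer_perms r"
    and int: "integrable M (\<lambda>\<omega>. (\<Sum>i\<in>I. f (Delta X (\<sigma> i) \<omega>))\<^sup>2)"
  shows "integrable M (\<lambda>\<omega>. indicator (agree_Tr r \<sigma>) (\<pi> \<omega>) * (\<Sum>i\<in>I. f (Delta X (\<sigma> i) \<omega>))\<^sup>2)
    \<and> (\<integral>\<omega>. indicator (agree_Tr r \<sigma>) (\<pi> \<omega>) * (\<Sum>i\<in>I. f (Delta X (\<sigma> i) \<omega>))\<^sup>2 \<partial>M)
      = (\<integral>\<omega>. (\<Sum>i\<in>I. f (Delta X (\<sigma> i) \<omega>))\<^sup>2 \<partial>M) / real (card (layer_perms r))"
proof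
  show "integrable M (\<lambda>\<omega>. indicator (agree_Tr r \<sigma>) (\<pi> \<omega>) * (\<Sum>i\<in>I. f (Delta X (\<sigma> i) \<omega>))\<^sup>2)"
  proof (rule Bochner_Integration.integrable_bound[OF int])
    show "(\<lambda>\<omega>. indicator (agree_Tr r \<sigma>) (\<pi> \<omega>) * (\<Sum>i\<in>I. f (Delta X (\<sigma> i) \<omega>))\<^sup>2) \<in> borel_measurable M"
      by measurable
    show "AE \<omega> in M. norm (indicator (agree_Tr r \<sigma>) (\<pi> \<omega>) * (\<Sum>i\<in>I. f (Delta X (\<sigma> i) \<omega>))\<^sup>2)
        \<le> norm ((\<Sum>i\<in>I. f (Delta X (\<sigma> i) \<omega>))\<^sup>2)"
      by (intro AE_I2) (auto simp: indicator_def)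
  qed
  define \<Psi> where "\<Psi> = (\<lambda>x. (\<Sum>i\<in>I. f (x (\<sigma> i), x (2 * \<sigma> i), x (2 * \<sigma> i + 1)))\<^sup>2)"
  have \<Psi>: "(\<Sum>i\<in>I. f (Delta X (\<sigma> i) \<omega>))\<^sup>2 = \<Psi> (\<lambda>i. X i \<omega>)" for \<omega>
    unfolding \<Psi>_def Delta_def by simp
  have "\<Psi> \<in> borel_measurable (Pi\<^sub>M UNIV (\<lambda>_. borel))"
    unfolding \<Psi>_def by measurable
  from integral_indicator_agree_Tr_mult[OF this, of r \<sigma>]
  show "(\<integral>\<omega>. indicator (agree_Tr r \<sigma>) (\<pi> \<omega>) * (\<Sum>i\<in>I. f (Delta X (\<sigma> i) \<omega>))\<^sup>2 \<partial>M)
      = (\<integral>\<omega>. (\<Sum>i\<in>I. f (Delta X (\<sigma> i) \<omega>))\<^sup>2 \<partial>M) / real (card (layer_perms r))"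
    using int prob_agree_Tr[OF s] unfolding \<Psi> by simp
qed

lemma second_moment_partial_gen_sum:
  assumes I: "I \<subseteq> Gen r"
  shows "integrable M (\<lambda>\<omega>. (partial_gen_sum r I \<omega>)\<^sup>2)"
    and "(\<integral>\<omega>. (partial_gen_sum r I \<omega>)\<^sup>2 \<partial>M)
      \<le> (\<integral>\<omega>. (\<Sum>j\<in>Gen r. (f (Delta X j \<omega>))\<^sup>2) \<partial>M) + (\<integral>\<omega>. (Sgen r \<omega>)\<^sup>2 \<partial>M)"
proof -
  define B where "B = (\<lambda>\<sigma> \<omega>. (\<Sum>i\<in>I. f (Delta X (\<sigma> i) \<omega>))\<^sup>2)"
  define c where "c = (\<lambda>j k. \<integral>\<omega>. f (Delta X j \<omega>) * f (Delta X k \<omega>) \<partial>M)"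
  have B_eq: "B \<sigma> \<omega> = (\<Sum>i\<in>I. \<Sum>i'\<in>I. f (Delta X (\<sigma> i) \<omega>) * f (Delta X (\<sigma> i') \<omega>))" for \<sigma> \<omega>
    unfolding B_def by (simp add: power2_eq_square sum_product)
  have prods: "integrable M (\<lambda>\<omega>. f (Delta X (\<sigma> i) \<omega>) * f (Delta X (\<sigma> i') \<omega>))"
    if "\<sigma> \<in> layer_perms r" "i \<in> I" "i' \<in> I" for \<sigma> i i'
    using that I by (intro integrable_f_Delta_mult) (auto intro: layer_perms_Gen_mem)
  have intB: "integrable M (B \<sigma>)" and intB_eq: "integral\<^sup>L M (B \<sigma>) = (\<Sum>i\<in>I. \<Sum>i'\<in>I. c (\<sigma> i) (\<sigma> i'))"
    if "\<sigma> \<in> layer_perms r" for \<sigma>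
    unfolding B_eq[abs_def] c_def using prods[OF that] by (auto simp: Bochner_Integration.integral_sum)
  have sq: "(partial_gen_sum r I \<omega>)\<^sup>2 = (\<Sum>\<sigma>\<in>layer_perms r. indicator (agree_Tr r \<sigma>) (\<pi> \<omega>) * B \<sigma> \<omega>)"
    if "\<omega> \<in> space M" for \<omega>
    unfolding partial_gen_sum_def B_def sum_layer_perms_indicator[OF that] ..
  have weighted: "integrable M (\<lambda>\<omega>. indicator (agree_Tr r \<sigma>) (\<pi> \<omega>) * B \<sigma> \<omega>)
      \<and> (\<integral>\<omega>. indicator (agree_Tr r \<sigma>) (\<pi> \<omega>) * B \<sigma> \<omega> \<partial>M) = integral\<^sup>L M (B \<sigma>) / real (card (layer_perms r))"
    if s: "\<sigma> \<in> layer_perms r" for \<sigma>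
    unfolding B_def by (rule integral_indicator_agree_Tr_square[OF s intB[OF s, unfolded B_def]])
  have diag: "(\<Sum>j\<in>Gen r. c j j) = (\<integral>\<omega>. (\<Sum>j\<in>Gen r. (f (Delta X j \<omega>))\<^sup>2) \<partial>M)"
    unfolding c_def using integrable_f_Delta_square
    by (simp add: Bochner_Integration.integral_sum power2_eq_square)
  have total: "(\<Sum>j\<in>Gen r. \<Sum>j'\<in>Gen r. c j j') = (\<integral>\<omega>. (Sgen r \<omega>)\<^sup>2 \<partial>M)"
    unfolding c_def Sgen_def power2_eq_square sum_product using integrable_f_Delta_mult
    by (simp add: Bochner_Integration.integral_sum)
  show "integrable M (\<lambda>\<omega>. (partial_gen_sum r I \<omega>)\<^sup>2)"
    using weighted by (subst Bochner_Integration.integrable_cong[OF refl sq]) auto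
  have "(\<integral>\<omega>. (partial_gen_sum r I \<omega>)\<^sup>2 \<partial>M)
      = (\<Sum>\<sigma>\<in>layer_perms r. \<Sum>i\<in>I. \<Sum>i'\<in>I. c (\<sigma> i) (\<sigma> i')) / real (card (layer_perms r))"
    using weighted intB_eq by (simp add: Bochner_Integration.integral_cong[OF refl sq]
        Bochner_Integration.integral_sum sum_divide_distrib)
  also have "\<dots> \<le> (\<Sum>j\<in>Gen r. c j j) + (\<Sum>j\<in>Gen r. \<Sum>j'\<in>Gen r. c j j')"
    by (rule layer_perms_average_le[OF I]) (simp_all add: diag total Bochner_Integration.integral_nonneg sum_nonneg)
  finally show "(\<integral>\<omega>. (partial_gen_sum r I \<omega>)\<^sup>2 \<partial>M)
      \<le> (\<integral>\<omega>. (\<Sum>j\<in>Gen r. (f (Delta X j \<omega>))\<^sup>2) \<partial>M) + (\<integral>\<omega>. (Sgen r \<omega>)\<^sup>2 \<partial>M)"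
    unfolding diag total .
qed


lemma second_moment_lower_plus_partial:
  obtains B where "B \<ge> 0" "\<And>r I. I \<subseteq> Gen r \<Longrightarrow>
      integrable M (\<lambda>\<omega>. ((\<Sum>q<r. Sgen q \<omega>) + partial_gen_sum r I \<omega>)\<^sup>2)"
    "\<And>r I. I \<subseteq> Gen r \<Longrightarrow>
      (\<integral>\<omega>. ((\<Sum>q<r. Sgen q \<omega>) + partial_gen_sum r I \<omega>)\<^sup>2 \<partial>M) \<le> B * 4 ^ r * rho \<alpha> r"
proof -
  obtain K where K: "K \<ge> 0" "\<And>r. integrable M (\<lambda>\<omega>. (Sgen r \<omega>)\<^sup>2)"
    "\<And>r. (\<integral>\<omega>. (Sgen r \<omega>)\<^sup>2 \<partial>M) \<le> K * 4 ^ r * rho \<alpha> r"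
    by (rule Sgen_second_moment) blast
  obtain C where C: "C \<ge> 0" "\<And>r. integrable M (\<lambda>\<omega>. \<Sum>i\<in>Gen r. (f (Delta X i \<omega>))\<^sup>2)"
    "\<And>r. (\<integral>\<omega>. (\<Sum>i\<in>Gen r. (f (Delta X i \<omega>))\<^sup>2) \<partial>M) \<le> 2 ^ r * C"
    by (rule integral_sum_Gen_squares_le[OF f2 Pf2]) blast
  obtain L where L: "L \<ge> 0" "\<And>r. integrable M (\<lambda>\<omega>. (\<Sum>q<r. Sgen q \<omega>)\<^sup>2)"
    "\<And>r. (\<integral>\<omega>. (\<Sum>q<r. Sgen q \<omega>)\<^sup>2 \<partial>M) \<le> L * 4 ^ r * rho \<alpha> r"
    by (rule second_moment_sum_lower_generations) blast
  define B where "B = 2 * L + 2 * C + 2 * K"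
  have bound: "integrable M (\<lambda>\<omega>. ((\<Sum>q<r. Sgen q \<omega>) + partial_gen_sum r I \<omega>)\<^sup>2) \<and>
      (\<integral>\<omega>. ((\<Sum>q<r. Sgen q \<omega>) + partial_gen_sum r I \<omega>)\<^sup>2 \<partial>M) \<le> B * 4 ^ r * rho \<alpha> r"
    if I: "I \<subseteq> Gen r" for r I
  proof
    define T where "T = (\<lambda>\<omega>. \<Sum>q<r. Sgen q \<omega>)"
    define W where "W = partial_gen_sum r I"
    note W = second_moment_partial_gen_sum[OF I, folded W_def]
    have [measurable]: "T \<in> borel_measurable M" "W \<in> borel_measurable M"
      unfolding T_def W_def by measurable
    have T: "integrable M (\<lambda>\<omega>. (T \<omega>)\<^sup>2)" "(\<integral>\<omega>. (T \<omega>)\<^sup>2 \<partial>M) \<le> L * 4 ^ r * rho \<alpha> r"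
      unfolding T_def by (rule L(2), rule L(3))
    note sum_sq = integral_square_add_le[OF _ _ T(1) W(1)]
    show "integrable M (\<lambda>\<omega>. (T \<omega> + W \<omega>)\<^sup>2)"
      using sum_sq(1) by simp
    have "(\<integral>\<omega>. (W \<omega>)\<^sup>2 \<partial>M) \<le> 2 ^ r * C + K * 4 ^ r * rho \<alpha> r"
      using W(2) C(3)[of r] K(3)[of r] by linarith
    then have "(\<integral>\<omega>. (T \<omega> + W \<omega>)\<^sup>2 \<partial>M) \<le> 2 * (L * 4 ^ r * rho \<alpha> r) + 2 * (2 ^ r * C + K * 4 ^ r * rho \<alpha> r)"
      using sum_sq(2) T(2) by simp
    moreover have "2 ^ r * C \<le> C * 4 ^ r * rho \<alpha> r"
      using mult_right_mono[OF two_pow_le_four_pow_rho[of r \<alpha>] C(1)] by (simp add: mult_ac)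
    moreover have "B * 4 ^ r * rho \<alpha> r
        = 2 * (L * 4 ^ r * rho \<alpha> r) + 2 * (C * 4 ^ r * rho \<alpha> r) + 2 * (K * 4 ^ r * rho \<alpha> r)"
      unfolding B_def by (simp add: algebra_simps)
    ultimately show "(\<integral>\<omega>. (T \<omega> + W \<omega>)\<^sup>2 \<partial>M) \<le> B * 4 ^ r * rho \<alpha> r"
      by argo
  qed
  have "B \<ge> 0"
    unfolding B_def using K(1) C(1) L(1) by simp
  then show ?thesis
    by (rule that) (use bound in blast)+
qed

lemma prob_Mpi_gt_le:
  "\<exists>c>0. \<forall>\<delta>>0. \<forall>n\<ge>1. (\<alpha>\<^sup>2 = 1/2 \<longrightarrow> rgen n \<ge> 1) \<longrightarrow>
     prob {\<omega>\<in>space M. \<bar>Mpi X \<pi> n f \<omega>\<bar> > \<delta>} \<le> c / \<delta>\<^sup>2 * rate_tree \<alpha> (rgen n)"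
proof -
  obtain B where B: "B \<ge> 0" "\<And>r I. I \<subseteq> Gen r \<Longrightarrow>
      integrable M (\<lambda>\<omega>. ((\<Sum>q<r. Sgen q \<omega>) + partial_gen_sum r I \<omega>)\<^sup>2)"
    "\<And>r I. I \<subseteq> Gen r \<Longrightarrow>
      (\<integral>\<omega>. ((\<Sum>q<r. Sgen q \<omega>) + partial_gen_sum r I \<omega>)\<^sup>2 \<partial>M) \<le> B * 4 ^ r * rho \<alpha> r"
    using second_moment_lower_plus_partial by blast
  obtain C where C: "C > 0" "\<And>r. (\<alpha>\<^sup>2 = 1/2 \<longrightarrow> r \<ge> 1) \<Longrightarrow> rho \<alpha> r \<le> C * rate_tree \<alpha> r"
    using rho_le_rate_tree[OF alpha_pos] by blast
  have "prob {\<omega>\<in>space M. \<bar>Mpi X \<pi> n f \<omega>\<bar> > \<delta>} \<le> (B * C + 1) / \<delta>\<^sup>2 * rate_tree \<alpha> (rgen n)"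
    if "\<delta> > 0" "1 \<le> n" and r: "\<alpha>\<^sup>2 = 1/2 \<longrightarrow> rgen n \<ge> 1" for \<delta> n
  proof (rule divide_rate_bound[OF _ C(2)[OF r] B(1) rate_tree_nonneg])
    define r where "r = rgen n"
    define Z where "Z = (\<lambda>\<omega>. (\<Sum>q<r. Sgen q \<omega>) + partial_gen_sum r {2 ^ r..n} \<omega>)"
    have b: "2 ^ r \<le> n" "n < 2 ^ (r + 1)"
      using rgen_bounds[OF \<open>1 \<le> n\<close>] unfolding r_def by auto
    then have I: "{2 ^ r..n} \<subseteq> Gen r"
      by (auto simp: Gen_def)
    have "{\<omega>\<in>space M. \<bar>Mpi X \<pi> n f \<omega>\<bar> > \<delta>} = {\<omega>\<in>space M. \<bar>Z \<omega> / real n\<bar> > \<delta>}"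
      using sum_pi_eq[OF _ \<open>1 \<le> n\<close>] unfolding Mpi_def Z_def r_def by auto
    moreover have "(2::real) ^ r \<le> real n"
      using b(1) by (metis of_nat_le_iff of_nat_numeral of_nat_power)
    moreover have "Z \<in> borel_measurable M"
      unfolding Z_def by measurable
    ultimately show "prob {\<omega>\<in>space M. \<bar>Mpi X \<pi> n f \<omega>\<bar> > \<delta>} \<le> B * rho \<alpha> (rgen n) / \<delta>\<^sup>2"
      using prob_abs_div_gt_le[OF _ B(2)[OF I] B(3)[OF I] B(1) rho_nonneg _ \<open>\<delta> > 0\<close>, of "real n"]
      unfolding Z_def r_def by simp
  qed (use alpha_pos in simp)
  moreover have "B * C + 1 > 0"
    using B(1) C(1) by (simp add: add_nonneg_pos)
  ultimately show ?thesis by blast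
qed

end

theorem theorem2p11:
  fixes M :: "'b measure" and X :: "nat \<Rightarrow> 'b \<Rightarrow> 'a::metric_space"
    and \<nu> \<mu> :: "'a measure" and P :: "'a \<Rightarrow> ('a \<times> 'a) measure"
    and \<pi> :: "'b \<Rightarrow> nat \<Rightarrow> nat" and F :: "('a \<Rightarrow> real) set"
    and \<alpha> :: real and f :: "'a \<times> 'a \<times> 'a \<Rightarrow> real"
  assumes BMC: "bifurcating_MC M X \<nu> P"
    and perm: "random_layer_perm M X \<pi>"
    and subsp: "vector_subspace_B F"
    and condF: "F_conditions P \<mu> \<nu> F"
    and hyp1: "H1 P \<mu> F \<alpha>"
    and f_meas: "f \<in> borel_measurable (borel \<Otimes>\<^sub>M borel \<Otimes>\<^sub>M borel)"
    and Pf_ex: "\<forall>x. integrable (P x) (\<lambda>p. f (x, fst p, snd p))"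
    and Pf2_ex: "\<forall>x. integrable (P x) (\<lambda>p. (f (x, fst p, snd p))\<^sup>2)"
    and Pf_F: "P3 P f \<in> F"
    and Pf2_F: "P3 P (\<lambda>t. (f t)\<^sup>2) \<in> F"
    and Pf_centered: "(\<integral>x. P3 P f x \<partial>\<mu>) = 0"
  shows
    "(\<exists>c>0. \<forall>\<delta>>0. \<forall>r. (\<alpha>\<^sup>2 = 1/2 \<longrightarrow> r \<ge> 1) \<longrightarrow>
        measure M {\<omega>\<in>space M. \<bar>MG X r f \<omega>\<bar> > \<delta>}
        \<le> c / \<delta>\<^sup>2 * (if \<alpha>\<^sup>2 < 1/2 then (1/2) ^ r
                      else if \<alpha>\<^sup>2 = 1/2 then real r * (1/2) ^ r
                      else \<alpha> ^ (2*r)))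
   \<and> (\<exists>c>0. \<forall>\<delta>>0. \<forall>n\<ge>1. (\<alpha>\<^sup>2 = 1/2 \<longrightarrow> rgen n \<ge> 1) \<longrightarrow>
        measure M {\<omega>\<in>space M. \<bar>Mpi X \<pi> n f \<omega>\<bar> > \<delta>}
        \<le> c / \<delta>\<^sup>2 * (if \<alpha>\<^sup>2 < 1/2 then (1/2) ^ (rgen n + 1)
                      else if \<alpha>\<^sup>2 = 1/2 then real (rgen n) * (1/2) ^ (rgen n + 1)
                      else \<alpha> ^ (2*(rgen n + 1))))
   \<and> (\<exists>c>0. \<forall>\<delta>>0. \<forall>r. (\<alpha>\<^sup>2 = 1/2 \<longrightarrow> r \<ge> 1) \<longrightarrow>
        measure M {\<omega>\<in>space M. \<bar>MT X r f \<omega>\<bar> > \<delta>}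
        \<le> c / \<delta>\<^sup>2 * (if \<alpha>\<^sup>2 < 1/2 then (1/2) ^ (r + 1)
                      else if \<alpha>\<^sup>2 = 1/2 then real r * (1/2) ^ (r + 1)
                      else \<alpha> ^ (2*(r + 1))))"
proof -
  interpret bifurcating_chain M X \<nu> P
    by (rule bifurcating_chain.intro[OF BMC])
  have "Pint f" "Pint (\<lambda>t. (f t)\<^sup>2)"
    unfolding Pint_def using f_meas Pf_ex Pf2_ex by auto
  then interpret bifurcating_chain_test_fun M X \<nu> P \<mu> F \<pi> f \<alpha>
    by unfold_locales (use BMC subsp condF perm Pf_F Pf2_F Pf_centered hyp1 in auto)
  show ?thesis
    using prob_MG_gt_le prob_Mpi_gt_le prob_MT_gt_le unfolding rate_gen_def rate_tree_def by blast
qed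

end
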